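(* Let $\mathrm{HL}+(\mathrm{cut})$ be $\mathrm{HL}$ enriched with the cut rule: if $H\to A$ and $G\to B$ are graph sequents and $e_0\in E_G$ is an edge with $lab(e_0)=A$, then from $H\to A$ and $G\to B$ infer $G[e_0/H]\to B$. If a graph sequent $F\to B$ is derivable in $\mathrm{HL}+(\mathrm{cut})$, then it is derivable in $\mathrm{HL}$.
   Context: Hypergraphs: given labels $C$ with $type:C\to\mathbb{N}$, a graph is $G=\langle V,E,att,lab,ext\rangle$ with finite $V,E$, $att:E\to V^\circledast$ (strings of pairwise distinct nodes), $lab:E\to C$ with $type(lab(e))=|att(e)|$, $ext\in V^\circledast$; $type(G)=|ext|$; isomorphic graphs identified. Handle $a^\bullet$: one edge labeled $a$ attached to $v_1\dots v_n$, all external in that order. Replacement $G[e/H]$ ($type(e)=type(H)$): remove $e$, insert a disjoint copy of $H$, fuse the $i$-th external node of $H$ with the $i$-th attachment node of $e$; simultaneous replacement $G[e_1/H_1,\dots,e_k/H_k]$; relabeling $G[e:=a]$. $\mathrm{HL}$: fix primitive types $Pr$ with $type:Pr\to\mathbb{N}$ (infinitely many of each arity); symbol $\$$ of any arity. Types: primitives; $N\div D$ where $D$ is a graph with exactly one edge $d_0$ labeled $\$$ and others labeled by types, $type(N)=type(D)$, $type(N\div D)=type_D(d_0)$; $\times(M)$ for a graph $M$ labeled by types (possibly edgeless), $type(\times(M))=type(M)$. Graph sequent $H\to A$: $H$ a type-labeled graph, $A$ a type, $type(H)=type(A)$. Axioms $p^\bullet\to p$ ($p\in Pr$). Rules: $(\div\to)$: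 for a type $N\div D$ with $E_D=\{d_0,\dots,d_k\}$, $lab(d_0)=\$$, and $e\in E_H$ labeled $N$, from $H\to A$, $H_1\to lab(d_1),\dots,H_k\to lab(d_k)$ infer $H[e/D][d_0:=N\div D][d_1/H_1,\dots,d_k/H_k]\to A$; $(\to\div)$: from $D[d_0/F]\to N$ infer $F\to N\div D$; $(\times\to)$: if $e\in E_G$ is labeled $\times(F)$, from $G[e/F]\to A$ infer $G\to A$; $(\to\times)$: with $E_M=\{m_1,\dots,m_l\}$ ($l\ge0$), from $H_i\to lab(m_i)$ for all $i$ infer $M[m_1/H_1,\dots,m_l/H_l]\to\times(M)$. *)

theory Defs
  imports Main
begin

text \<open>A hypergraph: node set, edge set (edge identifiers are naturals),
  attachment and labelling functions (only meaningful on the edge set),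
  and the string of external nodes.\<close>

datatype 'l hgraph =
  HG (gV: "nat set") (gE: "nat set") (gatt: "nat \<Rightarrow> nat list")
     (glab: "nat \<Rightarrow> 'l") (gext: "nat list")

definition wf_graph :: "'l hgraph \<Rightarrow> bool" where
  "wf_graph G \<longleftrightarrow> finite (gV G) \<and> finite (gE G)
     \<and> (\<forall>e\<in>gE G. distinct (gatt G e) \<and> set (gatt G e) \<subseteq> gV G)
     \<and> distinct (gext G) \<and> set (gext G) \<subseteq> gV G"

text \<open>Isomorphism of graphs, where labels are compared up to a relation R
  (used to identify types up to isomorphism of the graphs occurring in them).\<close>

definition giso_rel :: "('a \<Rightarrow> 'b \<Rightarrow> bool) \<Rightarrow> 'a hgraph \<Rightarrow> 'b hgraph \<Rightarrow> bool" where
  "giso_rel R G G' \<longleftrightarrow> (\<exists>f g. bij_betw f (gV G) (gV G') \<and> bij_betw g (gE G) (gE G')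
     \<and> (\<forall>e\<in>gE G. gatt G' (g e) = map f (gatt G e) \<and> R (glab G e) (glab G' (g e)))
     \<and> gext G' = map f (gext G))"

lemma giso_rel_mono[mono]: "R \<le> S \<Longrightarrow> giso_rel R \<le> giso_rel S"
  unfolding giso_rel_def le_fun_def le_bool_def by blast

definition handle :: "'l \<Rightarrow> nat \<Rightarrow> 'l hgraph" where
  "handle a n = HG {0..<n} {0} (\<lambda>_. [0..<n]) (\<lambda>_. a) [0..<n]"

definition voff :: "'l hgraph \<Rightarrow> nat" where
  "voff G = Suc (Max (insert 0 (gV G)))"

definition eoff :: "'l hgraph \<Rightarrow> nat" where
  "eoff G = Suc (Max (insert 0 (gE G)))"

text \<open>Replacement \<open>G[e/H]\<close>: remove e, add a disjoint copy of H (internal nodes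
  shifted by voff G, edges shifted by eoff G), fusing the i-th external node
  of H with the i-th attachment node of e.  Edges of G other than e keep
  their identifiers.\<close>

definition repl :: "'l hgraph \<Rightarrow> nat \<Rightarrow> 'l hgraph \<Rightarrow> 'l hgraph" where
  "repl G e H = (let kV = voff G; kE = eoff G;
     h = (\<lambda>v. case map_of (zip (gext H) (gatt G e)) v of Some w \<Rightarrow> w | None \<Rightarrow> kV + v) in
     HG (gV G \<union> h ` gV H)
        ((gE G - {e}) \<union> (\<lambda>x. kE + x) ` gE H)
        (\<lambda>x. if x < kE then gatt G x else map h (gatt H (x - kE)))
        (\<lambda>x. if x < kE then glab G x else glab H (x - kE))
        (gext G))"

text \<open>Simultaneous replacement \<open>G[e1/H1,...,ek/Hk]\<close> (for distinct edges e_i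
  of G), realised as successive replacement (edge identifiers of untouched
  edges are preserved, so this is the simultaneous replacement).\<close>

definition repls :: "'l hgraph \<Rightarrow> (nat \<times> 'l hgraph) list \<Rightarrow> 'l hgraph" where
  "repls G xs = foldl (\<lambda>G' p. repl G' (fst p) (snd p)) G xs"

definition relab :: "'l hgraph \<Rightarrow> nat \<Rightarrow> 'l \<Rightarrow> 'l hgraph" where
  "relab G e a = HG (gV G) (gE G) (gatt G) ((glab G)(e := a)) (gext G)"

text \<open>Primitive types are elements of 'p with arity function ar.
  \<open>Div N D\<close> is \<open>N \<div> D\<close>, where D is labelled by \<open>'p tp option\<close>, None standing for \$.
  \<open>Times M\<close> is \<open>\<times>(M)\<close>.\<close>

datatype 'p tp = Prim 'p | Div "'p tp" "'p tp option hgraph" | Times "'p tp hgraph"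

fun tp_type :: "('p \<Rightarrow> nat) \<Rightarrow> 'p tp \<Rightarrow> nat" where
  "tp_type ar (Prim p) = ar p"
| "tp_type ar (Div N D) = length (gatt D (SOME d. d \<in> gE D \<and> glab D d = None))"
| "tp_type ar (Times M) = length (gext M)"

inductive wf_tp :: "('p \<Rightarrow> nat) \<Rightarrow> 'p tp \<Rightarrow> bool" for ar where
  wf_Prim: "wf_tp ar (Prim p)"
| wf_Div: "\<lbrakk> wf_tp ar N; wf_graph D; d0 \<in> gE D; glab D d0 = None;
     \<forall>d\<in>gE D - {d0}. \<exists>t. glab D d = Some t \<and> wf_tp ar t \<and> tp_type ar t = length (gatt D d);
     tp_type ar N = length (gext D) \<rbrakk> \<Longrightarrow> wf_tp ar (Div N D)"
| wf_Times: "\<lbrakk> wf_graph M;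
     \<forall>m\<in>gE M. wf_tp ar (glab M m) \<and> tp_type ar (glab M m) = length (gatt M m) \<rbrakk>
     \<Longrightarrow> wf_tp ar (Times M)"

inductive tp_eq :: "'p tp \<Rightarrow> 'p tp \<Rightarrow> bool" where
  "tp_eq (Prim p) (Prim p)"
| "\<lbrakk> tp_eq N N'; giso_rel (rel_option tp_eq) D D' \<rbrakk> \<Longrightarrow> tp_eq (Div N D) (Div N' D')"
| "giso_rel tp_eq M M' \<Longrightarrow> tp_eq (Times M) (Times M')"

definition wf_seq :: "('p \<Rightarrow> nat) \<Rightarrow> 'p tp hgraph \<Rightarrow> 'p tp \<Rightarrow> bool" where
  "wf_seq ar H A \<longleftrightarrow> wf_graph H
     \<and> (\<forall>e\<in>gE H. wf_tp ar (glab H e) \<and> tp_type ar (glab H e) = length (gatt H e))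
     \<and> wf_tp ar A \<and> length (gext H) = tp_type ar A"

text \<open>Every rule requires its conclusion to be a graph sequent; the rule iso
  implements the identification of isomorphic graphs/types.\<close>

inductive deriv :: "('p \<Rightarrow> nat) \<Rightarrow> bool \<Rightarrow> 'p tp hgraph \<Rightarrow> 'p tp \<Rightarrow> bool"
  for ar :: "'p \<Rightarrow> nat" and cut :: bool where
  ax: "deriv ar cut (handle (Prim p) (ar p)) (Prim p)"
| iso: "\<lbrakk> deriv ar cut H A; giso_rel tp_eq H H'; tp_eq A A'; wf_seq ar H' A' \<rbrakk>
     \<Longrightarrow> deriv ar cut H' A'"
| div_left: "\<lbrakk> deriv ar cut H A; e \<in> gE H; glab H e = N; wf_tp ar (Div N D);
     d0 \<in> gE D; glab D d0 = None;
     distinct (map fst ds); set (map fst ds) = gE D - {d0};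
     \<forall>i<length ds. deriv ar cut (snd (ds ! i)) (the (glab D (fst (ds ! i))));
     G = repls (map_hgraph the (relab (repl (map_hgraph Some H) e D) (eoff H + d0) (Some (Div N D))))
               (map (\<lambda>p. (eoff H + fst p, snd p)) ds);
     wf_seq ar G A \<rbrakk>
     \<Longrightarrow> deriv ar cut G A"
| div_right: "\<lbrakk> deriv ar cut (map_hgraph the (repl D d0 (map_hgraph Some F))) N;
     wf_tp ar (Div N D); d0 \<in> gE D; glab D d0 = None; wf_seq ar F (Div N D) \<rbrakk>
     \<Longrightarrow> deriv ar cut F (Div N D)"
| times_left: "\<lbrakk> deriv ar cut (repl G e F) A; e \<in> gE G; glab G e = Times F; wf_seq ar G A \<rbrakk>
     \<Longrightarrow> deriv ar cut G A"
| times_right: "\<lbrakk> distinct (map fst ms); set (map fst ms) = gE M;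
     \<forall>i<length ms. deriv ar cut (snd (ms ! i)) (glab M (fst (ms ! i)));
     wf_tp ar (Times M); G = repls M ms; wf_seq ar G (Times M) \<rbrakk>
     \<Longrightarrow> deriv ar cut G (Times M)"
| cut_rule: "\<lbrakk> cut; deriv ar cut H A; deriv ar cut G B; e0 \<in> gE G; glab G e0 = A;
     wf_seq ar (repl G e0 H) B \<rbrakk>
     \<Longrightarrow> deriv ar cut (repl G e0 H) B"

abbreviation HL :: "('p \<Rightarrow> nat) \<Rightarrow> 'p tp hgraph \<Rightarrow> 'p tp \<Rightarrow> bool" where
  "HL ar \<equiv> deriv ar False"

abbreviation HL_cut :: "('p \<Rightarrow> nat) \<Rightarrow> 'p tp hgraph \<Rightarrow> 'p tp \<Rightarrow> bool" where
  "HL_cut ar \<equiv> deriv ar True"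

end

theory Submission
  imports Defs
begin

text \<open>Every type \<open>A\<close> is cut-admissible: if \<open>H \<rightarrow> A\<close> and \<open>G \<rightarrow> B\<close> are derivable in HL, then so
  is \<open>G[e\<^sub>0/H] \<rightarrow> B\<close> for every edge \<open>e\<^sub>0\<close> of \<open>G\<close> labelled \<open>A\<close>. This goes by induction on \<open>A\<close>
  and, for fixed \<open>A\<close>, on the derivation of \<open>H \<rightarrow> A\<close>. An axiom makes the cut trivial, and a last
  left rule commutes with the cut. After a last right rule \<open>A\<close> is principal on the left, and the
  cut is pushed up the derivation of \<open>G \<rightarrow> B\<close> until \<open>e\<^sub>0\<close> is the edge introduced by \<open>(\<div>\<rightarrow>)\<close>
  or decomposed by \<open>(\<times>\<rightarrow>)\<close>; there it is traded for cuts on the immediate subtypes of \<open>A\<close>.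

  Since graphs are concrete, the identities between iterated replacements that these steps need
  (associativity, commutation of independent replacements, \<dots>) hold only up to isomorphism. All
  of them follow from one fact: a simultaneous replacement, described by embeddings of the host
  graph and of the inserted graphs, is unique up to isomorphism.\<close>

definition iso_via :: "('a \<Rightarrow> 'b \<Rightarrow> bool) \<Rightarrow> (nat \<Rightarrow> nat) \<Rightarrow> (nat \<Rightarrow> nat) \<Rightarrow> 'a hgraph \<Rightarrow> 'b hgraph \<Rightarrow> bool" where
"iso_via R f g G G' \<longleftrightarrow> bij_betw f (gV G) (gV G') \<and> bij_betw g (gE G) (gE G')
  \<and> (\<forall>e\<in>gE G. gatt G' (g e) = map f (gatt G e) \<and> R (glab G e) (glab G' (g e)))
  \<and> gext G' = map f (gext G)"

lemma giso_rel_iff: "giso_rel R G G' \<longleftrightarrow> (\<exists>f g. iso_via R f g G G')"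
  unfolding giso_rel_def iso_via_def by blast

lemma iso_via_mono: "iso_via R f g G G' \<Longrightarrow> (\<And>a b. R a b \<Longrightarrow> S a b) \<Longrightarrow> iso_via S f g G G'"
  unfolding iso_via_def by blast

lemma iso_via_id: "wf_graph G \<Longrightarrow> (\<And>e. e \<in> gE G \<Longrightarrow> R (glab G e) (glab G e)) \<Longrightarrow> iso_via R id id G G"
  unfolding iso_via_def by auto

lemma iso_via_id_eq:
  assumes "gV G = gV G'" "gE G = gE G'" "gext G = gext G'" "\<And>x. x \<in> gE G \<Longrightarrow> gatt G x = gatt G' x \<and> glab G x = glab G' x"
  shows "iso_via (=) id id G G'"
  using assms unfolding iso_via_def by auto

lemma iso_via_edge: "iso_via R f g G G' \<Longrightarrow> e \<in> gE G \<Longrightarrow> g e \<in> gE G'"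
  unfolding iso_via_def bij_betw_def by blast

lemma iso_via_edge_inv: "iso_via R f g G G' \<Longrightarrow> e' \<in> gE G' \<Longrightarrow> \<exists>e\<in>gE G. e' = g e"
  unfolding iso_via_def bij_betw_def by blast

lemma iso_via_inj: "iso_via R f g G G' \<Longrightarrow> e \<in> gE G \<Longrightarrow> e' \<in> gE G \<Longrightarrow> g e = g e' \<Longrightarrow> e = e'"
  unfolding iso_via_def bij_betw_def inj_on_def by blast

lemma iso_via_att: "iso_via R f g G G' \<Longrightarrow> e \<in> gE G \<Longrightarrow> gatt G' (g e) = map f (gatt G e)"
  unfolding iso_via_def by blast

lemma iso_via_lab: "iso_via R f g G G' \<Longrightarrow> e \<in> gE G \<Longrightarrow> R (glab G e) (glab G' (g e))"
  unfolding iso_via_def by blast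

lemma iso_via_ext: "iso_via R f g G G' \<Longrightarrow> gext G' = map f (gext G)"
  unfolding iso_via_def by blast

lemma iso_via_strengthen:
  "iso_via R f g G G' \<Longrightarrow> (\<And>e. e \<in> gE G \<Longrightarrow> P (glab G e) (glab G' (g e))) \<Longrightarrow> iso_via (\<lambda>a b. R a b \<and> P a b) f g G G'"
  unfolding iso_via_def by blast

lemma iso_via_comp:
  assumes "iso_via R f g G G'" "iso_via S f' g' G' G''"
  shows "iso_via (R OO S) (f' \<circ> f) (g' \<circ> g) G G''"
proof -
  have "bij_betw (f' \<circ> f) (gV G) (gV G'')" using assms unfolding iso_via_def by (blast intro: bij_betw_trans)
  moreover have "bij_betw (g' \<circ> g) (gE G) (gE G'')" using assms unfolding iso_via_def by (blast intro: bij_betw_trans)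
  moreover have "\<forall>e\<in>gE G. gatt G'' ((g' \<circ> g) e) = map (f' \<circ> f) (gatt G e) \<and> (R OO S) (glab G e) (glab G'' ((g' \<circ> g) e))"
  proof
    fix e assume e: "e \<in> gE G"
    then have ge: "g e \<in> gE G'" using assms(1) unfolding iso_via_def bij_betw_def by blast
    show "gatt G'' ((g' \<circ> g) e) = map (f' \<circ> f) (gatt G e) \<and> (R OO S) (glab G e) (glab G'' ((g' \<circ> g) e))"
      using assms e ge unfolding iso_via_def by auto
  qed
  moreover have "gext G'' = map (f' \<circ> f) (gext G)" using assms unfolding iso_via_def by simp
  ultimately show ?thesis unfolding iso_via_def by blast
qed

lemma giso_rel_trans:
  "giso_rel R G G' \<Longrightarrow> giso_rel S G' G'' \<Longrightarrow> giso_rel (R OO S) G G''"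
  unfolding giso_rel_iff using iso_via_comp by blast

lemma iso_via_inv:
  assumes "iso_via R f g G G'" "wf_graph G"
  shows "iso_via (\<lambda>a b. R b a) (inv_into (gV G) f) (inv_into (gE G) g) G' G"
proof -
  have bf: "bij_betw f (gV G) (gV G')" and bg: "bij_betw g (gE G) (gE G')"
    and att: "\<And>e. e \<in> gE G \<Longrightarrow> gatt G' (g e) = map f (gatt G e)"
    and lab: "\<And>e. e \<in> gE G \<Longrightarrow> R (glab G e) (glab G' (g e))"
    and ext: "gext G' = map f (gext G)" using assms(1) unfolding iso_via_def by auto
  have bf': "bij_betw (inv_into (gV G) f) (gV G') (gV G)" by (rule bij_betw_inv_into[OF bf])
  have bg': "bij_betw (inv_into (gE G) g) (gE G') (gE G)" by (rule bij_betw_inv_into[OF bg])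
  have injf: "inj_on f (gV G)" using bf unfolding bij_betw_def by blast
  have injg: "inj_on g (gE G)" using bg unfolding bij_betw_def by blast
  have mapinv: "\<And>xs. set xs \<subseteq> gV G \<Longrightarrow> map (inv_into (gV G) f) (map f xs) = xs"
  proof -
    fix xs :: "nat list" assume "set xs \<subseteq> gV G"
    then show "map (inv_into (gV G) f) (map f xs) = xs" by (induct xs) (auto simp: inv_into_f_f[OF injf])
  qed
  have wf: "\<And>e. e \<in> gE G \<Longrightarrow> set (gatt G e) \<subseteq> gV G" "set (gext G) \<subseteq> gV G" using assms(2) unfolding wf_graph_def by auto
  have "\<forall>e'\<in>gE G'. gatt G (inv_into (gE G) g e') = map (inv_into (gV G) f) (gatt G' e')
    \<and> R (glab G (inv_into (gE G) g e')) (glab G' e')"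
  proof
    fix e' assume e': "e' \<in> gE G'"
    then obtain e where e: "e \<in> gE G" "e' = g e" using bg unfolding bij_betw_def by blast
    have ie: "inv_into (gE G) g e' = e" using e injg by (simp add: inv_into_f_f)
    show "gatt G (inv_into (gE G) g e') = map (inv_into (gV G) f) (gatt G' e') \<and> R (glab G (inv_into (gE G) g e')) (glab G' e')"
      using ie e att lab mapinv wf by simp
  qed
  moreover have "gext G = map (inv_into (gV G) f) (gext G')" using ext mapinv wf by simp
  ultimately show ?thesis unfolding iso_via_def using bf' bg' by blast
qed

definition repl_node :: "'a hgraph \<Rightarrow> nat \<Rightarrow> 'b hgraph \<Rightarrow> nat \<Rightarrow> nat" where
"repl_node G e H v = (case map_of (zip (gext H) (gatt G e)) v of Some w \<Rightarrow> w | None \<Rightarrow> voff G + v)"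

lemma gV_repl[simp]: "gV (repl G e H) = gV G \<union> repl_node G e H ` gV H"
  by (simp add: repl_def repl_node_def Let_def)

lemma gE_repl[simp]: "gE (repl G e H) = (gE G - {e}) \<union> (\<lambda>x. eoff G + x) ` gE H"
  by (simp add: repl_def Let_def)

lemma gatt_repl: "gatt (repl G e H) x = (if x < eoff G then gatt G x else map (repl_node G e H) (gatt H (x - eoff G)))"
  by (simp add: repl_def repl_node_def Let_def)

lemma glab_repl: "glab (repl G e H) x = (if x < eoff G then glab G x else glab H (x - eoff G))"
  by (simp add: repl_def Let_def)

lemma gext_repl[simp]: "gext (repl G e H) = gext G"
  by (simp add: repl_def Let_def)

lemma less_voff: "finite (gV G) \<Longrightarrow> v \<in> gV G \<Longrightarrow> v < voff G"
  unfolding voff_def by (simp add: le_imp_less_Suc)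

lemma less_eoff: "finite (gE G) \<Longrightarrow> x \<in> gE G \<Longrightarrow> x < eoff G"
  unfolding eoff_def by (simp add: le_imp_less_Suc)

lemma gatt_repl_host[simp]: "finite (gE G) \<Longrightarrow> x \<in> gE G \<Longrightarrow> gatt (repl G e H) x = gatt G x"
  by (simp add: gatt_repl less_eoff)

lemma glab_repl_host[simp]: "finite (gE G) \<Longrightarrow> x \<in> gE G \<Longrightarrow> glab (repl G e H) x = glab G x"
  by (simp add: glab_repl less_eoff)

lemma gatt_repl_part[simp]: "gatt (repl G e H) (eoff G + y) = map (repl_node G e H) (gatt H y)"
  by (simp add: gatt_repl)

lemma glab_repl_part[simp]: "glab (repl G e H) (eoff G + y) = glab H y"
  by (simp add: glab_repl)

lemma repl_node_ext:
  assumes "distinct (gext H)" "length (gext H) = length (gatt G e)" "i < length (gext H)"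
  shows "repl_node G e H (gext H ! i) = gatt G e ! i"
  using assms by (simp add: repl_node_def map_of_zip_nth)

lemma repl_node_internal:
  assumes "length (gext H) = length (gatt G e)" "v \<notin> set (gext H)"
  shows "repl_node G e H v = voff G + v"
proof -
  have "map_of (zip (gext H) (gatt G e)) v = None" using assms by (simp add: map_of_zip_is_None)
  then show ?thesis by (simp add: repl_node_def)
qed

lemma map_repl_node_ext:
  assumes "distinct (gext H)" "length (gext H) = length (gatt G e)"
  shows "map (repl_node G e H) (gext H) = gatt G e"
  using assms by (auto intro!: nth_equalityI simp: repl_node_ext)

lemma repl_node_ext_in_host:
  assumes "wf_graph G" "e \<in> gE G" "distinct (gext H)" "length (gext H) = length (gatt G e)" "v \<in> set (gext H)"
  shows "repl_node G e H v \<in> gV G"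
proof -
  obtain i where i: "i < length (gext H)" "v = gext H ! i" using assms(5) by (metis in_set_conv_nth)
  then have "repl_node G e H v = gatt G e ! i" using assms repl_node_ext by metis
  moreover have "gatt G e ! i \<in> set (gatt G e)" using i assms(4) by simp
  ultimately show ?thesis using assms(1,2) unfolding wf_graph_def by force
qed

lemma repl_node_internal_notin_host:
  assumes "wf_graph G" "length (gext H) = length (gatt G e)" "v \<notin> set (gext H)"
  shows "repl_node G e H v \<notin> gV G"
  using assms repl_node_internal[OF assms(2,3)] less_voff[of G "voff G + v"] unfolding wf_graph_def by auto

lemma inj_on_repl_node:
  assumes "wf_graph G" "e \<in> gE G" "wf_graph H" "length (gext H) = length (gatt G e)"
  shows "inj_on (repl_node G e H) (gV H)"
proof (rule inj_onI)
  fix v w assume v: "v \<in> gV H" and w: "w \<in> gV H" and eq: "repl_node G e H v = repl_node G e H w"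
  have dH: "distinct (gext H)" and dG: "distinct (gatt G e)" using assms unfolding wf_graph_def by auto
  have ein: "\<And>u. u \<in> set (gext H) \<Longrightarrow> repl_node G e H u \<in> gV G" using repl_node_ext_in_host[OF assms(1,2) dH assms(4)] .
  have eout: "\<And>u. u \<notin> set (gext H) \<Longrightarrow> repl_node G e H u \<notin> gV G" using repl_node_internal_notin_host[OF assms(1,4)] .
  show "v = w"
  proof (cases "v \<in> set (gext H)")
    case a1: True
    show ?thesis
    proof (cases "w \<in> set (gext H)")
      case a2: True
      obtain i where i: "i < length (gext H)" "v = gext H ! i" using a1 by (metis in_set_conv_nth)
      obtain j where j: "j < length (gext H)" "w = gext H ! j" using a2 by (metis in_set_conv_nth)
      have "gatt G e ! i = gatt G e ! j" using eq i j repl_node_ext[OF dH assms(4)] by metis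
      then have "i = j" using dG i j assms(4) by (simp add: nth_eq_iff_index_eq)
      then show ?thesis using i j by simp
    next
      case False then show ?thesis using a1 eq ein eout by metis
    qed
  next
    case a1: False
    show ?thesis
    proof (cases "w \<in> set (gext H)")
      case True then show ?thesis using a1 eq ein eout by metis
    next
      case False then show ?thesis using a1 eq repl_node_internal[OF assms(4)] by simp
    qed
  qed
qed

lemma wf_graph_repl:
  assumes "wf_graph G" "e \<in> gE G" "wf_graph H" "length (gext H) = length (gatt G e)"
  shows "wf_graph (repl G e H)"
proof -
  have inj: "inj_on (repl_node G e H) (gV H)" by (rule inj_on_repl_node[OF assms])
  have fin: "finite (gE G)" using assms(1) unfolding wf_graph_def by auto
  have "\<forall>x\<in>gE (repl G e H). distinct (gatt (repl G e H) x) \<and> set (gatt (repl G e H) x) \<subseteq> gV (repl G e H)"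
  proof
    fix x assume x: "x \<in> gE (repl G e H)"
    show "distinct (gatt (repl G e H) x) \<and> set (gatt (repl G e H) x) \<subseteq> gV (repl G e H)"
    proof (cases "x \<in> gE G - {e}")
      case True then show ?thesis using assms(1) fin unfolding wf_graph_def by auto
    next
      case False
      then obtain y where y: "y \<in> gE H" "x = eoff G + y" using x by auto
      have "distinct (gatt H y)" "set (gatt H y) \<subseteq> gV H" using assms(3) y unfolding wf_graph_def by auto
      then show ?thesis using y inj by (auto simp: distinct_map intro: inj_on_subset)
    qed
  qed
  then show ?thesis using assms unfolding wf_graph_def by auto
qed

lemma repls_Nil[simp]: "repls X [] = X" unfolding repls_def by simp

lemma repls_Cons[simp]: "repls X (p # ds) = repls (repl X (fst p) (snd p)) ds" unfolding repls_def by simp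

lemma gext_repls[simp]: "gext (repls B ds) = gext B"
  by (induction ds arbitrary: B) auto

lemma voff_map[simp]: "voff (map_hgraph f G) = voff G" by (cases G) (simp add: voff_def)

lemma eoff_map[simp]: "eoff (map_hgraph f G) = eoff G" by (cases G) (simp add: eoff_def)

lemma gV_map[simp]: "gV (map_hgraph f G) = gV G" by (cases G) simp

lemma gE_map[simp]: "gE (map_hgraph f G) = gE G" by (cases G) simp

lemma gatt_map[simp]: "gatt (map_hgraph f G) = gatt G" by (cases G) simp

lemma gext_map[simp]: "gext (map_hgraph f G) = gext G" by (cases G) simp

lemma glab_map[simp]: "glab (map_hgraph f G) = f \<circ> glab G" by (cases G) simp

lemma voff_relab[simp]: "voff (relab G e a) = voff G" by (simp add: relab_def voff_def)

lemma eoff_relab[simp]: "eoff (relab G e a) = eoff G" by (simp add: relab_def eoff_def)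

lemma gV_relab[simp]: "gV (relab G e a) = gV G" by (simp add: relab_def)

lemma gE_relab[simp]: "gE (relab G e a) = gE G" by (simp add: relab_def)

lemma gatt_relab[simp]: "gatt (relab G e a) = gatt G" by (simp add: relab_def)

lemma gext_relab[simp]: "gext (relab G e a) = gext G" by (simp add: relab_def)

lemma glab_relab[simp]: "glab (relab G e a) = (glab G)(e := a)" by (simp add: relab_def)

lemma wf_graph_map[simp]: "wf_graph (map_hgraph f G) = wf_graph G" unfolding wf_graph_def by simp

lemma wf_graph_relab[simp]: "wf_graph (relab G e a) = wf_graph G" unfolding wf_graph_def by simp

lemma hgraph_eqI: "gV G = gV G' \<Longrightarrow> gE G = gE G' \<Longrightarrow> gatt G = gatt G' \<Longrightarrow> glab G = glab G' \<Longrightarrow> gext G = gext G' \<Longrightarrow> G = G'"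
  by (cases G; cases G') auto

lemma repl_node_map_hgraph[simp]: "repl_node (map_hgraph f G) e (map_hgraph g H) = repl_node G e H"
  unfolding repl_node_def by (simp add: fun_eq_iff split: option.split)

lemma repl_node_relab_host[simp]: "repl_node (relab G x a) e H = repl_node G e H" unfolding repl_node_def
  by (simp add: fun_eq_iff split: option.split)

lemma repl_node_relab_part[simp]: "repl_node G e (relab H x a) = repl_node G e H" unfolding repl_node_def
  by (simp add: fun_eq_iff split: option.split)

lemma map_repl: "map_hgraph f (repl G e H) = repl (map_hgraph f G) e (map_hgraph f H)"
  by (rule hgraph_eqI) (auto simp: gatt_repl glab_repl fun_eq_iff)

lemma relab_repl_new: "relab (repl G e H) (eoff G + d) a = repl G e (relab H d a)"
  by (rule hgraph_eqI) (auto simp: gatt_repl glab_repl fun_eq_iff)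

lemma map_the_Some: "map_hgraph the (map_hgraph Some K) = K"
  by (cases K) (simp add: comp_def)

lemma handle_simps[simp]: "gV (handle a n) = {0..<n}" "gE (handle a n) = {0}" "gatt (handle a n) x = [0..<n]"
  "glab (handle a n) x = a" "gext (handle a n) = [0..<n]"
  by (simp_all add: handle_def)

lemma wf_handle: "wf_graph (handle a n)" unfolding wf_graph_def by simp

section \<open>Simultaneous replacement\<close>

text \<open>\<open>sim_repl R G S Hs X iG iH jG jH\<close>: \<open>X\<close> is \<open>G\<close> with every edge \<open>s \<in> S\<close> replaced by
  \<open>Hs s\<close>, the nodes of \<open>G\<close> and \<open>Hs s\<close> embedded by \<open>iG\<close> and \<open>iH s\<close>, the remaining edges of \<open>G\<close>
  and the edges of \<open>Hs s\<close> by \<open>jG\<close> and \<open>jH s\<close>, and labels related by \<open>R\<close>.\<close>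

locale sim_repl =
  fixes R :: "'a \<Rightarrow> 'b \<Rightarrow> bool" and G :: "'a hgraph" and S :: "nat set" and Hs :: "nat \<Rightarrow> 'a hgraph"
    and X :: "'b hgraph" and iG :: "nat \<Rightarrow> nat" and iH :: "nat \<Rightarrow> nat \<Rightarrow> nat"
    and jG :: "nat \<Rightarrow> nat" and jH :: "nat \<Rightarrow> nat \<Rightarrow> nat"
  assumes wf_host: "wf_graph G"
    and parts_in_host: "S \<subseteq> gE G"
    and wf_part: "s \<in> S \<Longrightarrow> wf_graph (Hs s)"
    and part_arity: "s \<in> S \<Longrightarrow> length (gext (Hs s)) = length (gatt G s)"
    and result_nodes: "gV X = iG ` gV G \<union> (\<Union>s\<in>S. iH s ` gV (Hs s))"
    and inj_host_nodes: "inj_on iG (gV G)"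
    and inj_part_nodes: "s \<in> S \<Longrightarrow> inj_on (iH s) (gV (Hs s))"
    and part_ext_glued: "s \<in> S \<Longrightarrow> map (iH s) (gext (Hs s)) = map iG (gatt G s)"
    and part_internal_new: "s \<in> S \<Longrightarrow> v \<in> gV (Hs s) \<Longrightarrow> v \<notin> set (gext (Hs s)) \<Longrightarrow> iH s v \<notin> iG ` gV G"
    and part_internal_disjoint: "s \<in> S \<Longrightarrow> t \<in> S \<Longrightarrow> v \<in> gV (Hs s) \<Longrightarrow> v \<notin> set (gext (Hs s))
       \<Longrightarrow> w \<in> gV (Hs t) \<Longrightarrow> w \<notin> set (gext (Hs t)) \<Longrightarrow> iH s v = iH t w \<Longrightarrow> s = t"
    and result_edges: "gE X = jG ` (gE G - S) \<union> (\<Union>s\<in>S. jH s ` gE (Hs s))"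
    and inj_host_edges: "inj_on jG (gE G - S)"
    and inj_part_edges: "s \<in> S \<Longrightarrow> inj_on (jH s) (gE (Hs s))"
    and host_part_edges_disjoint: "x \<in> gE G - S \<Longrightarrow> s \<in> S \<Longrightarrow> y \<in> gE (Hs s) \<Longrightarrow> jG x \<noteq> jH s y"
    and part_edges_disjoint: "s \<in> S \<Longrightarrow> t \<in> S \<Longrightarrow> y \<in> gE (Hs s) \<Longrightarrow> z \<in> gE (Hs t) \<Longrightarrow> jH s y = jH t z \<Longrightarrow> s = t"
    and host_att: "x \<in> gE G - S \<Longrightarrow> gatt X (jG x) = map iG (gatt G x)"
    and host_lab: "x \<in> gE G - S \<Longrightarrow> R (glab G x) (glab X (jG x))"
    and part_att: "s \<in> S \<Longrightarrow> y \<in> gE (Hs s) \<Longrightarrow> gatt X (jH s y) = map (iH s) (gatt (Hs s) y)"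
    and part_lab: "s \<in> S \<Longrightarrow> y \<in> gE (Hs s) \<Longrightarrow> R (glab (Hs s) y) (glab X (jH s y))"
    and result_ext: "gext X = map iG (gext G)"

definition glue_map :: "(nat \<Rightarrow> nat) \<Rightarrow> (nat \<Rightarrow> nat \<Rightarrow> nat) \<Rightarrow> nat set \<Rightarrow> (nat \<Rightarrow> nat set) \<Rightarrow> nat set
   \<Rightarrow> (nat \<Rightarrow> nat) \<Rightarrow> (nat \<Rightarrow> nat \<Rightarrow> nat) \<Rightarrow> nat \<Rightarrow> nat" where
"glue_map i ih A Bs S i' ih' u = (if u \<in> i ` A then i' (inv_into A i u)
   else (let s = (SOME s. s \<in> S \<and> u \<in> ih s ` Bs s) in ih' s (inv_into (Bs s) (ih s) u)))"

lemma glue_map_host: "inj_on i A \<Longrightarrow> a \<in> A \<Longrightarrow> glue_map i ih A Bs S i' ih' (i a) = i' a"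
  unfolding glue_map_def by simp

lemma glue_map_part:
  assumes "s \<in> S" "b \<in> Bs s" "inj_on (ih s) (Bs s)" "ih s b \<notin> i ` A"
    "\<forall>t\<in>S. \<forall>c\<in>Bs t. ih t c = ih s b \<longrightarrow> t = s"
  shows "glue_map i ih A Bs S i' ih' (ih s b) = ih' s b"
proof -
  have ex: "\<exists>t. t \<in> S \<and> ih s b \<in> ih t ` Bs t" using assms(1,2) by blast
  define t where "t = (SOME t. t \<in> S \<and> ih s b \<in> ih t ` Bs t)"
  have t: "t \<in> S \<and> ih s b \<in> ih t ` Bs t" unfolding t_def by (rule someI_ex[OF ex])
  then obtain c where "c \<in> Bs t" "ih s b = ih t c" by blast
  then have "t = s" using assms(5) t by metis
  then show ?thesis using assms(4) unfolding glue_map_def t_def[symmetric] Let_def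
    using assms(2,3) by simp
qed

context sim_repl
begin

lemma att_in_host: "s \<in> S \<Longrightarrow> set (gatt G s) \<subseteq> gV G"
  using wf_host parts_in_host unfolding wf_graph_def by blast

lemma part_ext_node:
  assumes "s \<in> S" "k < length (gext (Hs s))"
  shows "iH s (gext (Hs s) ! k) = iG (gatt G s ! k)" "gatt G s ! k \<in> gV G"
proof -
  have "map (iH s) (gext (Hs s)) ! k = map iG (gatt G s) ! k" using part_ext_glued[OF assms(1)] by simp
  then show "iH s (gext (Hs s) ! k) = iG (gatt G s ! k)" using assms part_arity by simp
  show "gatt G s ! k \<in> gV G" using att_in_host[OF assms(1)] assms part_arity by (metis nth_mem subsetD)
qed

lemma wf_graph_result: "wf_graph X"
proof -
  have finS: "finite S" using parts_in_host wf_host unfolding wf_graph_def by (metis finite_subset)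
  have fV: "finite (gV X)" unfolding result_nodes using finS wf_host wf_part unfolding wf_graph_def by auto
  have fE: "finite (gE X)" unfolding result_edges using finS wf_host wf_part unfolding wf_graph_def by auto
  have att: "distinct (gatt X e) \<and> set (gatt X e) \<subseteq> gV X" if "e \<in> gE X" for e
  proof -
    from that consider (host) x where "x \<in> gE G - S" "e = jG x"
      | (part) s y where "s \<in> S" "y \<in> gE (Hs s)" "e = jH s y"
      unfolding result_edges by blast
    then show ?thesis
    proof cases
      case host
      have "distinct (gatt G x)" "set (gatt G x) \<subseteq> gV G" using wf_host host(1) unfolding wf_graph_def by auto
      then show ?thesis using host host_att[OF host(1)] inj_host_nodes unfolding result_nodes
        by (auto simp: distinct_map intro: inj_on_subset)
    next
      case part
      have "distinct (gatt (Hs s) y)" "set (gatt (Hs s) y) \<subseteq> gV (Hs s)"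
        using wf_part[OF part(1)] part(2) unfolding wf_graph_def by auto
      then show ?thesis using part part_att[OF part(1,2)] inj_part_nodes[OF part(1)] unfolding result_nodes
        by (auto simp: distinct_map intro: inj_on_subset)
    qed
  qed
  have "distinct (gext G)" "set (gext G) \<subseteq> gV G" using wf_host unfolding wf_graph_def by auto
  then have "distinct (gext X) \<and> set (gext X) \<subseteq> gV X"
    using result_ext inj_host_nodes unfolding result_nodes by (auto simp: distinct_map intro: inj_on_subset)
  then show ?thesis using fV fE att unfolding wf_graph_def by blast
qed

lemma glue_map_nodes:
  assumes Y: "sim_repl R2 G S Hs Y iG' iH' jG' jH'"
  defines "f \<equiv> glue_map iG iH (gV G) (\<lambda>s. gV (Hs s)) S iG' iH'"
  shows "\<And>v. v \<in> gV G \<Longrightarrow> f (iG v) = iG' v"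
    and "\<And>s w. s \<in> S \<Longrightarrow> w \<in> gV (Hs s) \<Longrightarrow> f (iH s w) = iH' s w"
proof -
  show host: "\<And>v. v \<in> gV G \<Longrightarrow> f (iG v) = iG' v" unfolding f_def using glue_map_host inj_host_nodes by metis
  fix s w assume s: "s \<in> S" and w: "w \<in> gV (Hs s)"
  show "f (iH s w) = iH' s w"
  proof (cases "w \<in> set (gext (Hs s))")
    case True
    then obtain k where k: "k < length (gext (Hs s))" "w = gext (Hs s) ! k" by (metis in_set_conv_nth)
    show ?thesis
      using part_ext_node[OF s k(1)] sim_repl.part_ext_node(1)[OF Y s k(1)] host k(2) by simp
  next
    case False
    have new: "iH s w \<notin> iG ` gV G" using part_internal_new[OF s w False] .
    have "t = s" if t: "t \<in> S" and c: "c \<in> gV (Hs t)" and eq: "iH t c = iH s w" for t c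
    proof (cases "c \<in> set (gext (Hs t))")
      case True
      then obtain k where "k < length (gext (Hs t))" "c = gext (Hs t) ! k" by (metis in_set_conv_nth)
      then show ?thesis using part_ext_node[OF t] eq new by (metis image_eqI)
    next
      case False
      show ?thesis using part_internal_disjoint[OF t s c False w \<open>w \<notin> set (gext (Hs s))\<close> eq] .
    qed
    then show ?thesis
      unfolding f_def by (intro glue_map_part[where ih=iH and Bs="\<lambda>s. gV (Hs s)", OF s w inj_part_nodes[OF s] new]) blast
  qed
qed

lemma glue_map_edges:
  assumes Y: "sim_repl R2 G S Hs Y iG' iH' jG' jH'"
  defines "g \<equiv> glue_map jG jH (gE G - S) (\<lambda>s. gE (Hs s)) S jG' jH'"
  shows "\<And>x. x \<in> gE G - S \<Longrightarrow> g (jG x) = jG' x"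
    and "\<And>s y. s \<in> S \<Longrightarrow> y \<in> gE (Hs s) \<Longrightarrow> g (jH s y) = jH' s y"
proof -
  show "\<And>x. x \<in> gE G - S \<Longrightarrow> g (jG x) = jG' x" unfolding g_def using glue_map_host inj_host_edges by metis
  fix s y assume s: "s \<in> S" and y: "y \<in> gE (Hs s)"
  have "jH s y \<notin> jG ` (gE G - S)" using host_part_edges_disjoint[OF _ s y] by (metis imageE)
  moreover have "\<forall>t\<in>S. \<forall>c\<in>gE (Hs t). jH t c = jH s y \<longrightarrow> t = s" using part_edges_disjoint s y by metis
  ultimately show "g (jH s y) = jH' s y"
    unfolding g_def by (rule glue_map_part[where ih=jH and Bs="\<lambda>s. gE (Hs s)", OF s y inj_part_edges[OF s]])
qed

lemma result_unique:
  assumes Y: "sim_repl R2 G S Hs Y iG' iH' jG' jH'"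
  shows "\<exists>f g. iso_via (R\<inverse>\<inverse> OO R2) f g X Y"
proof -
  interpret Y: sim_repl R2 G S Hs Y iG' iH' jG' jH' by (rule Y)
  have X: "sim_repl R G S Hs X iG iH jG jH" by unfold_locales
  define f where "f = glue_map iG iH (gV G) (\<lambda>s. gV (Hs s)) S iG' iH'"
  define f' where "f' = glue_map iG' iH' (gV G) (\<lambda>s. gV (Hs s)) S iG iH"
  define g where "g = glue_map jG jH (gE G - S) (\<lambda>s. gE (Hs s)) S jG' jH'"
  define g' where "g' = glue_map jG' jH' (gE G - S) (\<lambda>s. gE (Hs s)) S jG jH"
  note f = glue_map_nodes[OF Y, folded f_def] and f' = Y.glue_map_nodes[OF X, folded f'_def]
  note g = glue_map_edges[OF Y, folded g_def] and g' = Y.glue_map_edges[OF X, folded g'_def]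
  have bf: "bij_betw f (gV X) (gV Y)"
    by (rule bij_betw_byWitness[where f'=f']) (use f f' in \<open>auto simp: result_nodes Y.result_nodes\<close>)
  have bg: "bij_betw g (gE X) (gE Y)"
    by (rule bij_betw_byWitness[where f'=g']) (use g g' in \<open>auto simp: result_edges Y.result_edges\<close>)
  have ae: "gatt Y (g e) = map f (gatt X e) \<and> (R\<inverse>\<inverse> OO R2) (glab X e) (glab Y (g e))" if "e \<in> gE X" for e
  proof -
    from that consider (host) x where "x \<in> gE G - S" "e = jG x"
      | (part) s y where "s \<in> S" "y \<in> gE (Hs s)" "e = jH s y"
      unfolding result_edges by blast
    then show ?thesis
    proof cases
      case host
      have "set (gatt G x) \<subseteq> gV G" using wf_host host(1) unfolding wf_graph_def by blast
      then have "map f (gatt X e) = map iG' (gatt G x)" using host host_att f(1) by auto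
      moreover have "(R\<inverse>\<inverse> OO R2) (glab X (jG x)) (glab Y (jG' x))"
        using host_lab[OF host(1)] Y.host_lab[OF host(1)] by blast
      ultimately show ?thesis using host g(1) Y.host_att by auto
    next
      case part
      have "set (gatt (Hs s) y) \<subseteq> gV (Hs s)" using wf_part[OF part(1)] part(2) unfolding wf_graph_def by blast
      then have "map f (gatt X e) = map (iH' s) (gatt (Hs s) y)" using part part_att f(2) by auto
      moreover have "(R\<inverse>\<inverse> OO R2) (glab X (jH s y)) (glab Y (jH' s y))"
        using part_lab[OF part(1,2)] Y.part_lab[OF part(1,2)] by blast
      ultimately show ?thesis using part g(2) Y.part_att by auto
    qed
  qed
  have "set (gext G) \<subseteq> gV G" using wf_host unfolding wf_graph_def by blast
  then have "gext Y = map f (gext X)" using result_ext Y.result_ext f(1) by auto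
  then show ?thesis unfolding iso_via_def using bf bg ae by blast
qed

end

lemma sim_repl_iso:
  assumes "iso_via R f g G G'" "wf_graph G"
  shows "sim_repl R G {} Hs G' f iH g jH"
  by unfold_locales (use assms in \<open>auto simp: iso_via_def bij_betw_def\<close>)

lemma wf_graph_iso: "iso_via R f g G G' \<Longrightarrow> wf_graph G \<Longrightarrow> wf_graph G'"
  using sim_repl.wf_graph_result[OF sim_repl_iso] by blast

context sim_repl
begin

lemma host_node_in_result: "v \<in> gV G \<Longrightarrow> iG v \<in> gV X"
  unfolding result_nodes by blast

lemma part_node_in_result: "s \<in> S \<Longrightarrow> v \<in> gV (Hs s) \<Longrightarrow> iH s v \<in> gV X"
  unfolding result_nodes by blast

lemma host_edge_in_result: "x \<in> gE G - S \<Longrightarrow> jG x \<in> gE X"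
  unfolding result_edges by blast

lemma part_edge_in_result: "s \<in> S \<Longrightarrow> y \<in> gE (Hs s) \<Longrightarrow> jH s y \<in> gE X"
  unfolding result_edges by blast

lemma finite_result_edges: "finite (gE X)"
  using wf_graph_result unfolding wf_graph_def by blast

lemma repl_host_edge:
  assumes e: "e \<in> gE G" "e \<notin> S"
    and H0: "wf_graph H0" "length (gext H0) = length (gatt G e)"
    and iso: "iso_via R \<phi> \<psi> H0 H"
  shows "sim_repl R G (insert e S) (Hs(e := H0)) (repl X (jG e) H)
     iG (iH(e := repl_node X (jG e) H \<circ> \<phi>)) jG (jH(e := \<lambda>y. eoff X + \<psi> y))"
proof -
  define e' where "e' = jG e"
  define h where "h = repl_node X e' H"
  have wfH: "wf_graph H" by (rule wf_graph_iso[OF iso H0(1)])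
  have eS: "e \<in> gE G - S" using e by blast
  have e'X: "e' \<in> gE X" unfolding e'_def using host_edge_in_result[OF eS] .
  have attX: "gatt X e' = map iG (gatt G e)" unfolding e'_def by (rule host_att[OF eS])
  have bphi: "bij_betw \<phi> (gV H0) (gV H)" and bpsi: "bij_betw \<psi> (gE H0) (gE H)"
    and extH: "gext H = map \<phi> (gext H0)" and attH: "\<And>y. y \<in> gE H0 \<Longrightarrow> gatt H (\<psi> y) = map \<phi> (gatt H0 y)"
    and labH: "\<And>y. y \<in> gE H0 \<Longrightarrow> R (glab H0 y) (glab H (\<psi> y))"
    using iso unfolding iso_via_def by auto
  have len: "length (gext H) = length (gatt X e')" using extH attX H0(2) by simp
  have hinj: "inj_on h (gV H)" unfolding h_def by (rule inj_on_repl_node[OF wf_graph_result e'X wfH len])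
  have hext: "map h (gext H) = gatt X e'"
    unfolding h_def by (rule map_repl_node_ext[OF _ len]) (use wfH in \<open>simp add: wf_graph_def\<close>)
  have VH: "gV H = \<phi> ` gV H0" using bphi unfolding bij_betw_def by blast
  have new_internal: "h (\<phi> w) \<notin> gV X" if "w \<in> gV H0" "w \<notin> set (gext H0)" for w
  proof -
    have "\<phi> w \<notin> set (gext H)"
    proof
      assume "\<phi> w \<in> set (gext H)"
      then obtain w' where "w' \<in> set (gext H0)" "\<phi> w = \<phi> w'" using extH by auto
      then show False using that H0(1) bphi unfolding wf_graph_def bij_betw_def inj_on_def by blast
    qed
    then show ?thesis
      unfolding h_def using repl_node_internal_notin_host[OF wf_graph_result len] VH that(1) by blast
  qed
  have old_edge_less: "x \<in> gE X \<Longrightarrow> x < eoff X" for x using less_eoff[OF finite_result_edges] .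
  have part_cases: "s = e \<or> s \<in> S" if "s \<in> insert e S" for s using that by blast
  show ?thesis
    unfolding e'_def[symmetric] h_def[symmetric]
  proof unfold_locales
    show "insert e S \<subseteq> gE G" using e parts_in_host by blast
  next
    fix s assume s: "s \<in> insert e S"
    show "wf_graph ((Hs(e := H0)) s)" using s H0 wf_part by auto
    show "length (gext ((Hs(e := H0)) s)) = length (gatt G s)" using s H0 part_arity by auto
    have "inj_on (h \<circ> \<phi>) (gV H0)" using hinj bphi VH by (metis bij_betw_def comp_inj_on)
    then show "inj_on ((iH(e := h \<circ> \<phi>)) s) (gV ((Hs(e := H0)) s))" using s inj_part_nodes by auto
    show "map ((iH(e := h \<circ> \<phi>)) s) (gext ((Hs(e := H0)) s)) = map iG (gatt G s)"
      using s hext extH attX part_ext_glued by auto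
    have "inj_on \<psi> (gE H0)" using bpsi unfolding bij_betw_def by blast
    then show "inj_on ((jH(e := \<lambda>y. eoff X + \<psi> y)) s) (gE ((Hs(e := H0)) s))"
      using s inj_part_edges by (auto simp: inj_on_def)
  next
    fix s v assume s: "s \<in> insert e S"
      and v: "v \<in> gV ((Hs(e := H0)) s)" "v \<notin> set (gext ((Hs(e := H0)) s))"
    show "(iH(e := h \<circ> \<phi>)) s v \<notin> iG ` gV G"
    proof (cases "s = e")
      case True
      then have "h (\<phi> v) \<notin> gV X" using new_internal v by auto
      then show ?thesis using True host_node_in_result by fastforce
    next
      case False
      then show ?thesis using s v part_internal_new by auto
    qed
  next
    fix s t v w assume s: "s \<in> insert e S" and t: "t \<in> insert e S"
      and v: "v \<in> gV ((Hs(e := H0)) s)" "v \<notin> set (gext ((Hs(e := H0)) s))"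
      and w: "w \<in> gV ((Hs(e := H0)) t)" "w \<notin> set (gext ((Hs(e := H0)) t))"
      and eq: "(iH(e := h \<circ> \<phi>)) s v = (iH(e := h \<circ> \<phi>)) t w"
    show "s = t"
    proof (cases "s = e"; cases "t = e")
      assume "s = e" "t \<noteq> e"
      then have "h (\<phi> v) = iH t w" "t \<in> S" "w \<in> gV (Hs t)" using eq t w by auto
      moreover have "h (\<phi> v) \<notin> gV X" using new_internal v \<open>s = e\<close> by auto
      ultimately show ?thesis using part_node_in_result by metis
    next
      assume "s \<noteq> e" "t = e"
      then have "h (\<phi> w) = iH s v" "s \<in> S" "v \<in> gV (Hs s)" using eq s v by auto
      moreover have "h (\<phi> w) \<notin> gV X" using new_internal w \<open>t = e\<close> by auto
      ultimately show ?thesis using part_node_in_result by metis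
    next
      assume "s \<noteq> e" "t \<noteq> e"
      then show ?thesis using part_internal_disjoint s t v w eq by auto
    qed simp
  next
    have "(\<Union>s\<in>S. (iH(e := h \<circ> \<phi>)) s ` gV ((Hs(e := H0)) s)) = (\<Union>s\<in>S. iH s ` gV (Hs s))"
      using e(2) by (intro SUP_cong) auto
    then show "gV (repl X e' H) = iG ` gV G \<union> (\<Union>s\<in>insert e S. (iH(e := h \<circ> \<phi>)) s ` gV ((Hs(e := H0)) s))"
      using VH unfolding gV_repl h_def result_nodes by (auto simp: image_comp)
  next
    have "(\<Union>s\<in>S. (jH(e := \<lambda>y. eoff X + \<psi> y)) s ` gE ((Hs(e := H0)) s)) = (\<Union>s\<in>S. jH s ` gE (Hs s))"
      using e(2) by (intro SUP_cong) auto
    moreover have "jG ` (gE G - insert e S) = jG ` (gE G - S) - {e'}"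
      using inj_host_edges eS unfolding e'_def inj_on_def by auto
    moreover have "e' \<notin> (\<Union>s\<in>S. jH s ` gE (Hs s))"
      using host_part_edges_disjoint[OF eS] unfolding e'_def by fastforce
    moreover have "gE H = \<psi> ` gE H0" using bpsi unfolding bij_betw_def by blast
    ultimately show "gE (repl X e' H)
        = jG ` (gE G - insert e S) \<union> (\<Union>s\<in>insert e S. (jH(e := \<lambda>y. eoff X + \<psi> y)) s ` gE ((Hs(e := H0)) s))"
      unfolding gE_repl result_edges by (auto simp: image_comp)
    show "inj_on jG (gE G - insert e S)" using inj_host_edges by (auto intro: inj_on_subset)
  next
    fix x s y assume x: "x \<in> gE G - insert e S" and s: "s \<in> insert e S" and y: "y \<in> gE ((Hs(e := H0)) s)"
    show "jG x \<noteq> (jH(e := \<lambda>y. eoff X + \<psi> y)) s y"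
    proof (cases "s = e")
      case True
      have "jG x < eoff X" using x old_edge_less host_edge_in_result by blast
      then show ?thesis using True by auto
    next
      case False
      then show ?thesis using x s y host_part_edges_disjoint by auto
    qed
  next
    fix s t y z assume s: "s \<in> insert e S" and t: "t \<in> insert e S" and y: "y \<in> gE ((Hs(e := H0)) s)"
      and z: "z \<in> gE ((Hs(e := H0)) t)"
      and eq: "(jH(e := \<lambda>y. eoff X + \<psi> y)) s y = (jH(e := \<lambda>y. eoff X + \<psi> y)) t z"
    show "s = t"
    proof (cases "s = e"; cases "t = e")
      assume "s = e" "t \<noteq> e"
      then have "jH t z < eoff X" using old_edge_less part_edge_in_result t z by auto
      then show ?thesis using eq \<open>s = e\<close> \<open>t \<noteq> e\<close> by auto
    next
      assume "s \<noteq> e" "t = e"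
      then have "jH s y < eoff X" using old_edge_less part_edge_in_result s y by auto
      then show ?thesis using eq \<open>s \<noteq> e\<close> \<open>t = e\<close> by auto
    next
      assume "s \<noteq> e" "t \<noteq> e"
      then show ?thesis using part_edges_disjoint s t y z eq by auto
    qed simp
  next
    fix x assume x: "x \<in> gE G - insert e S"
    then have "x \<in> gE G - S" by blast
    then show "gatt (repl X e' H) (jG x) = map iG (gatt G x)" "R (glab G x) (glab (repl X e' H) (jG x))"
      using finite_result_edges host_edge_in_result host_att host_lab by auto
  next
    fix s y assume s: "s \<in> insert e S" and y: "y \<in> gE ((Hs(e := H0)) s)"
    show "gatt (repl X e' H) ((jH(e := \<lambda>y. eoff X + \<psi> y)) s y)
        = map ((iH(e := h \<circ> \<phi>)) s) (gatt ((Hs(e := H0)) s) y)"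
      using part_cases[OF s] y attH finite_result_edges part_edge_in_result part_att e(2)
      unfolding h_def by (cases "s = e") auto
    show "R (glab ((Hs(e := H0)) s) y) (glab (repl X e' H) ((jH(e := \<lambda>y. eoff X + \<psi> y)) s y))"
      using part_cases[OF s] y labH finite_result_edges part_edge_in_result part_lab e(2)
      by (cases "s = e") auto
  qed (use wf_host inj_host_nodes result_ext in simp_all)
qed

end

text \<open>An embedding \<open>i, j\<close> of \<open>\<Sigma>\<close> into \<open>X\<close> that respects the attachment of the edge \<open>y\<close> lifts
  to an embedding of \<open>\<Sigma>[y/K]\<close> into \<open>X[j y/K]\<close>: old items keep their images, and the fresh copy
  of \<open>K\<close> in the former goes to the fresh copy in the latter.\<close>

definition lift_node :: "'a hgraph \<Rightarrow> 'b hgraph \<Rightarrow> (nat \<Rightarrow> nat) \<Rightarrow> nat \<Rightarrow> nat" where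
  "lift_node \<Sigma> X i u = (if u \<in> gV \<Sigma> then i u else voff X + (u - voff \<Sigma>))"

definition lift_edge :: "'a hgraph \<Rightarrow> 'b hgraph \<Rightarrow> (nat \<Rightarrow> nat) \<Rightarrow> nat \<Rightarrow> nat" where
  "lift_edge \<Sigma> X j z = (if z < eoff \<Sigma> then j z else eoff X + (z - eoff \<Sigma>))"

lemma lift_node_old[simp]: "u \<in> gV \<Sigma> \<Longrightarrow> lift_node \<Sigma> X i u = i u"
  unfolding lift_node_def by simp

lemma lift_edge_old: "finite (gE \<Sigma>) \<Longrightarrow> z \<in> gE \<Sigma> \<Longrightarrow> lift_edge \<Sigma> X j z = j z"
  unfolding lift_edge_def using less_eoff[of \<Sigma> z] by simp

lemma lift_edge_new[simp]: "lift_edge \<Sigma> X j (eoff \<Sigma> + z) = eoff X + z"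
  unfolding lift_edge_def by simp

locale repl_lift =
  fixes \<Sigma> X :: "'a hgraph" and y :: nat and K :: "'a hgraph" and i j :: "nat \<Rightarrow> nat"
  assumes wf_source: "wf_graph \<Sigma>" and wf_target: "wf_graph X" and wf_K: "wf_graph K"
    and edge: "y \<in> gE \<Sigma>" and arity: "length (gext K) = length (gatt \<Sigma> y)"
    and inj_nodes: "inj_on i (gV \<Sigma>)" and nodes_into: "i ` gV \<Sigma> \<subseteq> gV X"
    and inj_edges: "inj_on j (gE \<Sigma>)" and edges_into: "j ` gE \<Sigma> \<subseteq> gE X"
    and att_edge: "gatt X (j y) = map i (gatt \<Sigma> y)"
begin

lemma arity_target: "length (gext K) = length (gatt X (j y))"
  using arity att_edge by simp

lemma lift_node_repl_node: "w \<in> gV K \<Longrightarrow> lift_node \<Sigma> X i (repl_node \<Sigma> y K w) = repl_node X (j y) K w"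
proof (cases "w \<in> set (gext K)")
  case True
  then obtain k where k: "k < length (gext K)" "w = gext K ! k" by (metis in_set_conv_nth)
  have dK: "distinct (gext K)" using wf_K unfolding wf_graph_def by blast
  have "gatt \<Sigma> y ! k \<in> gV \<Sigma>" using wf_source edge k arity unfolding wf_graph_def by (metis nth_mem subsetD)
  then show ?thesis
    using k repl_node_ext[OF dK arity k(1)] repl_node_ext[OF dK arity_target k(1)] att_edge arity by simp
next
  case False
  have "voff \<Sigma> + w \<notin> gV \<Sigma>" using less_voff wf_source unfolding wf_graph_def by fastforce
  then show ?thesis
    using repl_node_internal[OF arity False] repl_node_internal[OF arity_target False]
    unfolding lift_node_def by simp
qed

lemma lift_node_fresh:
  assumes "u \<in> gV (repl \<Sigma> y K)" "u \<notin> gV \<Sigma>"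
  obtains w where "w \<in> gV K" "w \<notin> set (gext K)" "u = voff \<Sigma> + w" "lift_node \<Sigma> X i u = voff X + w"
proof -
  obtain w where w: "w \<in> gV K" "u = repl_node \<Sigma> y K w" using assms by auto
  have dK: "distinct (gext K)" using wf_K unfolding wf_graph_def by blast
  have "w \<notin> set (gext K)" using repl_node_ext_in_host[OF wf_source edge dK arity] w assms(2) by blast
  moreover have "u = voff \<Sigma> + w" using w repl_node_internal[OF arity \<open>w \<notin> set (gext K)\<close>] by simp
  ultimately show ?thesis using that w assms(2) unfolding lift_node_def by simp
qed

lemma lift_node_fresh_notin:
  assumes "u \<in> gV (repl \<Sigma> y K)" "u \<notin> gV \<Sigma>"
  shows "lift_node \<Sigma> X i u \<notin> gV X"
proof -
  obtain w where "lift_node \<Sigma> X i u = voff X + w" using lift_node_fresh[OF assms] by blast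
  moreover have "voff X + w \<notin> gV X" using less_voff wf_target unfolding wf_graph_def by fastforce
  ultimately show ?thesis by simp
qed

lemma inj_on_lift_node: "inj_on (lift_node \<Sigma> X i) (gV (repl \<Sigma> y K))"
proof (rule inj_onI)
  fix a b assume a: "a \<in> gV (repl \<Sigma> y K)" and b: "b \<in> gV (repl \<Sigma> y K)"
    and eq: "lift_node \<Sigma> X i a = lift_node \<Sigma> X i b"
  show "a = b"
  proof (cases "a \<in> gV \<Sigma>"; cases "b \<in> gV \<Sigma>")
    assume "a \<in> gV \<Sigma>" "b \<in> gV \<Sigma>"
    then show ?thesis using eq inj_nodes unfolding inj_on_def by simp
  next
    assume "a \<in> gV \<Sigma>" "b \<notin> gV \<Sigma>"
    then show ?thesis using eq nodes_into lift_node_fresh_notin[OF b] by auto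
  next
    assume "a \<notin> gV \<Sigma>" "b \<in> gV \<Sigma>"
    then show ?thesis using eq nodes_into lift_node_fresh_notin[OF a] by auto
  next
    assume "a \<notin> gV \<Sigma>" "b \<notin> gV \<Sigma>"
    with a b eq show ?thesis by (elim lift_node_fresh) auto
  qed
qed

lemma lift_node_image:
  "lift_node \<Sigma> X i ` gV (repl \<Sigma> y K) = i ` gV \<Sigma> \<union> repl_node X (j y) K ` gV K"
proof -
  have "lift_node \<Sigma> X i ` gV \<Sigma> = i ` gV \<Sigma>" by simp
  moreover have "lift_node \<Sigma> X i ` repl_node \<Sigma> y K ` gV K = repl_node X (j y) K ` gV K"
    using lift_node_repl_node by (simp add: image_image)
  ultimately show ?thesis by (simp add: image_Un)
qed

lemma finite_source_edges: "finite (gE \<Sigma>)"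
  using wf_source unfolding wf_graph_def by blast

lemma lift_edge_fresh_notin:
  "z \<in> gE (repl \<Sigma> y K) \<Longrightarrow> z \<notin> gE \<Sigma> \<Longrightarrow> lift_edge \<Sigma> X j z \<notin> gE X"
  using less_eoff wf_target unfolding wf_graph_def by fastforce

lemma inj_on_lift_edge: "inj_on (lift_edge \<Sigma> X j) (gE (repl \<Sigma> y K))"
proof (rule inj_onI)
  fix a b assume a: "a \<in> gE (repl \<Sigma> y K)" and b: "b \<in> gE (repl \<Sigma> y K)"
    and eq: "lift_edge \<Sigma> X j a = lift_edge \<Sigma> X j b"
  show "a = b"
  proof (cases "a \<in> gE \<Sigma>"; cases "b \<in> gE \<Sigma>")
    assume "a \<in> gE \<Sigma>" "b \<in> gE \<Sigma>"
    then show ?thesis using eq inj_edges lift_edge_old[OF finite_source_edges] unfolding inj_on_def by metis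
  next
    assume "a \<in> gE \<Sigma>" "b \<notin> gE \<Sigma>"
    then have "lift_edge \<Sigma> X j a \<in> gE X"
      using edges_into by (simp add: lift_edge_old[OF finite_source_edges] image_subset_iff)
    with eq show ?thesis using lift_edge_fresh_notin[OF b \<open>b \<notin> gE \<Sigma>\<close>] by simp
  next
    assume "a \<notin> gE \<Sigma>" "b \<in> gE \<Sigma>"
    then have "lift_edge \<Sigma> X j b \<in> gE X"
      using edges_into by (simp add: lift_edge_old[OF finite_source_edges] image_subset_iff)
    with eq show ?thesis using lift_edge_fresh_notin[OF a \<open>a \<notin> gE \<Sigma>\<close>] by simp
  next
    assume "a \<notin> gE \<Sigma>" "b \<notin> gE \<Sigma>"
    then show ?thesis using a b eq by auto
  qed
qed

lemma lift_edge_image: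
  "lift_edge \<Sigma> X j ` gE (repl \<Sigma> y K) = (j ` gE \<Sigma> - {j y}) \<union> (\<lambda>x. eoff X + x) ` gE K"
proof -
  have "lift_edge \<Sigma> X j ` (gE \<Sigma> - {y}) = j ` gE \<Sigma> - {j y}"
    using lift_edge_old[OF finite_source_edges] inj_edges edge unfolding inj_on_def by (auto simp: image_iff)
  then show ?thesis by (auto simp: image_Un image_iff)
qed

end

lemma UN_split: "s \<in> S \<Longrightarrow> (\<Union>t\<in>S. f t) = f s \<union> (\<Union>t\<in>S - {s}. f t)"
  by blast

lemma UN_fun_upd_image:
  "s \<in> S \<Longrightarrow> (\<Union>t\<in>S. (f(s := g)) t ` h ((H(s := K)) t)) = g ` h K \<union> (\<Union>t\<in>S - {s}. f t ` h (H t))"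
  by (auto split: if_splits)

lemma sim_repl_repl_part_edge:
  assumes X: "sim_repl R G S Hs X iG iH jG jH" and s: "s \<in> S" and y: "y \<in> gE (Hs s)"
    and K: "wf_graph K" "length (gext K) = length (gatt (Hs s) y)"
    and Kr: "\<And>z. z \<in> gE K \<Longrightarrow> R (glab K z) (glab K z)"
  shows "sim_repl R G S (Hs(s := repl (Hs s) y K)) (repl X (jH s y) K)
     iG (iH(s := lift_node (Hs s) X (iH s))) jG (jH(s := lift_edge (Hs s) X (jH s)))"
proof -
  interpret sim_repl R G S Hs X iG iH jG jH by (rule X)
  define \<Sigma> Hs' iH' jH' where "\<Sigma> = Hs s" and "Hs' = Hs(s := repl \<Sigma> y K)"
    and "iH' = iH(s := lift_node \<Sigma> X (iH s))" and "jH' = jH(s := lift_edge \<Sigma> X (jH s))"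
  interpret L: repl_lift \<Sigma> X y K "iH s" "jH s"
    using s y K wf_part wf_graph_result inj_part_nodes inj_part_edges part_node_in_result
      part_edge_in_result part_att unfolding \<Sigma>_def by unfold_locales auto
  have ext_Hs': "gext (Hs' t) = gext (Hs t)" for t by (simp add: Hs'_def \<Sigma>_def)
  have node_cases: "(r = s \<and> u \<notin> gV \<Sigma> \<and> iH' r u \<notin> gV X) \<or> (u \<in> gV (Hs r) \<and> iH' r u = iH r u)"
    if "u \<in> gV (Hs' r)" for r u
  proof (cases "r = s \<and> u \<notin> gV \<Sigma>")
    case True
    then have "u \<in> gV (repl \<Sigma> y K)" using that by (simp add: Hs'_def)
    then show ?thesis using True L.lift_node_fresh_notin by (simp add: iH'_def)
  qed (use that in \<open>auto simp: Hs'_def iH'_def \<Sigma>_def\<close>)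
  have edge_cases: "(r = s \<and> u \<notin> gE \<Sigma> \<and> jH' r u \<notin> gE X) \<or> (u \<in> gE (Hs r) \<and> jH' r u = jH r u)"
    if "u \<in> gE (Hs' r)" for r u
  proof (cases "r = s \<and> u \<notin> gE \<Sigma>")
    case True
    then have "u \<in> gE (repl \<Sigma> y K)" using that by (simp add: Hs'_def)
    then show ?thesis using True L.lift_edge_fresh_notin by (simp add: jH'_def)
  qed (use that lift_edge_old[OF L.finite_source_edges] in \<open>auto simp: Hs'_def jH'_def \<Sigma>_def\<close>)
  have split_nodes: "gV X = iG ` gV G \<union> iH s ` gV \<Sigma> \<union> (\<Union>t\<in>S - {s}. iH t ` gV (Hs t))"
    unfolding result_nodes UN_split[OF s] \<Sigma>_def by (simp add: Un_assoc)
  have UN_nodes: "(\<Union>t\<in>S. iH' t ` gV (Hs' t))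
      = lift_node \<Sigma> X (iH s) ` gV (repl \<Sigma> y K) \<union> (\<Union>t\<in>S - {s}. iH t ` gV (Hs t))"
    unfolding iH'_def Hs'_def by (rule UN_fun_upd_image[OF s])
  have nodes': "gV (repl X (jH s y) K) = iG ` gV G \<union> (\<Union>t\<in>S. iH' t ` gV (Hs' t))"
    unfolding gV_repl[of X] split_nodes UN_nodes L.lift_node_image by (simp add: Un_ac)
  have split_edges: "gE X = jG ` (gE G - S) \<union> jH s ` gE \<Sigma> \<union> (\<Union>t\<in>S - {s}. jH t ` gE (Hs t))"
    unfolding result_edges UN_split[OF s] \<Sigma>_def by (simp add: Un_assoc)
  have UN_edges: "(\<Union>t\<in>S. jH' t ` gE (Hs' t))
      = lift_edge \<Sigma> X (jH s) ` gE (repl \<Sigma> y K) \<union> (\<Union>t\<in>S - {s}. jH t ` gE (Hs t))"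
    unfolding jH'_def Hs'_def by (rule UN_fun_upd_image[OF s])
  have "jH s y \<notin> jG ` (gE G - S)"
  proof
    assume "jH s y \<in> jG ` (gE G - S)"
    then obtain x where "x \<in> gE G - S" "jG x = jH s y" by auto
    then show False using host_part_edges_disjoint[OF _ s y] by blast
  qed
  moreover have "jH s y \<notin> (\<Union>t\<in>S - {s}. jH t ` gE (Hs t))" using part_edges_disjoint[OF _ s _ y] by auto
  moreover have "a \<notin> P \<Longrightarrow> a \<notin> R \<Longrightarrow> (P \<union> Q \<union> R) - {a} \<union> N = P \<union> ((Q - {a}) \<union> N \<union> R)"
    for a :: nat and P Q R N by blast
  ultimately have edges': "gE (repl X (jH s y) K) = jG ` (gE G - S) \<union> (\<Union>t\<in>S. jH' t ` gE (Hs' t))"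
    unfolding gE_repl[of X] split_edges UN_edges L.lift_edge_image by blast
  have part_att_lab: "gatt (repl X (jH s y) K) (jH' t z) = map (iH' t) (gatt (Hs' t) z)
      \<and> R (glab (Hs' t) z) (glab (repl X (jH s y) K) (jH' t z))" if t: "t \<in> S" and z: "z \<in> gE (Hs' t)" for t z
  proof (cases "t = s")
    case True
    show ?thesis
    proof (cases "z \<in> gE \<Sigma>")
      case old: True
      have lift: "jH' t z = jH s z" using True lift_edge_old[OF L.finite_source_edges old] by (simp add: jH'_def)
      have inX: "jH s z \<in> gE X" using part_edge_in_result[OF s] old by (simp add: \<Sigma>_def)
      have "set (gatt \<Sigma> z) \<subseteq> gV \<Sigma>" using L.wf_source old unfolding wf_graph_def by blast
      then have "map (lift_node \<Sigma> X (iH s)) (gatt \<Sigma> z) = map (iH s) (gatt \<Sigma> z)" by (intro map_cong) auto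
      then have "map (iH' t) (gatt (Hs' t) z) = map (iH s) (gatt \<Sigma> z)" "glab (Hs' t) z = glab \<Sigma> z"
        using True old L.finite_source_edges by (simp_all add: Hs'_def iH'_def)
      then show ?thesis
        using lift inX old finite_result_edges part_att[OF s] part_lab[OF s] by (simp add: \<Sigma>_def)
    next
      case new: False
      then obtain w where w: "w \<in> gE K" "z = eoff \<Sigma> + w" using z True by (auto simp: Hs'_def)
      have "set (gatt K w) \<subseteq> gV K" using K(1) w(1) unfolding wf_graph_def by blast
      then have "map (lift_node \<Sigma> X (iH s)) (map (repl_node \<Sigma> y K) (gatt K w)) = map (repl_node X (jH s y) K) (gatt K w)"
        using L.lift_node_repl_node by auto
      then show ?thesis using True w Kr by (simp add: Hs'_def iH'_def jH'_def)
    qed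
  next
    case False
    then show ?thesis using t z finite_result_edges part_edge_in_result part_att part_lab
      by (simp add: Hs'_def iH'_def jH'_def)
  qed
  show ?thesis
    unfolding Hs'_def[symmetric] iH'_def[symmetric] jH'_def[symmetric] \<Sigma>_def[symmetric]
  proof unfold_locales
    fix t assume t: "t \<in> S"
    show "wf_graph (Hs' t)" using t wf_part wf_graph_repl[OF L.wf_source L.edge K(1) L.arity] by (simp add: Hs'_def \<Sigma>_def)
    show "length (gext (Hs' t)) = length (gatt G t)" using t part_arity ext_Hs' by simp
    show "inj_on (iH' t) (gV (Hs' t))" using t L.inj_on_lift_node inj_part_nodes
      by (simp add: Hs'_def iH'_def \<Sigma>_def)
    have "set (gext \<Sigma>) \<subseteq> gV \<Sigma>" using L.wf_source unfolding wf_graph_def \<Sigma>_def by blast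
    then have "map (iH' s) (gext (Hs' s)) = map (iH s) (gext (Hs s))"
      unfolding Hs'_def iH'_def \<Sigma>_def by (intro map_cong) auto
    then show "map (iH' t) (gext (Hs' t)) = map iG (gatt G t)"
    proof (cases "t = s")
      case False
      then show ?thesis using t part_ext_glued by (simp add: Hs'_def iH'_def)
    qed (use t part_ext_glued in simp)
    show "inj_on (jH' t) (gE (Hs' t))" using t L.inj_on_lift_edge inj_part_edges
      by (simp add: Hs'_def jH'_def \<Sigma>_def)
  next
    fix t v assume t: "t \<in> S" and v: "v \<in> gV (Hs' t)" "v \<notin> set (gext (Hs' t))"
    show "iH' t v \<notin> iG ` gV G"
      using node_cases[OF v(1)] v(2) t part_internal_new host_node_in_result ext_Hs' by fastforce
  next
    fix t t' v w assume t: "t \<in> S" and t': "t' \<in> S" and v: "v \<in> gV (Hs' t)" "v \<notin> set (gext (Hs' t))"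
      and w: "w \<in> gV (Hs' t')" "w \<notin> set (gext (Hs' t'))" and eq: "iH' t v = iH' t' w"
    show "t = t'"
      using node_cases[OF v(1)] node_cases[OF w(1)] part_node_in_result[OF t] part_node_in_result[OF t']
        part_internal_disjoint[OF t t'] v(2) w(2) eq ext_Hs' by metis
  next
    fix x t z assume x: "x \<in> gE G - S" and t: "t \<in> S" and z: "z \<in> gE (Hs' t)"
    show "jG x \<noteq> jH' t z"
      using edge_cases[OF z] host_edge_in_result[OF x] host_part_edges_disjoint[OF x t] by metis
  next
    fix t t' a b assume t: "t \<in> S" and t': "t' \<in> S" and a: "a \<in> gE (Hs' t)" and b: "b \<in> gE (Hs' t')"
      and eq: "jH' t a = jH' t' b"
    show "t = t'"
      using edge_cases[OF a] edge_cases[OF b] part_edge_in_result[OF t] part_edge_in_result[OF t']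
        part_edges_disjoint[OF t t'] eq by metis
  next
    fix x assume "x \<in> gE G - S"
    then show "gatt (repl X (jH s y) K) (jG x) = map iG (gatt G x)" "R (glab G x) (glab (repl X (jH s y) K) (jG x))"
      using finite_result_edges host_edge_in_result host_att host_lab by auto
  qed (use wf_host parts_in_host nodes' edges' inj_host_nodes inj_host_edges part_att_lab result_ext in simp_all)
qed

definition upd_graphs :: "(nat \<Rightarrow> 'a hgraph) \<Rightarrow> (nat \<times> 'a hgraph) list \<Rightarrow> nat \<Rightarrow> 'a hgraph" where
"upd_graphs Hs ds s = (case map_of ds s of Some H \<Rightarrow> H | None \<Rightarrow> Hs s)"

lemma upd_graphs_Nil[simp]: "upd_graphs Hs [] = Hs" unfolding upd_graphs_def by auto

lemma upd_graphs_Cons: "fst p \<notin> set (map fst ds) \<Longrightarrow> upd_graphs Hs (p # ds) = upd_graphs (Hs(fst p := snd p)) ds"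
proof -
  assume a: "fst p \<notin> set (map fst ds)"
  then have n: "map_of ds (fst p) = None" by (simp add: map_of_eq_None_iff)
  show ?thesis unfolding upd_graphs_def
  proof
    fix s show "(case map_of (p # ds) s of None \<Rightarrow> Hs s | Some H \<Rightarrow> H) =
      (case map_of ds s of None \<Rightarrow> (Hs(fst p := snd p)) s | Some H \<Rightarrow> H)"
      using n by (cases p) (auto split: option.split)
  qed
qed

lemma upd_graphs_fun_upd: "e \<notin> set (map fst ds) \<Longrightarrow> upd_graphs (Hs(e := H)) ds = (upd_graphs Hs ds)(e := H)"
proof -
  assume "e \<notin> set (map fst ds)"
  then have n: "map_of ds e = None" by (simp add: map_of_eq_None_iff)
  show ?thesis unfolding upd_graphs_def by (auto simp: fun_eq_iff n split: option.split)
qed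

lemma upd_graphs_list_update:
  assumes "distinct (map fst ds)" "j < length ds" "fst (ds ! j) = d"
  shows "upd_graphs Hs (ds[j := (d, H')]) = (upd_graphs Hs ds)(d := H')"
  using assms
proof (induction ds arbitrary: j Hs)
  case Nil then show ?case by simp
next
  case (Cons p ds)
  show ?case
  proof (cases j)
    case 0
    then show ?thesis using Cons.prems by (cases p)
      (auto simp: upd_graphs_def fun_eq_iff map_of_eq_None_iff split: option.splits)
  next
    case (Suc k)
    have "fst p \<notin> set (map fst ds)" using Cons.prems(1) by simp
    have k: "k < length ds" using Cons.prems(2) Suc by simp
    have dk: "fst (ds ! k) = d" using Cons.prems(3) Suc by simp
    have "d \<in> set (map fst ds)" using k dk by (metis length_map nth_map nth_mem)
    moreover have "map fst (ds[k := (d, H')]) = map fst ds" using k dk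
      by (metis list_update_id map_update nth_map prod.collapse fst_conv)
    ultimately have "fst p \<noteq> d" "fst p \<notin> set (map fst (ds[k := (d, H')]))" using \<open>fst p \<notin> set (map fst ds)\<close> by auto
    note nn = this
    have IH: "upd_graphs (Hs(fst p := snd p)) (ds[k := (d, H')]) = (upd_graphs (Hs(fst p := snd p)) ds)(d := H')"
      by (rule Cons.IH) (use Cons.prems(1) k dk in auto)
    have "(p # ds)[j := (d, H')] = p # ds[k := (d, H')]" using Suc by simp
    then have "upd_graphs Hs ((p # ds)[j := (d, H')]) = upd_graphs (Hs(fst p := snd p)) (ds[k := (d, H')])"
      using upd_graphs_Cons[OF nn(2)] by simp
    also have "\<dots> = (upd_graphs (Hs(fst p := snd p)) ds)(d := H')" by (rule IH)
    also have "\<dots> = (upd_graphs Hs (p # ds))(d := H')" using upd_graphs_Cons[OF \<open>fst p \<notin> set (map fst ds)\<close>] by simp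
    finally show ?thesis .
  qed
qed

lemma upd_graphs_nth:
  assumes "distinct (map fst ds)" "j < length ds"
  shows "upd_graphs Hs ds (fst (ds ! j)) = snd (ds ! j)"
proof -
  have "(fst (ds ! j), snd (ds ! j)) \<in> set ds" using assms(2) by simp
  then have "map_of ds (fst (ds ! j)) = Some (snd (ds ! j))" using assms(1) by (simp add: map_of_eq_Some_iff)
  then show ?thesis unfolding upd_graphs_def by simp
qed

lemma sim_repl_repls_host:
  assumes "sim_repl R G S Hs X iG iH jG jH" "distinct (map fst ds)" "set (map fst ds) \<subseteq> gE G - S"
    "\<forall>p\<in>set ds. wf_graph (snd p) \<and> length (gext (snd p)) = length (gatt G (fst p))
      \<and> (\<forall>z\<in>gE (snd p). R (glab (snd p) z) (glab (snd p) z))"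
  shows "\<exists>iH' jH'. sim_repl R G (S \<union> set (map fst ds)) (upd_graphs Hs ds)
    (repls X (map (\<lambda>p. (jG (fst p), snd p)) ds)) iG iH' jG jH'"
  using assms
proof (induction ds arbitrary: S Hs X iH jH)
  case Nil then show ?case by auto
next
  case (Cons p ds)
  obtain d H where p: "p = (d, H)" by (cases p)
  have d: "d \<in> gE G" "d \<notin> S" using Cons.prems(3) p by auto
  have H: "wf_graph H" "length (gext H) = length (gatt G d)" "\<And>z. z \<in> gE H \<Longrightarrow> R (glab H z) (glab H z)"
    using Cons.prems(4) p by auto
  have st: "sim_repl R G (insert d S) (Hs(d := H)) (repl X (jG d) H) iG (iH(d := repl_node X (jG d) H \<circ> id)) jG
    (jH(d := \<lambda>y. eoff X + id y))"
  proof -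
    have isoH: "iso_via R id id H H" by (rule iso_via_id[OF H(1)]) (rule H(3))
    show ?thesis by (rule sim_repl.repl_host_edge[OF Cons.prems(1) d H(1,2) isoH])
  qed
  have "\<exists>iH' jH'. sim_repl R G (insert d S \<union> set (map fst ds)) (upd_graphs (Hs(d := H)) ds)
    (repls (repl X (jG d) H) (map (\<lambda>p. (jG (fst p), snd p)) ds)) iG iH' jG jH'"
    apply (rule Cons.IH[OF st])
    using Cons.prems p by auto
  moreover have "upd_graphs Hs (p # ds) = upd_graphs (Hs(d := H)) ds" using upd_graphs_Cons[of p ds Hs] Cons.prems(2) p by simp
  ultimately show ?case using p by simp
qed

lemma sim_repl_repls_part:
  assumes "sim_repl R G S Hs X iG iH jG jH" "s \<in> S" "distinct (map fst ds)" "set (map fst ds) \<subseteq> gE (Hs s)"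
    "\<forall>p\<in>set ds. wf_graph (snd p) \<and> length (gext (snd p)) = length (gatt (Hs s) (fst p))
      \<and> (\<forall>z\<in>gE (snd p). R (glab (snd p) z) (glab (snd p) z))"
  shows "\<exists>iH' jH'. sim_repl R G S (Hs(s := repls (Hs s) ds)) (repls X (map (\<lambda>p. (jH s (fst p), snd p)) ds)) iG iH' jG jH'
     \<and> (\<forall>z\<in>gE (Hs s) - set (map fst ds). jH' s z = jH s z)"
  using assms
proof (induction ds arbitrary: Hs X iH jH)
  case Nil
  have "Hs(s := Hs s) = Hs" by simp
  then show ?case using Nil by auto
next
  case (Cons p ds)
  obtain d K where p: "p = (d, K)" by (cases p)
  have d: "d \<in> gE (Hs s)" using Cons.prems(4) p by auto
  have K: "wf_graph K" "length (gext K) = length (gatt (Hs s) d)" "\<And>z. z \<in> gE K \<Longrightarrow> R (glab K z) (glab K z)"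
    using Cons.prems(5) p by auto
  define jH2 where "jH2 = jH(s := lift_edge (Hs s) X (jH s))"
  have st: "sim_repl R G S (Hs(s := repl (Hs s) d K)) (repl X (jH s d) K) iG
     (iH(s := lift_node (Hs s) X (iH s))) jG jH2"
    unfolding jH2_def by (rule sim_repl_repl_part_edge[OF Cons.prems(1,2) d K])
  have wfS: "wf_graph (Hs s)" using sim_repl.wf_part[OF Cons.prems(1,2)] .
  have fES: "finite (gE (Hs s))" using wfS unfolding wf_graph_def by blast
  have rest: "set (map fst ds) \<subseteq> gE (Hs s) - {d}" using Cons.prems(3,4) p by auto
  have jH2eq: "\<And>z. z \<in> set (map fst ds) \<Longrightarrow> jH2 s z = jH s z"
    unfolding jH2_def lift_edge_def using rest less_eoff[OF fES] by auto
  have IH: "\<exists>iH' jH'. sim_repl R G S ((Hs(s := repl (Hs s) d K))(s := repls ((Hs(s := repl (Hs s) d K)) s) ds))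
      (repls (repl X (jH s d) K) (map (\<lambda>p. (jH2 s (fst p), snd p)) ds)) iG iH' jG jH'
      \<and> (\<forall>z\<in>gE ((Hs(s := repl (Hs s) d K)) s) - set (map fst ds). jH' s z = jH2 s z)"
    apply (rule Cons.IH[OF st Cons.prems(2)])
    using Cons.prems(3) rest Cons.prems(5) p fES by (auto simp: gatt_repl_host)
  have meq: "map (\<lambda>p. (jH2 s (fst p), snd p)) ds = map (\<lambda>p. (jH s (fst p), snd p)) ds"
    using jH2eq by auto
  have jH2old: "\<And>z. z \<in> gE (Hs s) \<Longrightarrow> jH2 s z = jH s z" unfolding jH2_def lift_edge_def using less_eoff[OF fES] by auto
  have sub: "gE (Hs s) - set (map fst (p # ds)) \<subseteq> gE ((Hs(s := repl (Hs s) d K)) s) - set (map fst ds)"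
    using p by auto
  obtain iH' jH' where A: "sim_repl R G S ((Hs(s := repl (Hs s) d K))(s := repls ((Hs(s := repl (Hs s) d K)) s) ds))
      (repls (repl X (jH s d) K) (map (\<lambda>p. (jH s (fst p), snd p)) ds)) iG iH' jG jH'"
    and Bp: "\<forall>z\<in>gE ((Hs(s := repl (Hs s) d K)) s) - set (map fst ds). jH' s z = jH2 s z"
    using IH[unfolded meq] by blast
  have fe: "(Hs(s := repl (Hs s) d K))(s := repls ((Hs(s := repl (Hs s) d K)) s) ds) = Hs(s := repls (Hs s) (p # ds))"
    using p by simp
  have "sim_repl R G S (Hs(s := repls (Hs s) (p # ds))) (repls X (map (\<lambda>p. (jH s (fst p), snd p)) (p # ds))) iG iH' jG jH'"
    using A p unfolding fe by simp
  moreover have "\<forall>z\<in>gE (Hs s) - set (map fst (p # ds)). jH' s z = jH s z"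
  proof
    fix z assume z: "z \<in> gE (Hs s) - set (map fst (p # ds))"
    then have "z \<in> gE ((Hs(s := repl (Hs s) d K)) s) - set (map fst ds)" using sub by blast
    then have "jH' s z = jH2 s z" using Bp by blast
    then show "jH' s z = jH s z" using jH2old z by simp
  qed
  ultimately show ?case by blast
qed

lemma sim_repl_self: "wf_graph G \<Longrightarrow> sim_repl (=) G {} Hs G id iH id jH"
  by (rule sim_repl_iso[OF iso_via_id]) auto

lemma sim_repl_repls:
  assumes "wf_graph B" "distinct (map fst ds)" "set (map fst ds) \<subseteq> gE B"
    "\<forall>p\<in>set ds. wf_graph (snd p) \<and> length (gext (snd p)) = length (gatt B (fst p))"
  shows "\<exists>iG iH jH. sim_repl (=) B (set (map fst ds)) (upd_graphs Hs ds) (repls B ds) iG iH id jH"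
proof -
  have "\<exists>iH' jH'. sim_repl (=) B ({} \<union> set (map fst ds)) (upd_graphs Hs ds)
    (repls B (map (\<lambda>p. (id (fst p), snd p)) ds)) id iH' id jH'"
    by (rule sim_repl_repls_host[OF sim_repl_self[OF assms(1)] assms(2)]) (use assms(3,4) in auto)
  then show ?thesis by auto
qed

lemma sim_repl_repl:
  assumes "wf_graph G" "e \<in> gE G" "wf_graph H" "length (gext H) = length (gatt G e)"
  shows "\<exists>iH jH. sim_repl (=) G {e} (Hs(e := H)) (repl G e H) id iH id jH \<and> (\<forall>y. jH e y = eoff G + y)"
proof -
  have isoH: "iso_via (=) id id H H" by (rule iso_via_id[OF assms(3)]) simp
  have "sim_repl (=) G (insert e {}) (Hs(e := H)) (repl G (id e) H) id ((iH0)(e := repl_node G (id e) H \<circ> id)) id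
    ((jH0)(e := \<lambda>y. eoff G + id y))"
    by (rule sim_repl.repl_host_edge[OF sim_repl_self[OF assms(1)] assms(2) _ assms(3) assms(4) isoH]) simp
  then show ?thesis by fastforce
qed

lemma wf_repls:
  assumes "wf_graph B" "distinct (map fst ds)" "set (map fst ds) \<subseteq> gE B"
    "\<forall>p\<in>set ds. wf_graph (snd p) \<and> length (gext (snd p)) = length (gatt B (fst p))"
  shows "wf_graph (repls B ds)"
  using sim_repl_repls[OF assms, of "\<lambda>_. B"] sim_repl.wf_graph_result by blast

section \<open>Algebra of replacement up to isomorphism\<close>

text \<open>Both directions are recorded so that symmetry needs no well-formedness.\<close>

definition isomorphic :: "'a hgraph \<Rightarrow> 'a hgraph \<Rightarrow> bool" where
"isomorphic X Y \<longleftrightarrow> (\<exists>f g. iso_via (=) f g X Y) \<and> (\<exists>f g. iso_via (=) f g Y X)"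

lemma isomorphic_sym: "isomorphic X Y \<Longrightarrow> isomorphic Y X" unfolding isomorphic_def by blast

lemma isomorphic_trans[trans]: "isomorphic X Y \<Longrightarrow> isomorphic Y Z \<Longrightarrow> isomorphic X Z"
  unfolding isomorphic_def by (metis iso_via_comp eq_OO)

lemma sim_repl_isomorphic:
  assumes "sim_repl (=) G S Hs X iG iH jG jH" "sim_repl (=) G S Hs Y iG' iH' jG' jH'"
  shows "isomorphic X Y"
  unfolding isomorphic_def using sim_repl.result_unique[OF assms] sim_repl.result_unique[OF assms(2,1)] by (simp add: eq_OO)

lemma repl_cong:
  assumes iso: "iso_via R f g G0 G" and wf0: "wf_graph G0" and e: "e \<in> gE G0"
    and isoH: "iso_via R \<phi> \<psi> H0 H" and wfH0: "wf_graph H0" and len: "length (gext H0) = length (gatt G0 e)"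
  shows "giso_rel R (repl G0 e H0) (repl G (g e) H)"
proof -
  obtain iH jH where X: "sim_repl (=) G0 {e} ((\<lambda>_. H0)(e := H0)) (repl G0 e H0) id iH id jH"
    using sim_repl_repl[OF wf0 e wfH0 len] by blast
  have Y: "sim_repl R G0 (insert e {}) ((\<lambda>_. H0)(e := H0)) (repl G (g e) H) f ((\<lambda>_. id)(e := repl_node G (g e) H \<circ> \<phi>))
    g ((\<lambda>_. id)(e := \<lambda>y. eoff G + \<psi> y))"
    by (rule sim_repl.repl_host_edge[OF sim_repl_iso[OF iso wf0] e _ wfH0 len isoH]) simp
  show ?thesis using sim_repl.result_unique[OF X Y] unfolding giso_rel_iff by (auto simp: eq_OO)
qed

lemma repl_assoc:
  assumes wfG: "wf_graph G" and e: "e \<in> gE G" and wfH: "wf_graph H" and lenH: "length (gext H) = length (gatt G e)"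
    and y: "y \<in> gE H" and wfK: "wf_graph K" and lenK: "length (gext K) = length (gatt H y)"
  shows "isomorphic (repl (repl G e H) (eoff G + y) K) (repl G e (repl H y K))"
proof -
  obtain iH jH where X0: "sim_repl (=) G {e} ((\<lambda>_. H)(e := H)) (repl G e H) id iH id jH" and jH: "\<forall>y. jH e y = eoff G + y"
    using sim_repl_repl[OF wfG e wfH lenH] by blast
  have X: "sim_repl (=) G {e} (((\<lambda>_. H)(e := H))(e := repl (((\<lambda>_. H)(e := H)) e) y K)) (repl (repl G e H) (jH e y) K) id
     (iH(e := lift_node (((\<lambda>_. H)(e := H)) e) (repl G e H) (iH e))) id
     (jH(e := lift_edge (((\<lambda>_. H)(e := H)) e) (repl G e H) (jH e)))"
    by (rule sim_repl_repl_part_edge[OF X0]) (use y wfK lenK in auto)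
  have wfHK: "wf_graph (repl H y K)" by (rule wf_graph_repl[OF wfH y wfK lenK])
  have "\<exists>iH jH. sim_repl (=) G {e} ((\<lambda>_. H)(e := repl H y K)) (repl G e (repl H y K)) id iH id jH \<and> (\<forall>y. jH e y = eoff G + y)"
    by (rule sim_repl_repl[OF wfG e wfHK]) (simp add: lenH)
  then obtain iH' jH' where Y: "sim_repl (=) G {e} ((\<lambda>_. H)(e := repl H y K)) (repl G e (repl H y K)) id iH' id jH'" by blast
  show ?thesis by (rule sim_repl_isomorphic[OF _ Y]) (use X jH in simp)
qed

lemma repl_commute:
  assumes wfG: "wf_graph G" and e1: "e1 \<in> gE G" and e2: "e2 \<in> gE G" and ne: "e1 \<noteq> e2"
    and wf1: "wf_graph H1" and len1: "length (gext H1) = length (gatt G e1)"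
    and wf2: "wf_graph H2" and len2: "length (gext H2) = length (gatt G e2)"
  shows "isomorphic (repl (repl G e1 H1) e2 H2) (repl (repl G e2 H2) e1 H1)"
proof -
  have i1: "iso_via (=) id id H1 H1" by (rule iso_via_id[OF wf1]) simp
  have i2: "iso_via (=) id id H2 H2" by (rule iso_via_id[OF wf2]) simp
  obtain iH jH where X0: "sim_repl (=) G {e1} ((\<lambda>_. H1)(e1 := H1)) (repl G e1 H1) id iH id jH"
    using sim_repl_repl[OF wfG e1 wf1 len1] by blast
  have X: "sim_repl (=) G (insert e2 {e1}) (((\<lambda>_. H1)(e1 := H1))(e2 := H2)) (repl (repl G e1 H1) (id e2) H2) id
      (iH(e2 := repl_node (repl G e1 H1) (id e2) H2 \<circ> id)) id (jH(e2 := \<lambda>y. eoff (repl G e1 H1) + id y))"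
    by (rule sim_repl.repl_host_edge[OF X0 e2 _ wf2 len2 i2]) (use ne in simp)
  obtain iH' jH' where Y0: "sim_repl (=) G {e2} ((\<lambda>_. H1)(e2 := H2)) (repl G e2 H2) id iH' id jH'"
    using sim_repl_repl[OF wfG e2 wf2 len2] by blast
  have Y: "sim_repl (=) G (insert e1 {e2}) (((\<lambda>_. H1)(e2 := H2))(e1 := H1)) (repl (repl G e2 H2) (id e1) H1) id
      (iH'(e1 := repl_node (repl G e2 H2) (id e1) H1 \<circ> id)) id (jH'(e1 := \<lambda>y. eoff (repl G e2 H2) + id y))"
    by (rule sim_repl.repl_host_edge[OF Y0 e1 _ wf1 len1 i1]) (use ne in simp)
  have "insert e1 {e2} = insert e2 {e1}" by blast
  moreover have "((\<lambda>_. H1)(e2 := H2))(e1 := H1) = ((\<lambda>_. H1)(e1 := H1))(e2 := H2)" using ne by (auto simp: fun_eq_iff)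
  ultimately show ?thesis using sim_repl_isomorphic[OF X] Y by simp
qed

lemma repl_handle:
  assumes wfG: "wf_graph G" and e: "e \<in> gE G" and lab: "glab G e = a" and len: "length (gatt G e) = n"
  shows "isomorphic G (repl G e (handle a n))"
proof -
  have attV: "set (gatt G e) \<subseteq> gV G" and dis: "distinct (gatt G e)" using wfG e unfolding wf_graph_def by auto
  have inj: "inj_on (\<lambda>i. gatt G e ! i) {0..<n}" using dis len by (auto simp: inj_on_def nth_eq_iff_index_eq)
  have img: "(\<lambda>i. gatt G e ! i) ` {0..<n} \<subseteq> gV G" using attV len by (auto)
  have mapn: "map (\<lambda>i. gatt G e ! i) [0..<n] = gatt G e" using len map_nth[of "gatt G e"] by simp
  have X: "sim_repl (=) G {e} (\<lambda>_. handle a n) G id (\<lambda>_ i. gatt G e ! i) id (\<lambda>_ _. e)"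
    by unfold_locales (use wfG e inj img mapn lab len in \<open>auto simp: wf_handle\<close>)
  have "\<exists>iH jH. sim_repl (=) G {e} ((\<lambda>_. handle a n)(e := handle a n)) (repl G e (handle a n)) id iH id jH
    \<and> (\<forall>y. jH e y = eoff G + y)"
    by (rule sim_repl_repl[OF wfG e wf_handle]) (simp add: len)
  then obtain iH jH where Y: "sim_repl (=) G {e} ((\<lambda>_. handle a n)(e := handle a n)) (repl G e (handle a n)) id iH
    id jH" by blast
  have "(\<lambda>_. handle a n)(e := handle a n) = (\<lambda>_. handle a n)" by (auto simp: fun_eq_iff)
  then show ?thesis using sim_repl_isomorphic[OF X] Y by metis
qed

lemma repl_repls_host:
  assumes wfB: "wf_graph B" and dis: "distinct (map fst ds)" and sub: "set (map fst ds) \<subseteq> gE B"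
    and comp: "\<forall>p\<in>set ds. wf_graph (snd p) \<and> length (gext (snd p)) = length (gatt B (fst p))"
    and e0: "e0 \<in> gE B" "e0 \<notin> set (map fst ds)" and wfH: "wf_graph H" and len: "length (gext H) = length (gatt B e0)"
  shows "isomorphic (repl (repls B ds) e0 H) (repls (repl B e0 H) ds)"
proof -
  define S where "S = set (map fst ds)"
  define Hs0 where "Hs0 = (\<lambda>_::nat. B)"
  obtain iG iH jH where G: "sim_repl (=) B S (upd_graphs Hs0 ds) (repls B ds) iG iH id jH"
    using sim_repl_repls[OF wfB dis sub comp] unfolding S_def by blast
  have isoH: "iso_via (=) id id H H" by (rule iso_via_id[OF wfH]) simp
  have X: "sim_repl (=) B (insert e0 S) ((upd_graphs Hs0 ds)(e0 := H)) (repl (repls B ds) (id e0) H) iG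
    (iH(e0 := repl_node (repls B ds) (id e0) H \<circ> id)) id (jH(e0 := \<lambda>y. eoff (repls B ds) + id y))"
    by (rule sim_repl.repl_host_edge[OF G _ _ wfH len isoH]) (use e0 in \<open>auto simp: S_def\<close>)
  obtain iH1 jH1 where Y0: "sim_repl (=) B {e0} (Hs0(e0 := H)) (repl B e0 H) id iH1 id jH1"
    using sim_repl_repl[OF wfB e0(1) wfH len] by blast
  have "\<exists>iH' jH'. sim_repl (=) B ({e0} \<union> set (map fst ds)) (upd_graphs (Hs0(e0 := H)) ds)
    (repls (repl B e0 H) (map (\<lambda>p. (id (fst p), snd p)) ds)) id iH' id jH'"
    by (rule sim_repl_repls_host[OF Y0 dis]) (use e0 sub comp in \<open>auto simp: S_def\<close>)
  then obtain iH2 jH2 where Y: "sim_repl (=) B ({e0} \<union> S) ((upd_graphs Hs0 ds)(e0 := H)) (repls (repl B e0 H) ds) id iH2 id jH2"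
    using upd_graphs_fun_upd[of e0 ds Hs0 H] e0 unfolding S_def by auto
  have "insert e0 S = {e0} \<union> S" by blast
  then show ?thesis using sim_repl_isomorphic[OF X] Y by simp
qed

lemma glab_repls_host:
  assumes "wf_graph B" "distinct (map fst ds)" "set (map fst ds) \<subseteq> gE B"
    "\<forall>p\<in>set ds. wf_graph (snd p) \<and> length (gext (snd p)) = length (gatt B (fst p))"
    "e0 \<in> gE B - set (map fst ds)"
  shows "glab (repls B ds) e0 = glab B e0"
proof -
  obtain iG iH jH where G: "sim_repl (=) B (set (map fst ds)) (upd_graphs (\<lambda>_. B) ds) (repls B ds) iG iH id jH"
    using sim_repl_repls[OF assms(1-4)] by blast
  show ?thesis using sim_repl.host_lab[OF G assms(5)] by simp
qed

lemma map_fst_list_update_fst: "j < length ds \<Longrightarrow> map fst (ds[j := (fst (ds ! j), H)]) = map fst ds"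
  by (metis fst_conv list_update_id map_update nth_map)

lemma repls_part_edge:
  assumes wfB: "wf_graph B" and dis: "distinct (map fst ds)" and sub: "set (map fst ds) \<subseteq> gE B"
    and comp: "\<forall>p\<in>set ds. wf_graph (snd p) \<and> length (gext (snd p)) = length (gatt B (fst p))"
    and e0: "e0 \<in> gE (repls B ds)" "e0 \<notin> gE B - set (map fst ds)"
  obtains j y where "j < length ds" "y \<in> gE (snd (ds ! j))" "glab (repls B ds) e0 = glab (snd (ds ! j)) y"
    "\<And>H. wf_graph H \<Longrightarrow> length (gext H) = length (gatt (snd (ds ! j)) y) \<Longrightarrow>
       isomorphic (repl (repls B ds) e0 H) (repls B (ds[j := (fst (ds ! j), repl (snd (ds ! j)) y H)]))"
proof -
  define S where "S = set (map fst ds)"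
  define Hs0 where "Hs0 = (\<lambda>_::nat. B)"
  obtain iG iH jH where G: "sim_repl (=) B S (upd_graphs Hs0 ds) (repls B ds) iG iH id jH"
    using sim_repl_repls[OF wfB dis sub comp] unfolding S_def by blast
  obtain s y where b: "s \<in> S" "y \<in> gE (upd_graphs Hs0 ds s)" "e0 = jH s y"
    using e0 unfolding sim_repl.result_edges[OF G] S_def by auto
  obtain j where j: "j < length ds" "fst (ds ! j) = s" using b(1) unfolding S_def by (metis in_set_conv_nth length_map nth_map)
  have Hj: "upd_graphs Hs0 ds s = snd (ds ! j)" using upd_graphs_nth[OF dis j(1)] j(2) by simp
  have y: "y \<in> gE (snd (ds ! j))" using b(2) Hj by simp
  have lab: "glab (repls B ds) e0 = glab (snd (ds ! j)) y" using sim_repl.part_lab[OF G b(1,2)] Hj b(3) by simp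
  have "\<forall>H. wf_graph H \<longrightarrow> length (gext H) = length (gatt (snd (ds ! j)) y) \<longrightarrow>
        isomorphic (repl (repls B ds) e0 H) (repls B (ds[j := (fst (ds ! j), repl (snd (ds ! j)) y H)]))"
  proof (intro allI impI)
    fix H :: "'a hgraph" assume wfH: "wf_graph H" and len: "length (gext H) = length (gatt (snd (ds ! j)) y)"
    have X: "sim_repl (=) B S ((upd_graphs Hs0 ds)(s := repl (upd_graphs Hs0 ds s) y H)) (repl (repls B ds) (jH s y) H) iG
       (iH(s := lift_node (upd_graphs Hs0 ds s) (repls B ds) (iH s))) id
       (jH(s := lift_edge (upd_graphs Hs0 ds s) (repls B ds) (jH s)))"
      by (rule sim_repl_repl_part_edge[OF G b(1,2) wfH]) (use len Hj in auto)
    define ds2 where "ds2 = ds[j := (fst (ds ! j), repl (snd (ds ! j)) y H)]"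
    have mf: "map fst ds2 = map fst ds" unfolding ds2_def by (rule map_fst_list_update_fst[OF j(1)])
    have cj: "wf_graph (snd (ds ! j))" "length (gext (snd (ds ! j))) = length (gatt B (fst (ds ! j)))"
      using comp j(1) nth_mem by blast+
    have comp2: "\<forall>p\<in>set ds2. wf_graph (snd p) \<and> length (gext (snd p)) = length (gatt B (fst p))"
    proof
      fix p assume "p \<in> set ds2"
      then have "p \<in> insert (fst (ds ! j), repl (snd (ds ! j)) y H) (set ds)" unfolding ds2_def
        using set_update_subset_insert by fast
      then show "wf_graph (snd p) \<and> length (gext (snd p)) = length (gatt B (fst p))"
      proof
        assume p: "p = (fst (ds ! j), repl (snd (ds ! j)) y H)"
        show ?thesis using p cj wf_graph_repl[OF cj(1) y wfH len] by simp
      qed (use comp in blast)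
    qed
    obtain iG2 iH2 jH2 where Y: "sim_repl (=) B (set (map fst ds2)) (upd_graphs Hs0 ds2) (repls B ds2) iG2 iH2 id jH2"
      using sim_repl_repls[OF wfB _ _ comp2] dis sub mf by fastforce
    have "upd_graphs Hs0 ds2 = (upd_graphs Hs0 ds)(s := repl (upd_graphs Hs0 ds s) y H)"
      unfolding ds2_def using upd_graphs_list_update[OF dis j(1) refl] Hj j(2) by simp
    then show "isomorphic (repl (repls B ds) e0 H) (repls B (ds[j := (fst (ds ! j), repl (snd (ds ! j)) y H)]))"
      using sim_repl_isomorphic[OF X] Y mf b(3) unfolding ds2_def S_def by simp
  qed
  then show ?thesis using that j y lab by blast
qed

text \<open>Edge \<open>d\<close> of \<open>D\<close> becomes edge \<open>eoff K + d\<close> of \<open>K[e/D]\<close>, so a list of arguments indexed by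
  edges of \<open>D\<close> is shifted accordingly.\<close>

abbreviation shift_edges :: "nat \<Rightarrow> (nat \<times> 'a) list \<Rightarrow> (nat \<times> 'a) list" where
"shift_edges k ds \<equiv> map (\<lambda>p. (k + fst p, snd p)) ds"

lemma distinct_shift_edges: "distinct (map fst ds) \<Longrightarrow> distinct (map fst (shift_edges k ds))"
  by (simp add: distinct_map inj_on_def comp_def)

lemma shift_edges_list_update: "shift_edges k (ds[j := (a, b)]) = (shift_edges k ds)[j := (k + a, b)]"
  by (simp add: map_update)

lemma repl_div_left_other:
  assumes wfK: "wf_graph K" and e: "e \<in> gE K" and wfDt: "wf_graph Dt" and lenDt: "length (gext Dt) = length (gatt K e)"
    and dis: "distinct (map fst ds0)" and sub: "set (map fst ds0) \<subseteq> gE Dt"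
    and comp: "\<forall>p\<in>set ds0. wf_graph (snd p) \<and> length (gext (snd p)) = length (gatt Dt (fst p)) "
    and e0: "e0 \<in> gE K" and ne: "e0 \<noteq> e" and wfH: "wf_graph H" and lenH: "length (gext H) = length (gatt K e0)"
  shows "isomorphic (repls (repl (repl K e Dt) e0 H) (shift_edges (eoff K) ds0))
    (repls (repl (repl K e0 H) e Dt) (shift_edges (eoff (repl K e0 H)) ds0))"
proof -
  define Hs0 where "Hs0 = (\<lambda>_::nat. K)"
  have compR: "\<forall>p\<in>set ds0. wf_graph (snd p) \<and> length (gext (snd p)) = length (gatt Dt (fst p))
    \<and> (\<forall>z\<in>gE (snd p). glab (snd p) z = glab (snd p) z)"
    using comp by simp
  have isoH: "iso_via (=) id id H H" by (rule iso_via_id[OF wfH]) simp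
  have isoD: "iso_via (=) id id Dt Dt" by (rule iso_via_id[OF wfDt]) simp
  obtain iH jH where X0: "sim_repl (=) K {e} (Hs0(e := Dt)) (repl K e Dt) id iH id jH" and jH: "\<forall>y. jH e y = eoff K + y"
    using sim_repl_repl[OF wfK e wfDt lenDt] by blast
  have X1: "sim_repl (=) K (insert e0 {e}) ((Hs0(e := Dt))(e0 := H)) (repl (repl K e Dt) (id e0) H) id
    (iH(e0 := repl_node (repl K e Dt) (id e0) H \<circ> id)) id (jH(e0 := \<lambda>y. eoff (repl K e Dt) + id y))"
    by (rule sim_repl.repl_host_edge[OF X0 e0 _ wfH lenH isoH]) (use ne in simp)
  have "\<exists>iH' jH'. sim_repl (=) K (insert e0 {e}) (((Hs0(e := Dt))(e0 := H))(e := repls (((Hs0(e := Dt))(e0 := H)) e) ds0))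
      (repls (repl (repl K e Dt) (id e0) H) (map (\<lambda>p. ((jH(e0 := \<lambda>y. eoff (repl K e Dt) + id y)) e (fst p), snd p))
        ds0)) id iH' id jH'
     \<and> (\<forall>z\<in>gE (((Hs0(e := Dt))(e0 := H)) e) - set (map fst ds0). jH' e z = (jH(e0 := \<lambda>y. eoff (repl K e Dt) + id y)) e z)"
    by (rule sim_repl_repls_part[OF X1 _ dis]) (use ne sub compR in auto)
  then obtain iHx jHx where X: "sim_repl (=) K (insert e0 {e}) (Hs0(e0 := H, e := repls Dt ds0))
      (repls (repl (repl K e Dt) e0 H) (shift_edges (eoff K) ds0)) id iHx id jHx"
    using ne jH by (auto simp: fun_upd_twist)
  obtain iH' jH' where Y0: "sim_repl (=) K {e0} (Hs0(e0 := H)) (repl K e0 H) id iH' id jH'"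
    using sim_repl_repl[OF wfK e0 wfH lenH] by blast
  have Y1: "sim_repl (=) K (insert e {e0}) ((Hs0(e0 := H))(e := Dt)) (repl (repl K e0 H) (id e) Dt) id
    (iH'(e := repl_node (repl K e0 H) (id e) Dt \<circ> id)) id (jH'(e := \<lambda>y. eoff (repl K e0 H) + id y))"
    by (rule sim_repl.repl_host_edge[OF Y0 e _ wfDt lenDt isoD]) (use ne in simp)
  have "\<exists>iH' jH'a. sim_repl (=) K (insert e {e0}) (((Hs0(e0 := H))(e := Dt))(e := repls (((Hs0(e0 := H))(e := Dt)) e) ds0))
      (repls (repl (repl K e0 H) (id e) Dt) (map (\<lambda>p. ((jH'(e := \<lambda>y. eoff (repl K e0 H) + id y)) e (fst p), snd p))
        ds0)) id iH' id jH'a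
     \<and> (\<forall>z\<in>gE (((Hs0(e0 := H))(e := Dt)) e) - set (map fst ds0). jH'a e z = (jH'(e := \<lambda>y. eoff (repl K e0 H) + id y)) e z)"
    by (rule sim_repl_repls_part[OF Y1 _ dis]) (use sub compR in auto)
  then obtain iHy jHy where Y: "sim_repl (=) K (insert e {e0}) (Hs0(e0 := H, e := repls Dt ds0))
      (repls (repl (repl K e0 H) e Dt) (shift_edges (eoff (repl K e0 H)) ds0)) id iHy id jHy"
    by auto
  have "insert e {e0} = insert e0 {e}" by blast
  then show ?thesis using sim_repl_isomorphic[OF X] Y by simp
qed

lemma repl_div_left_principal:
  assumes wfK: "wf_graph K" and e: "e \<in> gE K" and wfDt: "wf_graph Dt" and lenDt: "length (gext Dt) = length (gatt K e)"
    and d0: "d0 \<in> gE Dt" and dis: "distinct (map fst ds0)" and sub: "set (map fst ds0) \<subseteq> gE Dt - {d0}"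
    and comp: "\<forall>p\<in>set ds0. wf_graph (snd p) \<and> length (gext (snd p)) = length (gatt Dt (fst p)) "
    and wfH: "wf_graph H" and lenH: "length (gext H) = length (gatt Dt d0)"
  shows "isomorphic (repls (repl (repl K e Dt) (eoff K + d0) H) (shift_edges (eoff K) ds0))
    (repl K e (repls (repl Dt d0 H) ds0))"
proof -
  define Hs0 where "Hs0 = (\<lambda>_::nat. K)"
  have fE: "finite (gE Dt)" using wfDt unfolding wf_graph_def by blast
  obtain iH jH where X0: "sim_repl (=) K {e} (Hs0(e := Dt)) (repl K e Dt) id iH id jH" and jH: "\<forall>y. jH e y = eoff K + y"
    using sim_repl_repl[OF wfK e wfDt lenDt] by blast
  define jH1 where "jH1 = jH(e := lift_edge ((Hs0(e := Dt)) e) (repl K e Dt) (jH e))"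
  have X1: "sim_repl (=) K {e} ((Hs0(e := Dt))(e := repl ((Hs0(e := Dt)) e) d0 H)) (repl (repl K e Dt) (jH e d0) H) id
     (iH(e := lift_node ((Hs0(e := Dt)) e) (repl K e Dt) (iH e))) id jH1"
    unfolding jH1_def by (rule sim_repl_repl_part_edge[OF X0]) (use d0 wfH lenH in auto)
  have wfDH: "wf_graph (repl Dt d0 H)" by (rule wf_graph_repl[OF wfDt d0 wfH lenH])
  have compR: "\<forall>p\<in>set ds0. wf_graph (snd p) \<and> length (gext (snd p)) = length (gatt (repl Dt d0 H) (fst p))
    \<and> (\<forall>z\<in>gE (snd p). glab (snd p) z = glab (snd p) z)"
    using comp sub fE by (auto simp: gatt_repl_host)
  have "\<exists>iH' jH'. sim_repl (=) K {e} (((Hs0(e := Dt))(e := repl ((Hs0(e := Dt)) e) d0 H))(e := repls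
    (((Hs0(e := Dt))(e := repl ((Hs0(e := Dt)) e) d0 H)) e) ds0))
      (repls (repl (repl K e Dt) (jH e d0) H) (map (\<lambda>p. (jH1 e (fst p), snd p)) ds0)) id iH' id jH'
     \<and> (\<forall>z\<in>gE (((Hs0(e := Dt))(e := repl ((Hs0(e := Dt)) e) d0 H)) e) - set (map fst ds0). jH' e z = jH1 e z)"
    by (rule sim_repl_repls_part[OF X1 _ dis]) (use sub compR in auto)
  then obtain iHx jHx where X: "sim_repl (=) K {e} (Hs0(e := repls (repl Dt d0 H) ds0))
      (repls (repl (repl K e Dt) (eoff K + d0) H) (map (\<lambda>p. (jH1 e (fst p), snd p)) ds0)) id iHx id jHx"
    using jH by auto
  have meq: "map (\<lambda>p. (jH1 e (fst p), snd p)) ds0 = shift_edges (eoff K) ds0"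
  proof (rule map_cong[OF refl])
    fix p assume "p \<in> set ds0"
    then have "fst p \<in> gE Dt" using sub by auto
    then have "fst p < eoff Dt" using less_eoff[OF fE] by blast
    then show "(jH1 e (fst p), snd p) = (eoff K + fst p, snd p)" unfolding jH1_def lift_edge_def using jH by simp
  qed
  have X': "sim_repl (=) K {e} (Hs0(e := repls (repl Dt d0 H) ds0))
      (repls (repl (repl K e Dt) (eoff K + d0) H) (shift_edges (eoff K) ds0)) id iHx id jHx" by (rule X[unfolded meq])
  have wfW: "wf_graph (repls (repl Dt d0 H) ds0)"
    by (rule wf_repls[OF wfDH dis]) (use sub compR in auto)
  have "\<exists>iH jH. sim_repl (=) K {e} (Hs0(e := repls (repl Dt d0 H) ds0)) (repl K e (repls (repl Dt d0 H) ds0)) id iH id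
    jH \<and> (\<forall>y. jH e y = eoff K + y)"
    by (rule sim_repl_repl[OF wfK e wfW]) (simp add: lenDt)
  then obtain iHy jHy where Y: "sim_repl (=) K {e} (Hs0(e := repls (repl Dt d0 H) ds0))
    (repl K e (repls (repl Dt d0 H) ds0)) id iHy id jHy" by blast
  show ?thesis by (rule sim_repl_isomorphic[OF X' Y])
qed

lemma repl_into_div_left:
  assumes wfG: "wf_graph G" and e0: "e0 \<in> gE G" and wfK: "wf_graph K" and lenK: "length (gext K) = length (gatt G e0)"
    and e: "e \<in> gE K" and wfDt: "wf_graph Dt" and lenDt: "length (gext Dt) = length (gatt K e)"
    and dis: "distinct (map fst ds0)" and sub: "set (map fst ds0) \<subseteq> gE Dt"
    and comp: "\<forall>p\<in>set ds0. wf_graph (snd p) \<and> length (gext (snd p)) = length (gatt Dt (fst p)) "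
  shows "isomorphic (repl G e0 (repls (repl K e Dt) (shift_edges (eoff K) ds0)))
     (repls (repl (repl G e0 K) (eoff G + e) Dt) (shift_edges (eoff (repl G e0 K)) ds0))"
proof -
  define Hs0 where "Hs0 = (\<lambda>_::nat. K)"
  define C where "C = repls (repl K e Dt) (shift_edges (eoff K) ds0)"
  have wfKD: "wf_graph (repl K e Dt)" by (rule wf_graph_repl[OF wfK e wfDt lenDt])
  have compS: "\<forall>p\<in>set (shift_edges (eoff K) ds0). wf_graph (snd p) \<and> length (gext (snd p)) = length
    (gatt (repl K e Dt) (fst p)) \<and> (\<forall>z\<in>gE (snd p). glab (snd p) z = glab (snd p) z)"
    using comp by auto
  have subS: "set (map fst (shift_edges (eoff K) ds0)) \<subseteq> gE (repl K e Dt)" using sub by auto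
  have wfC: "wf_graph C" unfolding C_def by (rule wf_repls[OF wfKD distinct_shift_edges[OF dis] subS]) (use compS in blast)
  have "\<exists>iH jH. sim_repl (=) G {e0} (Hs0(e0 := C)) (repl G e0 C) id iH id jH \<and> (\<forall>y. jH e0 y = eoff G + y)"
    by (rule sim_repl_repl[OF wfG e0 wfC]) (simp add: C_def lenK)
  then obtain iHx jHx where X: "sim_repl (=) G {e0} (Hs0(e0 := C)) (repl G e0 C) id iHx id jHx" by blast
  obtain iH jH where Y0: "sim_repl (=) G {e0} (Hs0(e0 := K)) (repl G e0 K) id iH id jH" and jH: "\<forall>y. jH e0 y = eoff G + y"
    using sim_repl_repl[OF wfG e0 wfK lenK] by blast
  define jH1 where "jH1 = jH(e0 := lift_edge ((Hs0(e0 := K)) e0) (repl G e0 K) (jH e0))"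
  have Y1: "sim_repl (=) G {e0} ((Hs0(e0 := K))(e0 := repl ((Hs0(e0 := K)) e0) e Dt)) (repl (repl G e0 K) (jH e0 e) Dt) id
     (iH(e0 := lift_node ((Hs0(e0 := K)) e0) (repl G e0 K) (iH e0))) id jH1"
    unfolding jH1_def by (rule sim_repl_repl_part_edge[OF Y0]) (use e wfDt lenDt in auto)
  have "\<exists>iH' jH'. sim_repl (=) G {e0} (((Hs0(e0 := K))(e0 := repl ((Hs0(e0 := K)) e0) e Dt))(e0 := repls
    (((Hs0(e0 := K))(e0 := repl ((Hs0(e0 := K)) e0) e Dt)) e0) (shift_edges (eoff K) ds0)))
      (repls (repl (repl G e0 K) (jH e0 e) Dt) (map (\<lambda>p. (jH1 e0 (fst p), snd p)) (shift_edges (eoff K) ds0))) id iH' id jH'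
     \<and> (\<forall>z\<in>gE (((Hs0(e0 := K))(e0 := repl ((Hs0(e0 := K)) e0) e Dt)) e0) - set (map fst (shift_edges (eoff K) ds0)).
       jH' e0 z = jH1 e0 z)"
    by (rule sim_repl_repls_part[OF Y1 _ distinct_shift_edges[OF dis]]) (use subS compS in auto)
  then obtain iHy jHy where Y0': "sim_repl (=) G {e0}
    (((Hs0(e0 := K))(e0 := repl ((Hs0(e0 := K)) e0) e Dt))(e0 := repls
    (((Hs0(e0 := K))(e0 := repl ((Hs0(e0 := K)) e0) e Dt)) e0) (shift_edges (eoff K) ds0)))
      (repls (repl (repl G e0 K) (jH e0 e) Dt) (map (\<lambda>p. (jH1 e0 (fst p), snd p)) (shift_edges (eoff K) ds0))) id iHy id jHy"
    by blast
  have heq: "((Hs0(e0 := K))(e0 := repl ((Hs0(e0 := K)) e0) e Dt))(e0 := repls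
    (((Hs0(e0 := K))(e0 := repl ((Hs0(e0 := K)) e0) e Dt)) e0) (shift_edges (eoff K) ds0)) = Hs0(e0 := C)"
    unfolding C_def by simp
  have meq: "map (\<lambda>p. (jH1 e0 (fst p), snd p)) (shift_edges (eoff K) ds0) = shift_edges (eoff (repl G e0 K)) ds0"
    unfolding jH1_def lift_edge_def by simp
  have Y: "sim_repl (=) G {e0} (Hs0(e0 := C)) (repls (repl (repl G e0 K) (eoff G + e) Dt)
    (shift_edges (eoff (repl G e0 K)) ds0)) id iHy id jHy"
    using Y0'[unfolded heq meq] jH by simp
  show ?thesis using sim_repl_isomorphic[OF X Y] unfolding C_def .
qed

lemma repl_times_principal:
  assumes wfG: "wf_graph G" and e0: "e0 \<in> gE G" and wfM: "wf_graph M" and lenM: "length (gext M) = length (gatt G e0)"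
    and dis: "distinct (map fst ms)" and sub: "set (map fst ms) \<subseteq> gE M"
    and comp: "\<forall>p\<in>set ms. wf_graph (snd p) \<and> length (gext (snd p)) = length (gatt M (fst p))"
  shows "isomorphic (repls (repl G e0 M) (shift_edges (eoff G) ms)) (repl G e0 (repls M ms))"
proof -
  define Hs0 where "Hs0 = (\<lambda>_::nat. M)"
  obtain iH jH where X0: "sim_repl (=) G {e0} (Hs0(e0 := M)) (repl G e0 M) id iH id jH" and jH: "\<forall>y. jH e0 y = eoff G + y"
    using sim_repl_repl[OF wfG e0 wfM lenM] by blast
  have "\<exists>iH' jH'. sim_repl (=) G {e0} ((Hs0(e0 := M))(e0 := repls ((Hs0(e0 := M)) e0) ms))
      (repls (repl G e0 M) (map (\<lambda>p. (jH e0 (fst p), snd p)) ms)) id iH' id jH'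
     \<and> (\<forall>z\<in>gE ((Hs0(e0 := M)) e0) - set (map fst ms). jH' e0 z = jH e0 z)"
    by (rule sim_repl_repls_part[OF X0 _ dis]) (use sub comp in auto)
  then obtain iHx jHx where X: "sim_repl (=) G {e0} (Hs0(e0 := repls M ms))
    (repls (repl G e0 M) (shift_edges (eoff G) ms)) id iHx id jHx"
    using jH by auto
  have wfR: "wf_graph (repls M ms)" by (rule wf_repls[OF wfM dis sub comp])
  have "\<exists>iH jH. sim_repl (=) G {e0} (Hs0(e0 := repls M ms)) (repl G e0 (repls M ms)) id iH id jH \<and> (\<forall>y. jH e0 y = eoff G + y)"
    by (rule sim_repl_repl[OF wfG e0 wfR]) (simp add: lenM)
  then obtain iHy jHy where Y: "sim_repl (=) G {e0} (Hs0(e0 := repls M ms)) (repl G e0 (repls M ms)) id iHy id jHy" by blast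
  show ?thesis by (rule sim_repl_isomorphic[OF X Y])
qed

lemma tp_eq_refl: "tp_eq t t"
proof (induction t)
  case (Prim x) then show ?case by (rule tp_eq.intros)
next
  case (Div N D)
  have "iso_via (rel_option tp_eq) id id D D"
    unfolding iso_via_def
  proof (intro conjI ballI)
    fix e assume "e \<in> gE D"
    show "rel_option tp_eq (glab D e) (glab D (id e))"
    proof (cases "glab D e")
      case None then show ?thesis by simp
    next
      case (Some t)
      have "Some t \<in> set_hgraph D" using Some by (cases D) (auto simp: image_iff, metis)
      then have "tp_eq t t" using Div.IH(2)[of "Some t" t] by simp
      then show ?thesis using Some by simp
    qed
  qed auto
  then have "giso_rel (rel_option tp_eq) D D" unfolding giso_rel_iff by blast
  then show ?case using Div.IH(1) by (rule tp_eq.intros(2)[rotated])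
next
  case (Times M)
  have "iso_via tp_eq id id M M"
    unfolding iso_via_def
  proof (intro conjI ballI)
    fix e assume "e \<in> gE M"
    show "tp_eq (glab M e) (glab M (id e))"
      using Times.IH by (cases M) auto
  qed auto
  then have "giso_rel tp_eq M M" unfolding giso_rel_iff by blast
  then show ?case by (rule tp_eq.intros(3))
qed

lemma tp_eq_trans: "tp_eq a b \<Longrightarrow> tp_eq b c \<Longrightarrow> tp_eq a c"
proof (induction a b arbitrary: c rule: tp_eq.induct)
  case (1 p) then show ?case by simp
next
  case (2 N N' D D')
  from 2(4) obtain N'' D'' where c: "c = Div N'' D''" "tp_eq N' N''" "giso_rel (rel_option tp_eq) D' D''"
    by (cases rule: tp_eq.cases) auto
  have g: "giso_rel (rel_option (\<lambda>x1 x2. tp_eq x1 x2 \<and> (\<forall>c. tp_eq x2 c \<longrightarrow> tp_eq x1 c)) OO rel_option tp_eq) D D''"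
    by (rule giso_rel_trans[OF 2(3) c(3)])
  have le: "rel_option (\<lambda>x1 x2. tp_eq x1 x2 \<and> (\<forall>c. tp_eq x2 c \<longrightarrow> tp_eq x1 c)) OO rel_option tp_eq \<le> rel_option tp_eq"
    by (auto simp: option.rel_sel relcompp_apply le_fun_def)
  have "giso_rel (rel_option tp_eq) D D''" by (rule giso_rel_mono[OF le, THEN predicate2D, OF g])
  then show ?case using c 2(2) by (auto intro: tp_eq.intros)
next
  case (3 M M')
  from 3(2) obtain M'' where c: "c = Times M''" "giso_rel tp_eq M' M''"
    by (cases rule: tp_eq.cases) auto
  have g: "giso_rel ((\<lambda>x1 x2. tp_eq x1 x2 \<and> (\<forall>c. tp_eq x2 c \<longrightarrow> tp_eq x1 c)) OO tp_eq) M M''"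
    by (rule giso_rel_trans[OF 3(1) c(2)])
  have le: "((\<lambda>x1 x2. tp_eq x1 x2 \<and> (\<forall>c. tp_eq x2 c \<longrightarrow> tp_eq x1 c)) OO tp_eq) \<le> tp_eq"
    by (auto simp: relcompp_apply le_fun_def)
  have "giso_rel tp_eq M M''" by (rule giso_rel_mono[OF le, THEN predicate2D, OF g])
  then show ?case using c by (auto intro: tp_eq.intros)
qed

inductive_cases wf_DivE: "wf_tp ar (Div N D)"

inductive_cases wf_TimesE: "wf_tp ar (Times M)"

inductive_cases tp_eq_PrimE1: "tp_eq (Prim p) b"

inductive_cases tp_eq_PrimE2: "tp_eq a (Prim p)"

inductive_cases tp_eq_DivE1: "tp_eq (Div N D) b"

inductive_cases tp_eq_DivE2: "tp_eq a (Div N D)"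

inductive_cases tp_eq_TimesE1: "tp_eq (Times M) b"

inductive_cases tp_eq_TimesE2: "tp_eq a (Times M)"

lemma div_dollar:
  assumes "wf_tp ar (Div N D)" "d \<in> gE D" "glab D d = None"
  shows "tp_type ar (Div N D) = length (gatt D d)" "\<And>d'. d' \<in> gE D \<Longrightarrow> glab D d' = None \<Longrightarrow> d' = d"
proof -
  obtain d0 where d0: "d0 \<in> gE D" "glab D d0 = None"
    and oth: "\<forall>d\<in>gE D - {d0}. \<exists>t. glab D d = Some t \<and> wf_tp ar t \<and> tp_type ar t = length (gatt D d)"
    using assms(1) by (rule wf_DivE) blast
  have u: "\<And>d'. d' \<in> gE D \<Longrightarrow> glab D d' = None \<Longrightarrow> d' = d0" using oth by (metis DiffI option.simps(3) singletonD)
  show "\<And>d'. d' \<in> gE D \<Longrightarrow> glab D d' = None \<Longrightarrow> d' = d" using u assms(2,3) by metis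
  have "(SOME d. d \<in> gE D \<and> glab D d = None) = d0"
    using someI_ex[of "\<lambda>d. d \<in> gE D \<and> glab D d = None"] d0 u by blast
  then show "tp_type ar (Div N D) = length (gatt D d)" using u assms(2,3) by simp
qed

lemma tp_eq_wf: "tp_eq a b \<Longrightarrow> wf_tp ar a \<Longrightarrow> wf_tp ar b \<and> tp_type ar b = tp_type ar a"
proof (induction a b rule: tp_eq.induct)
  case (1 p) then show ?case by simp
next
  case (2 N N' D D')
  obtain d0 where d0: "d0 \<in> gE D" "glab D d0 = None" and wfN: "wf_tp ar N" and wfD: "wf_graph D"
    and oth: "\<forall>d\<in>gE D - {d0}. \<exists>t. glab D d = Some t \<and> wf_tp ar t \<and> tp_type ar t = length (gatt D d)"
    and tN: "tp_type ar N = length (gext D)"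
    using 2(4) by (rule wf_DivE) blast
  obtain f g where iso: "iso_via (rel_option (\<lambda>x1 x2. tp_eq x1 x2
    \<and> (wf_tp ar x1 \<longrightarrow> wf_tp ar x2 \<and> tp_type ar x2 = tp_type ar x1))) f g D D'"
    using 2(3) unfolding giso_rel_iff by blast
  have wfD': "wf_graph D'" by (rule wf_graph_iso[OF iso wfD])
  have gd0: "g d0 \<in> gE D'" "glab D' (g d0) = None" using iso_via_edge[OF iso d0(1)] iso_via_lab[OF iso d0(1)] d0(2) by auto
  have oth': "\<forall>d\<in>gE D' - {g d0}. \<exists>t. glab D' d = Some t \<and> wf_tp ar t \<and> tp_type ar t = length (gatt D' d)"
  proof
    fix d' assume d': "d' \<in> gE D' - {g d0}"
    then obtain d where d: "d \<in> gE D" "d' = g d" using iso_via_edge_inv[OF iso] by blast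
    then have "d \<noteq> d0" using d' by auto
    then obtain t where t: "glab D d = Some t" "wf_tp ar t" "tp_type ar t = length (gatt D d)" using oth d by blast
    have r: "rel_option (\<lambda>x1 x2. tp_eq x1 x2 \<and> (wf_tp ar x1 \<longrightarrow> wf_tp ar x2 \<and> tp_type ar x2 = tp_type ar x1))
      (glab D d) (glab D' d')"
      using iso_via_lab[OF iso d(1)] d(2) by simp
    then obtain t' where t': "glab D' d' = Some t'" "wf_tp ar t'" "tp_type ar t' = tp_type ar t"
      using t by (cases "glab D' d'") auto
    have "length (gatt D' d') = length (gatt D d)" using iso_via_att[OF iso d(1)] d(2) by simp
    then show "\<exists>t. glab D' d' = Some t \<and> wf_tp ar t \<and> tp_type ar t = length (gatt D' d')" using t t' by auto
  qed
  have N': "wf_tp ar N' \<and> tp_type ar N' = tp_type ar N" using 2(2) wfN by blast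
  have "length (gext D') = length (gext D)" using iso_via_ext[OF iso] by simp
  then have wf': "wf_tp ar (Div N' D')" using N' tN by (intro wf_Div[OF _ wfD' gd0 oth']) auto
  have "tp_type ar (Div N' D') = length (gatt D' (g d0))" by (rule div_dollar(1)[OF wf' gd0])
  also have "\<dots> = length (gatt D d0)" using iso_via_att[OF iso d0(1)] by simp
  also have "\<dots> = tp_type ar (Div N D)" by (rule div_dollar(1)[OF 2(4) d0, symmetric])
  finally show ?case using wf' by simp
next
  case (3 M M')
  have wfM: "wf_graph M" and oth: "\<forall>m\<in>gE M. wf_tp ar (glab M m) \<and> tp_type ar (glab M m) = length (gatt M m)"
    using 3(2) by (rule wf_TimesE, blast)+
  obtain f g where iso: "iso_via (\<lambda>x1 x2. tp_eq x1 x2 \<and> (wf_tp ar x1 \<longrightarrow> wf_tp ar x2 \<and> tp_type ar x2 = tp_type ar x1)) f g M M'"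
    using 3(1) unfolding giso_rel_iff by blast
  have wfM': "wf_graph M'" by (rule wf_graph_iso[OF iso wfM])
  have oth': "\<forall>m\<in>gE M'. wf_tp ar (glab M' m) \<and> tp_type ar (glab M' m) = length (gatt M' m)"
  proof
    fix m' assume "m' \<in> gE M'"
    then obtain m where m: "m \<in> gE M" "m' = g m" using iso_via_edge_inv[OF iso] by blast
    show "wf_tp ar (glab M' m') \<and> tp_type ar (glab M' m') = length (gatt M' m')"
      using iso_via_lab[OF iso m(1)] iso_via_att[OF iso m(1)] oth m by auto
  qed
  have "wf_tp ar (Times M')" by (rule wf_Times[OF wfM' oth'])
  then show ?case using iso_via_ext[OF iso] by simp
qed

lemma tp_eq_sym: "tp_eq a b \<Longrightarrow> wf_tp ar a \<Longrightarrow> tp_eq b a"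
proof (induction a b rule: tp_eq.induct)
  case (1 p) show ?case by (rule tp_eq.intros)
next
  case (2 N N' D D')
  obtain d0 where d0: "d0 \<in> gE D" "glab D d0 = None" and wfN: "wf_tp ar N" and wfD: "wf_graph D"
    and oth: "\<forall>d\<in>gE D - {d0}. \<exists>t. glab D d = Some t \<and> wf_tp ar t \<and> tp_type ar t = length (gatt D d)"
    using 2(4) by (rule wf_DivE) blast
  obtain f g where iso: "iso_via (rel_option (\<lambda>x1 x2. tp_eq x1 x2 \<and> (wf_tp ar x1 \<longrightarrow> tp_eq x2 x1))) f g D D'"
    using 2(3) unfolding giso_rel_iff by blast
  have wl: "\<And>d t. d \<in> gE D \<Longrightarrow> glab D d = Some t \<Longrightarrow> wf_tp ar t"
    using oth d0 by (metis DiffI option.distinct(1) option.inject singletonD)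
  have iso2: "iso_via (\<lambda>a b. rel_option (\<lambda>x1 x2. tp_eq x1 x2 \<and> (wf_tp ar x1 \<longrightarrow> tp_eq x2 x1)) b a \<and> (\<forall>t. b = Some t \<longrightarrow> wf_tp ar t))
     (inv_into (gV D) f) (inv_into (gE D) g) D' D"
  proof (rule iso_via_strengthen[OF iso_via_inv[OF iso wfD]])
    fix e' assume "e' \<in> gE D'"
    then have "inv_into (gE D) g e' \<in> gE D" using iso_via_edge[OF iso_via_inv[OF iso wfD]] by blast
    then show "\<forall>t. glab D (inv_into (gE D) g e') = Some t \<longrightarrow> wf_tp ar t" using wl by blast
  qed
  have "iso_via (rel_option tp_eq) (inv_into (gV D) f) (inv_into (gE D) g) D' D"
    by (rule iso_via_mono[OF iso2]) (auto simp: option.rel_sel)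
  then have "giso_rel (rel_option tp_eq) D' D" unfolding giso_rel_iff by blast
  then show ?case using 2(2) wfN by (auto intro: tp_eq.intros)
next
  case (3 M M')
  have wfM: "wf_graph M" and oth: "\<forall>m\<in>gE M. wf_tp ar (glab M m) \<and> tp_type ar (glab M m) = length (gatt M m)"
    using 3(2) by (rule wf_TimesE, blast)+
  obtain f g where iso: "iso_via (\<lambda>x1 x2. tp_eq x1 x2 \<and> (wf_tp ar x1 \<longrightarrow> tp_eq x2 x1)) f g M M'"
    using 3(1) unfolding giso_rel_iff by blast
  have iso2: "iso_via (\<lambda>a b. (\<lambda>x1 x2. tp_eq x1 x2 \<and> (wf_tp ar x1 \<longrightarrow> tp_eq x2 x1)) b a \<and> wf_tp ar b)
     (inv_into (gV M) f) (inv_into (gE M) g) M' M"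
  proof (rule iso_via_strengthen[OF iso_via_inv[OF iso wfM]])
    fix e' assume "e' \<in> gE M'"
    then have "inv_into (gE M) g e' \<in> gE M" using iso_via_edge[OF iso_via_inv[OF iso wfM]] by blast
    then show "wf_tp ar (glab M (inv_into (gE M) g e'))" using oth by blast
  qed
  have "iso_via tp_eq (inv_into (gV M) f) (inv_into (gE M) g) M' M"
    by (rule iso_via_mono[OF iso2]) auto
  then have "giso_rel tp_eq M' M" unfolding giso_rel_iff by blast
  then show ?case by (auto intro: tp_eq.intros)
qed

lemma tp_eq_tp_type: "wf_tp ar A \<Longrightarrow> tp_eq A T1 \<Longrightarrow> tp_eq A T2 \<Longrightarrow> tp_type ar T1 = tp_type ar T2"
  using tp_eq_wf by metis

lemma iso_via_relab_div:
  assumes iso: "iso_via (rel_option tp_eq) f g D1 D" and d1: "d1 \<in> gE D1" and gd: "g d1 = d0"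
    and some: "\<forall>x\<in>gE D1 - {d1}. glab D1 x \<noteq> None"
  shows "iso_via tp_eq f g (relab (map_hgraph the D1) d1 L) (map_hgraph the (relab D d0 (Some L)))"
  unfolding iso_via_def
proof (intro conjI ballI)
  show "bij_betw f (gV (relab (map_hgraph the D1) d1 L)) (gV (map_hgraph the (relab D d0 (Some L))))"
    "bij_betw g (gE (relab (map_hgraph the D1) d1 L)) (gE (map_hgraph the (relab D d0 (Some L))))"
    "gext (map_hgraph the (relab D d0 (Some L))) = map f (gext (relab (map_hgraph the D1) d1 L))"
    using iso unfolding iso_via_def by auto
next
  fix x assume x: "x \<in> gE (relab (map_hgraph the D1) d1 L)"
  then have x': "x \<in> gE D1" by simp
  show "gatt (map_hgraph the (relab D d0 (Some L))) (g x) = map f (gatt (relab (map_hgraph the D1) d1 L) x)"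
    using iso_via_att[OF iso x'] by simp
  show "tp_eq (glab (relab (map_hgraph the D1) d1 L) x) (glab (map_hgraph the (relab D d0 (Some L))) (g x))"
  proof (cases "x = d1")
    case True then show ?thesis using gd by (simp add: tp_eq_refl)
  next
    case False
    have "g x \<noteq> d0" using iso_via_inj[OF iso x' d1] False gd by auto
    moreover have r: "rel_option tp_eq (glab D1 x) (glab D (g x))" using iso_via_lab[OF iso x'] .
    moreover have "glab D1 x \<noteq> None" using some x' False by blast
    ultimately show ?thesis using False by (cases "glab D1 x"; cases "glab D (g x)") auto
  qed
qed

lemma wf_seq_handle: "wf_seq ar (handle (Prim p) (ar p)) (Prim p)"
  unfolding wf_seq_def by (simp add: wf_handle wf_Prim)

lemma deriv_wf: "deriv ar c H A \<Longrightarrow> wf_seq ar H A"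
  by (induction rule: deriv.induct) (auto simp: wf_seq_handle)

lemma wf_seqD: assumes "wf_seq ar G B"
  shows "wf_graph G" "\<And>e. e \<in> gE G \<Longrightarrow> wf_tp ar (glab G e)" "\<And>e. e \<in> gE G \<Longrightarrow> tp_type ar (glab G e) = length (gatt G e)"
    "wf_tp ar B" "length (gext G) = tp_type ar B"
  using assms unfolding wf_seq_def by auto

lemma wf_seq_repl:
  assumes G: "wf_seq ar G B" and e: "e \<in> gE G" and H: "wf_seq ar H A" and len: "tp_type ar A = length (gatt G e)"
  shows "wf_seq ar (repl G e H) B"
proof -
  have wfG: "wf_graph G" and wfH: "wf_graph H" using G H by (auto dest: wf_seqD)
  have l: "length (gext H) = length (gatt G e)" using wf_seqD(5)[OF H] len by simp
  have fE: "finite (gE G)" using wfG unfolding wf_graph_def by blast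
  have "wf_graph (repl G e H)" by (rule wf_graph_repl[OF wfG e wfH l])
  moreover have "\<forall>x\<in>gE (repl G e H). wf_tp ar (glab (repl G e H) x) \<and> tp_type ar (glab (repl G e H) x) = length
    (gatt (repl G e H) x)"
    using wf_seqD(2,3)[OF G] wf_seqD(2,3)[OF H] fE by auto
  ultimately show ?thesis using wf_seqD(4,5)[OF G] unfolding wf_seq_def by simp
qed

lemma wf_seq_iso:
  assumes iso: "iso_via tp_eq f g G G'" and G: "wf_seq ar G B"
  shows "wf_seq ar G' B"
proof -
  have "wf_graph G'" by (rule wf_graph_iso[OF iso wf_seqD(1)[OF G]])
  moreover have "\<forall>x\<in>gE G'. wf_tp ar (glab G' x) \<and> tp_type ar (glab G' x) = length (gatt G' x)"
  proof
    fix x assume "x \<in> gE G'"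
    then obtain y where y: "y \<in> gE G" "x = g y" using iso_via_edge_inv[OF iso] by blast
    have "tp_eq (glab G y) (glab G' x)" using iso_via_lab[OF iso y(1)] y by simp
    then show "wf_tp ar (glab G' x) \<and> tp_type ar (glab G' x) = length (gatt G' x)"
      using tp_eq_wf wf_seqD(2,3)[OF G y(1)] iso_via_att[OF iso y(1)] y by fastforce
  qed
  ultimately show ?thesis using wf_seqD(4,5)[OF G] iso_via_ext[OF iso] unfolding wf_seq_def by simp
qed

lemma deriv_giso_rel:
  assumes "deriv ar c X A" "giso_rel tp_eq X Y" "tp_eq A A'"
  shows "deriv ar c Y A'"
proof -
  have wX: "wf_seq ar X A" by (rule deriv_wf[OF assms(1)])
  obtain f g where iso: "iso_via tp_eq f g X Y" using assms(2) unfolding giso_rel_iff by blast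
  have wY: "wf_seq ar Y A" by (rule wf_seq_iso[OF iso wX])
  have "wf_tp ar A' \<and> tp_type ar A' = tp_type ar A" using tp_eq_wf[OF assms(3) wf_seqD(4)[OF wX]] .
  then have "wf_seq ar Y A'" using wY unfolding wf_seq_def by simp
  then show ?thesis by (rule deriv.iso[OF assms(1,2,3)])
qed

lemma isomorphic_giso_rel: "isomorphic X Y \<Longrightarrow> giso_rel tp_eq X Y"
  unfolding isomorphic_def giso_rel_iff using iso_via_mono[of "(=)" _ _ X Y tp_eq] tp_eq_refl by blast

lemma deriv_isomorphic: "deriv ar c X A \<Longrightarrow> isomorphic X Y \<Longrightarrow> deriv ar c Y A"
  using deriv_giso_rel[OF _ isomorphic_giso_rel tp_eq_refl] by blast

lemma wf_seq_isomorphic: "isomorphic X Y \<Longrightarrow> wf_seq ar X B \<Longrightarrow> wf_seq ar Y B"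
  using wf_seq_iso isomorphic_giso_rel unfolding giso_rel_iff by blast

text \<open>The graph \<open>D[d\<^sub>0 := N \<div> D]\<close> of rule \<open>(\<div>\<rightarrow>)\<close>, with the \<open>option\<close> layer (\<open>None\<close> for \<open>$\<close>)
  removed.\<close>

definition div_graph :: "'p tp \<Rightarrow> 'p tp option hgraph \<Rightarrow> nat \<Rightarrow> 'p tp hgraph" where
"div_graph N D d0 = map_hgraph the (relab D d0 (Some (Div N D)))"

lemma div_left_graph_eq:
  "map_hgraph the (relab (repl (map_hgraph Some H) e D) (eoff H + d0) (Some L))
   = repl H e (map_hgraph the (relab D d0 (Some L)))"
proof -
  have "relab (repl (map_hgraph Some H) e D) (eoff H + d0) (Some L) = repl (map_hgraph Some H) e (relab D d0 (Some L))"
    using relab_repl_new[of "map_hgraph Some H" e D d0 "Some L"] by simp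
  then show ?thesis by (simp add: map_repl map_the_Some)
qed

lemma div_right_graph_eq: "map_hgraph the (repl D d0 (map_hgraph Some F)) = repl (map_hgraph the D) d0 F"
  by (simp add: map_repl map_the_Some)

lemma deriv_div_left:
  assumes "deriv ar c K A" "e \<in> gE K" "glab K e = N" "wf_tp ar (Div N D)" "d0 \<in> gE D" "glab D d0 = None"
    "distinct (map fst ds)" "set (map fst ds) = gE D - {d0}"
    "\<forall>i<length ds. deriv ar c (snd (ds ! i)) (the (glab D (fst (ds ! i))))"
    "wf_seq ar (repls (repl K e (div_graph N D d0)) (shift_edges (eoff K) ds)) A"
  shows "deriv ar c (repls (repl K e (div_graph N D d0)) (shift_edges (eoff K) ds)) A"
  using deriv.div_left[OF assms(1-9)] assms(10) unfolding div_graph_def div_left_graph_eq by simp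

lemma deriv_div_right:
  assumes "deriv ar c (repl (map_hgraph the D) d0 F) N" "wf_tp ar (Div N D)" "d0 \<in> gE D" "glab D d0 = None" "wf_seq
    ar F (Div N D)"
  shows "deriv ar c F (Div N D)"
  using deriv.div_right[of ar c D d0 F N] assms unfolding div_right_graph_eq by simp

lemma div_graph_facts:
  assumes wfd: "wf_tp ar (Div N D)" and d0: "d0 \<in> gE D" "glab D d0 = None"
  shows "wf_graph (div_graph N D d0)" "gE (div_graph N D d0) = gE D" "gatt (div_graph N D d0) = gatt D" "gext
    (div_graph N D d0) = gext D"
    "glab (div_graph N D d0) d0 = Div N D" "\<And>d. d \<noteq> d0 \<Longrightarrow> glab (div_graph N D d0) d = the (glab D d)"
    "length (gext D) = tp_type ar N" "\<And>d. d \<in> gE D - {d0} \<Longrightarrow> wf_tp ar (the (glab D d)) \<and> tp_type ar (the (glab D d)) =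
      length (gatt D d)"
    "wf_graph D" "wf_tp ar N"
proof -
  obtain d1 where d1: "d1 \<in> gE D" "glab D d1 = None" and wfN: "wf_tp ar N" and wfD: "wf_graph D"
    and oth: "\<forall>d\<in>gE D - {d1}. \<exists>t. glab D d = Some t \<and> wf_tp ar t \<and> tp_type ar t = length (gatt D d)"
    and tN: "tp_type ar N = length (gext D)"
    using wfd by (rule wf_DivE) blast
  have "d1 = d0" using div_dollar(2)[OF wfd d1] d0 by metis
  then have oth': "\<forall>d\<in>gE D - {d0}. \<exists>t. glab D d = Some t \<and> wf_tp ar t \<and> tp_type ar t = length (gatt D d)" using oth by simp
  show "wf_graph (div_graph N D d0)" "gE (div_graph N D d0) = gE D" "gatt (div_graph N D d0) = gatt D" "gext
    (div_graph N D d0) = gext D"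
    "glab (div_graph N D d0) d0 = Div N D" "\<And>d. d \<noteq> d0 \<Longrightarrow> glab (div_graph N D d0) d = the (glab D d)"
    "length (gext D) = tp_type ar N" "wf_graph D" "wf_tp ar N"
    using wfD tN wfN unfolding div_graph_def by auto
  show "\<And>d. d \<in> gE D - {d0} \<Longrightarrow> wf_tp ar (the (glab D d)) \<and> tp_type ar (the (glab D d)) = length (gatt D d)"
  proof -
    fix d assume "d \<in> gE D - {d0}"
    then obtain t where "glab D d = Some t" "wf_tp ar t" "tp_type ar t = length (gatt D d)" using oth' by blast
    then show "wf_tp ar (the (glab D d)) \<and> tp_type ar (the (glab D d)) = length (gatt D d)" by simp
  qed
qed

lemma div_left_facts:
  assumes K: "wf_seq ar K B" and e: "e \<in> gE K" and lab: "glab K e = N" and wfd: "wf_tp ar (Div N D)"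
    and d0: "d0 \<in> gE D" "glab D d0 = None" and dis: "distinct (map fst ds)" and ids: "set (map fst ds) = gE D - {d0}"
    and ders: "\<forall>i<length ds. deriv ar c (snd (ds ! i)) (the (glab D (fst (ds ! i))))"
  shows "length (gext (div_graph N D d0)) = length (gatt K e)"
    "\<forall>p\<in>set ds. wf_graph (snd p) \<and> length (gext (snd p)) = length (gatt (div_graph N D d0) (fst p))"
    "wf_graph (repl K e (div_graph N D d0))"
    "distinct (map fst (shift_edges (eoff K) ds))"
    "set (map fst (shift_edges (eoff K) ds)) \<subseteq> gE (repl K e (div_graph N D d0))"
    "\<forall>p\<in>set (shift_edges (eoff K) ds). wf_graph (snd p) \<and> length (gext (snd p)) = length
      (gatt (repl K e (div_graph N D d0)) (fst p))"
    "set (map fst ds) \<subseteq> gE (div_graph N D d0)"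
proof -
  note F = div_graph_facts[OF wfd d0]
  show l: "length (gext (div_graph N D d0)) = length (gatt K e)"
    using F(4,7) wf_seqD(3)[OF K e] lab by simp
  show c: "\<forall>p\<in>set ds. wf_graph (snd p) \<and> length (gext (snd p)) = length (gatt (div_graph N D d0) (fst p))"
  proof
    fix p assume "p \<in> set ds"
    then obtain i where i: "i < length ds" "p = ds ! i" by (metis in_set_conv_nth)
    have w: "wf_seq ar (snd p) (the (glab D (fst p)))" using deriv_wf ders i by blast
    have "fst p \<in> gE D - {d0}" using ids i by (metis nth_mem length_map nth_map)
    then show "wf_graph (snd p) \<and> length (gext (snd p)) = length (gatt (div_graph N D d0) (fst p))"
      using wf_seqD(1,5)[OF w] F(3,8) by simp
  qed
  show "wf_graph (repl K e (div_graph N D d0))" by (rule wf_graph_repl[OF wf_seqD(1)[OF K] e F(1) l])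
  show "distinct (map fst (shift_edges (eoff K) ds))" by (rule distinct_shift_edges[OF dis])
  show "set (map fst (shift_edges (eoff K) ds)) \<subseteq> gE (repl K e (div_graph N D d0))" using ids F(2) by auto
  show "\<forall>p\<in>set (shift_edges (eoff K) ds). wf_graph (snd p) \<and> length (gext (snd p)) = length
    (gatt (repl K e (div_graph N D d0)) (fst p))"
    using c by auto
  show "set (map fst ds) \<subseteq> gE (div_graph N D d0)" using ids F(2) by auto
qed

lemma wf_times_args:
  assumes "wf_tp ar (Times M)" "set (map fst ms) = gE M" "\<forall>i<length ms. HL ar (snd (ms ! i)) (glab M (fst (ms ! i)))"
  shows "\<forall>p\<in>set ms. wf_graph (snd p) \<and> length (gext (snd p)) = length (gatt M (fst p))"
proof
  fix p assume "p \<in> set ms"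
  then obtain i where i: "i < length ms" "p = ms ! i" by (metis in_set_conv_nth)
  have w: "wf_seq ar (snd p) (glab M (fst p))" using deriv_wf assms(3) i by blast
  have "fst p \<in> gE M" using assms(2) i by (metis nth_mem length_map nth_map)
  then show "wf_graph (snd p) \<and> length (gext (snd p)) = length (gatt M (fst p))"
    using wf_seqD(1,5)[OF w] assms(1) by (auto elim: wf_TimesE)
qed

section \<open>Cut admissibility\<close>

definition cut_into :: "('p \<Rightarrow> nat) \<Rightarrow> 'p tp \<Rightarrow> 'p tp hgraph \<Rightarrow> 'p tp hgraph \<Rightarrow> 'p tp \<Rightarrow> bool" where
"cut_into ar A H G B \<longleftrightarrow> (\<forall>e0\<in>gE G. tp_eq A (glab G e0) \<longrightarrow> HL ar (repl G e0 H) B)"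

definition cut_admissible :: "('p \<Rightarrow> nat) \<Rightarrow> 'p tp \<Rightarrow> bool" where
"cut_admissible ar A \<longleftrightarrow> (\<forall>H A1 G B. HL ar H A1 \<longrightarrow> tp_eq A A1 \<longrightarrow> HL ar G B \<longrightarrow> cut_into ar A H G B)"

lemma cut_admissible_tp_eq: "cut_admissible ar A \<Longrightarrow> tp_eq A T \<Longrightarrow> cut_admissible ar T"
  unfolding cut_admissible_def cut_into_def using tp_eq_trans by blast

lemma cut_admissibleD:
  "cut_admissible ar A \<Longrightarrow> HL ar H A1 \<Longrightarrow> tp_eq A A1 \<Longrightarrow> HL ar G B \<Longrightarrow> e0 \<in> gE G \<Longrightarrow> tp_eq A (glab G e0)
    \<Longrightarrow> HL ar (repl G e0 H) B"
  unfolding cut_admissible_def cut_into_def by blast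

text \<open>Cuts into an edge that is principal in the last step of the right premise: the edge
  labelled \<open>N \<div> D\<close> introduced by \<open>(\<div>\<rightarrow>)\<close>, or the edge labelled \<open>\<times>(F)\<close> decomposed by \<open>(\<times>\<rightarrow>)\<close>.\<close>

definition div_principal_cut :: "('p \<Rightarrow> nat) \<Rightarrow> 'p tp \<Rightarrow> 'p tp hgraph \<Rightarrow> bool" where
"div_principal_cut ar A H \<longleftrightarrow> (\<forall>K e N D d0 ds B. HL ar K B \<longrightarrow> e \<in> gE K \<longrightarrow> glab K e = N
   \<longrightarrow> wf_tp ar (Div N D) \<longrightarrow> d0 \<in> gE D \<longrightarrow> glab D d0 = None
   \<longrightarrow> distinct (map fst ds) \<longrightarrow> set (map fst ds) = gE D - {d0}
   \<longrightarrow> (\<forall>i<length ds. HL ar (snd (ds ! i)) (the (glab D (fst (ds ! i)))))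
   \<longrightarrow> wf_seq ar (repls (repl K e (div_graph N D d0)) (shift_edges (eoff K) ds)) B \<longrightarrow> tp_eq A (Div N D)
   \<longrightarrow> HL ar (repl (repls (repl K e (div_graph N D d0)) (shift_edges (eoff K) ds)) (eoff K + d0) H) B)"

definition times_principal_cut :: "('p \<Rightarrow> nat) \<Rightarrow> 'p tp \<Rightarrow> 'p tp hgraph \<Rightarrow> bool" where
"times_principal_cut ar A H \<longleftrightarrow> (\<forall>G e0 F B. HL ar (repl G e0 F) B \<longrightarrow> e0 \<in> gE G \<longrightarrow> glab G e0 = Times F
   \<longrightarrow> wf_seq ar G B \<longrightarrow> tp_eq A (Times F) \<longrightarrow> HL ar (repl G e0 H) B)"

lemma repls_cut_admissible:
  assumes "HL ar X N" "distinct (map fst ds)" "set (map fst ds) \<subseteq> gE X"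
    "\<forall>i<length ds. HL ar (snd (ds ! i)) (glab X (fst (ds ! i))) \<and> cut_admissible ar (glab X (fst (ds ! i)))"
  shows "HL ar (repls X ds) N"
  using assms
proof (induction ds arbitrary: X)
  case (Cons p ds)
  have p: "HL ar (snd p) (glab X (fst p))" "cut_admissible ar (glab X (fst p))"
    using Cons.prems(4) by (metis length_greater_0_conv list.discI nth_Cons_0)+
  have X1: "HL ar (repl X (fst p) (snd p)) N"
    by (rule cut_admissibleD[OF p(2) p(1) tp_eq_refl Cons.prems(1) _ tp_eq_refl]) (use Cons.prems(3) in simp)
  have fE: "finite (gE X)" using wf_seqD(1)[OF deriv_wf[OF Cons.prems(1)]] unfolding wf_graph_def by blast
  have sub: "set (map fst ds) \<subseteq> gE (repl X (fst p) (snd p))" using Cons.prems(2,3) by (fastforce simp: image_iff)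
  have lab: "\<And>d. d \<in> set (map fst ds) \<Longrightarrow> glab (repl X (fst p) (snd p)) d = glab X d"
    using Cons.prems(3) fE by auto
  have "\<forall>i<length ds. HL ar (snd (ds ! i)) (glab (repl X (fst p) (snd p)) (fst (ds ! i)))
      \<and> cut_admissible ar (glab (repl X (fst p) (snd p)) (fst (ds ! i)))"
    using Cons.prems(4) lab by (metis Suc_less_eq length_Cons nth_Cons_Suc nth_mem length_map nth_map)
  then show ?case using Cons.IH[OF X1] Cons.prems(2) sub by simp
qed simp

subsection \<open>Induction on the right premise\<close>

locale cut_left_premise =
  fixes ar :: "'p \<Rightarrow> nat" and A A1 :: "'p tp" and H :: "'p tp hgraph"
  assumes wf_A: "wf_tp ar A" and deriv_H: "HL ar H A1" and eq_A: "tp_eq A A1"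
begin

lemma wf_seq_H: "wf_seq ar H A1"
  by (rule deriv_wf[OF deriv_H])

lemma wf_graph_H: "wf_graph H"
  by (rule wf_seqD(1)[OF wf_seq_H])

lemma arity_H: "wf_seq ar G B \<Longrightarrow> e0 \<in> gE G \<Longrightarrow> tp_eq A (glab G e0) \<Longrightarrow> length (gext H) = length (gatt G e0)"
  using wf_seqD(5)[OF wf_seq_H] wf_seqD(3) tp_eq_tp_type[OF wf_A eq_A] by metis

lemma wf_seq_repl_H: "wf_seq ar G B \<Longrightarrow> e0 \<in> gE G \<Longrightarrow> tp_eq A (glab G e0) \<Longrightarrow> wf_seq ar (repl G e0 H) B"
  using wf_seq_repl[OF _ _ wf_seq_H] tp_eq_tp_type[OF wf_A eq_A] wf_seqD(3) by metis

lemma cut_into_isomorphic: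
  assumes "isomorphic (repl G e0 H) X" "HL ar X B"
  shows "HL ar (repl G e0 H) B"
  using deriv_isomorphic[OF assms(2) isomorphic_sym[OF assms(1)]] .

lemma cut_right_iso:
  assumes IH: "cut_into ar A H G0 B0" and dG0: "HL ar G0 B0" and iso: "giso_rel tp_eq G0 G"
    and eqB: "tp_eq B0 B" and wG: "wf_seq ar G B"
  shows "cut_into ar A H G B"
  unfolding cut_into_def
proof (intro ballI impI)
  fix e0 assume e0: "e0 \<in> gE G" and t: "tp_eq A (glab G e0)"
  obtain f g where iso: "iso_via tp_eq f g G0 G" using iso unfolding giso_rel_iff by blast
  obtain e0' where e0': "e0' \<in> gE G0" "e0 = g e0'" using iso_via_edge_inv[OF iso e0] by blast
  have w0: "wf_seq ar G0 B0" by (rule deriv_wf[OF dG0])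
  have "tp_eq (glab G e0) (glab G0 e0')"
    using tp_eq_sym[OF _ wf_seqD(2)[OF w0 e0'(1)]] iso_via_lab[OF iso e0'(1)] e0' by simp
  then have t': "tp_eq A (glab G0 e0')" using t tp_eq_trans by blast
  have isoH: "iso_via tp_eq id id H H" by (rule iso_via_id[OF wf_graph_H]) (rule tp_eq_refl)
  have "giso_rel tp_eq (repl G0 e0' H) (repl G (g e0') H)"
    by (rule repl_cong[OF iso wf_seqD(1)[OF w0] e0'(1) isoH wf_graph_H arity_H[OF w0 e0'(1) t']])
  then show "HL ar (repl G e0 H) B"
    using deriv_giso_rel[OF _ _ eqB] IH e0'(1) t' e0'(2) unfolding cut_into_def by blast
qed

lemma cut_right_div_right:
  assumes IH: "cut_into ar A H (repl (map_hgraph the D) d0 F) N" and wfd: "wf_tp ar (Div N D)"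
    and d0: "d0 \<in> gE D" "glab D d0 = None" and wF: "wf_seq ar F (Div N D)"
  shows "cut_into ar A H F (Div N D)"
  unfolding cut_into_def
proof (intro ballI impI)
  fix e0 assume e0: "e0 \<in> gE F" and t: "tp_eq A (glab F e0)"
  define Dm where "Dm = map_hgraph the D"
  have wfD: "wf_graph Dm" using wfd unfolding Dm_def by (rule wf_DivE) simp
  have lenF: "length (gext F) = length (gatt Dm d0)"
    using wf_seqD(5)[OF wF] div_dollar(1)[OF wfd d0] unfolding Dm_def by simp
  have "eoff Dm + e0 \<in> gE (repl Dm d0 F)" "tp_eq A (glab (repl Dm d0 F) (eoff Dm + e0))"
    using e0 t by simp_all
  then have "HL ar (repl (repl Dm d0 F) (eoff Dm + e0) H) N"
    using IH unfolding cut_into_def Dm_def by blast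
  moreover have "isomorphic (repl (repl Dm d0 F) (eoff Dm + e0) H) (repl Dm d0 (repl F e0 H))"
    by (rule repl_assoc[OF wfD _ wf_seqD(1)[OF wF] lenF e0 wf_graph_H arity_H[OF wF e0 t]])
      (simp add: Dm_def d0)
  ultimately have "HL ar (repl Dm d0 (repl F e0 H)) N" by (rule deriv_isomorphic)
  then show "HL ar (repl F e0 H) (Div N D)"
    by (rule deriv_div_right[OF _ wfd d0 wf_seq_repl_H[OF wF e0 t], folded Dm_def])
qed

lemma cut_right_times_left:
  assumes IH: "cut_into ar A H (repl G e F) B" and e: "e \<in> gE G" and lab: "glab G e = Times F"
    and wG: "wf_seq ar G B" and dG: "HL ar (repl G e F) B" and PT: "times_principal_cut ar A H"
  shows "cut_into ar A H G B"
  unfolding cut_into_def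
proof (intro ballI impI)
  fix e0 assume e0: "e0 \<in> gE G" and t: "tp_eq A (glab G e0)"
  have wfF: "wf_graph F" and lenF: "length (gext F) = length (gatt G e)"
    using wf_seqD(2,3)[OF wG e] lab by (auto elim: wf_TimesE)
  have fE: "finite (gE G)" using wf_seqD(1)[OF wG] unfolding wf_graph_def by blast
  show "HL ar (repl G e0 H) B"
  proof (cases "e0 = e")
    case True
    then have "tp_eq A (Times F)" using t lab by simp
    then show ?thesis using PT dG e lab wG True unfolding times_principal_cut_def by blast
  next
    case False
    have "HL ar (repl (repl G e F) e0 H) B" using IH e0 False t fE unfolding cut_into_def by auto
    moreover have "isomorphic (repl (repl G e F) e0 H) (repl (repl G e0 H) e F)"
      by (rule repl_commute[OF wf_seqD(1)[OF wG] e e0 _ wfF lenF wf_graph_H arity_H[OF wG e0 t]])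
        (use False in auto)
    ultimately have "HL ar (repl (repl G e0 H) e F) B" by (rule deriv_isomorphic)
    then show ?thesis
      by (rule deriv.times_left) (use e lab False fE wf_seq_repl_H[OF wG e0 t] in auto)
  qed
qed

end

locale cut_div_left = cut_left_premise +
  fixes K :: "'p tp hgraph" and e :: nat and N :: "'p tp" and D :: "'p tp option hgraph" and d0 :: nat
    and ds :: "(nat \<times> 'p tp hgraph) list" and B :: "'p tp"
  assumes deriv_K: "HL ar K B" and e: "e \<in> gE K" and lab_e: "glab K e = N" and wf_div: "wf_tp ar (Div N D)"
    and d0: "d0 \<in> gE D" and dollar: "glab D d0 = None"
    and dis: "distinct (map fst ds)" and ids: "set (map fst ds) = gE D - {d0}"
    and deriv_args: "\<forall>i<length ds. HL ar (snd (ds ! i)) (the (glab D (fst (ds ! i))))"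
    and wf_concl: "wf_seq ar (repls (repl K e (div_graph N D d0)) (shift_edges (eoff K) ds)) B"
begin

abbreviation "Dt \<equiv> div_graph N D d0"
abbreviation "B0 \<equiv> repl K e Dt"
abbreviation "ds' \<equiv> shift_edges (eoff K) ds"

lemma wf_seq_K: "wf_seq ar K B"
  by (rule deriv_wf[OF deriv_K])

lemmas concl_facts = div_left_facts[OF wf_seq_K e lab_e wf_div d0 dollar dis ids deriv_args]
lemmas Dt_facts = div_graph_facts[OF wf_div d0 dollar]

lemma cut_host_edge:
  assumes IH: "cut_into ar A H K B" and k: "e0 \<in> gE K - {e}"
    and e0: "e0 \<in> gE (repls B0 ds')" and t: "tp_eq A (glab (repls B0 ds') e0)"
  shows "HL ar (repl (repls B0 ds') e0 H) B"
proof -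
  have fEK: "finite (gE K)" using wf_seqD(1)[OF wf_seq_K] unfolding wf_graph_def by blast
  have host: "e0 \<in> gE B0 - set (map fst ds')" using k concl_facts(7) ids fEK less_eoff by fastforce
  have labK: "glab (repls B0 ds') e0 = glab K e0" using glab_repls_host[OF concl_facts(3,4,5,6) host] k fEK by simp
  have lenK: "length (gext H) = length (gatt K e0)" using arity_H[OF wf_seq_K] k t labK by auto
  define K' where "K' = repl K e0 H"
  have dK: "HL ar K' B" using IH k t labK unfolding cut_into_def K'_def by auto
  have lenB0: "length (gext H) = length (gatt B0 e0)" using lenK k fEK by simp
  have "isomorphic (repl (repls B0 ds') e0 H) (repls (repl B0 e0 H) ds')"
    by (rule repl_repls_host[OF concl_facts(3,4,5,6)]) (use host wf_graph_H lenB0 in auto)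
  also have "isomorphic \<dots> (repls (repl K' e Dt) (shift_edges (eoff K') ds))"
    unfolding K'_def
    by (rule repl_div_left_other[OF wf_seqD(1)[OF wf_seq_K] e Dt_facts(1) concl_facts(1) dis concl_facts(7)
      concl_facts(2) _ _ wf_graph_H lenK])
      (use k in auto)
  finally have iso: "isomorphic (repl (repls B0 ds') e0 H) (repls (repl K' e Dt) (shift_edges (eoff K') ds))" .
  have eK': "e \<in> gE K'" "glab K' e = N" unfolding K'_def using e lab_e k fEK by auto
  have "HL ar (repls (repl K' e Dt) (shift_edges (eoff K') ds)) B"
    by (rule deriv_div_left[OF dK eK' wf_div d0 dollar dis ids deriv_args])
      (rule wf_seq_isomorphic[OF iso wf_seq_repl_H[OF wf_concl e0 t]])
  then show ?thesis using cut_into_isomorphic[OF iso] by blast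
qed

lemma cut_arg_edge:
  assumes IH: "\<forall>i<length ds. cut_into ar A H (snd (ds ! i)) (the (glab D (fst (ds ! i))))"
    and e0: "e0 \<in> gE (repls B0 ds')" "e0 \<notin> gE B0 - set (map fst ds')"
    and t: "tp_eq A (glab (repls B0 ds') e0)"
  shows "HL ar (repl (repls B0 ds') e0 H) B"
proof -
  obtain j y where j: "j < length ds'" and y: "y \<in> gE (snd (ds' ! j))"
    and labj: "glab (repls B0 ds') e0 = glab (snd (ds' ! j)) y"
    and isoj: "\<And>H'. wf_graph H' \<Longrightarrow> length (gext H') = length (gatt (snd (ds' ! j)) y) \<Longrightarrow>
       isomorphic (repl (repls B0 ds') e0 H') (repls B0 (ds'[j := (fst (ds' ! j), repl (snd (ds' ! j)) y H')]))"
    by (rule repls_part_edge[OF concl_facts(3,4,5,6) e0]) blast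
  have jj: "j < length ds" using j by simp
  have sj: "snd (ds' ! j) = snd (ds ! j)" "fst (ds' ! j) = eoff K + fst (ds ! j)" using jj by simp_all
  have dj: "HL ar (snd (ds ! j)) (the (glab D (fst (ds ! j))))" using deriv_args jj by blast
  have tj: "tp_eq A (glab (snd (ds ! j)) y)" using t labj sj by simp
  have dnew: "HL ar (repl (snd (ds ! j)) y H) (the (glab D (fst (ds ! j))))"
    using IH jj y sj tj unfolding cut_into_def by auto
  define ds2 where "ds2 = ds[j := (fst (ds ! j), repl (snd (ds ! j)) y H)]"
  have lenj: "length (gext H) = length (gatt (snd (ds ! j)) y)"
    by (rule arity_H[OF deriv_wf[OF dj]]) (use y sj tj in auto)
  have iso: "isomorphic (repl (repls B0 ds') e0 H) (repls B0 (shift_edges (eoff K) ds2))"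
    using isoj[OF wf_graph_H] lenj sj unfolding ds2_def by (simp add: shift_edges_list_update)
  have mf: "map fst ds2 = map fst ds" unfolding ds2_def by (rule map_fst_list_update_fst[OF jj])
  have ders2: "\<forall>i<length ds2. HL ar (snd (ds2 ! i)) (the (glab D (fst (ds2 ! i))))"
    unfolding ds2_def using deriv_args dnew jj by (auto simp: nth_list_update)
  have "HL ar (repls B0 (shift_edges (eoff K) ds2)) B"
    by (rule deriv_div_left[OF deriv_K e lab_e wf_div d0 dollar _ _ ders2])
      (use mf dis ids wf_seq_isomorphic[OF iso wf_seq_repl_H[OF wf_concl e0(1) t]] in auto)
  then show ?thesis using cut_into_isomorphic[OF iso] by blast
qed

lemma cut_right_div_left:
  assumes IH_K: "cut_into ar A H K B"
    and IH_args: "\<forall>i<length ds. cut_into ar A H (snd (ds ! i)) (the (glab D (fst (ds ! i))))"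
    and PD: "div_principal_cut ar A H"
  shows "cut_into ar A H (repls B0 ds') B"
  unfolding cut_into_def
proof (intro ballI impI)
  fix e0 assume e0: "e0 \<in> gE (repls B0 ds')" and t: "tp_eq A (glab (repls B0 ds') e0)"
  show "HL ar (repl (repls B0 ds') e0 H) B"
  proof (cases "e0 \<in> gE B0 - set (map fst ds')")
    case True
    then consider (host) "e0 \<in> gE K - {e}" | (principal) d where "d \<in> gE D" "e0 = eoff K + d"
      using Dt_facts(2) by auto
    then show ?thesis
    proof cases
      case host
      then show ?thesis using cut_host_edge[OF IH_K _ e0 t] by blast
    next
      case (principal d)
      have "eoff K + d \<notin> set (map fst ds')" using True principal(2) by simp
      then have "d \<notin> set (map fst ds)" by force
      then have "d = d0" using principal(1) ids by blast
      then have "glab (repls B0 ds') e0 = Div N D"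
        using glab_repls_host[OF concl_facts(3,4,5,6) True] principal Dt_facts(5) by simp
      then show ?thesis
        using PD deriv_K e lab_e wf_div d0 dollar dis ids deriv_args wf_concl t principal \<open>d = d0\<close>
        unfolding div_principal_cut_def by auto
    qed
  next
    case False
    then show ?thesis using cut_arg_edge[OF IH_args e0 _ t] by blast
  qed
qed

end

context cut_left_premise
begin

lemma cut_right_times_right:
  assumes IH: "\<forall>i<length ms. HL ar (snd (ms ! i)) (glab M (fst (ms ! i)))
      \<and> cut_into ar A H (snd (ms ! i)) (glab M (fst (ms ! i)))"
    and dis: "distinct (map fst ms)" and ids: "set (map fst ms) = gE M" and wfM: "wf_tp ar (Times M)"
    and wG: "wf_seq ar (repls M ms) (Times M)"
  shows "cut_into ar A H (repls M ms) (Times M)"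
  unfolding cut_into_def
proof (intro ballI impI)
  fix e0 assume e0: "e0 \<in> gE (repls M ms)" and t: "tp_eq A (glab (repls M ms) e0)"
  have ders: "\<forall>i<length ms. HL ar (snd (ms ! i)) (glab M (fst (ms ! i)))" using IH by blast
  note args = wf_times_args[OF wfM ids ders]
  have "wf_graph M" using wfM by (rule wf_TimesE) blast
  then obtain j y where j: "j < length ms" and y: "y \<in> gE (snd (ms ! j))"
    and labj: "glab (repls M ms) e0 = glab (snd (ms ! j)) y"
    and isoj: "\<And>H'. wf_graph H' \<Longrightarrow> length (gext H') = length (gatt (snd (ms ! j)) y) \<Longrightarrow>
       isomorphic (repl (repls M ms) e0 H') (repls M (ms[j := (fst (ms ! j), repl (snd (ms ! j)) y H')]))"
    by (rule repls_part_edge[OF _ dis _ args e0]) (use ids in auto)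
  have tj: "tp_eq A (glab (snd (ms ! j)) y)" using t labj by simp
  have dnew: "HL ar (repl (snd (ms ! j)) y H) (glab M (fst (ms ! j)))"
    using IH j y tj unfolding cut_into_def by blast
  define ms2 where "ms2 = ms[j := (fst (ms ! j), repl (snd (ms ! j)) y H)]"
  have lenj: "length (gext H) = length (gatt (snd (ms ! j)) y)"
    by (rule arity_H[OF deriv_wf]) (use ders j y tj in auto)
  have iso: "isomorphic (repl (repls M ms) e0 H) (repls M ms2)"
    using isoj[OF wf_graph_H lenj] unfolding ms2_def by simp
  have mf: "map fst ms2 = map fst ms" unfolding ms2_def by (rule map_fst_list_update_fst[OF j])
  have ders2: "\<forall>i<length ms2. HL ar (snd (ms2 ! i)) (glab M (fst (ms2 ! i)))"
    unfolding ms2_def using ders dnew j by (auto simp: nth_list_update)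
  have "HL ar (repls M ms2) (Times M)"
    by (rule deriv.times_right[OF _ _ ders2 wfM refl])
      (use mf dis ids wf_seq_isomorphic[OF iso wf_seq_repl_H[OF wG e0 t]] in auto)
  then show "HL ar (repl (repls M ms) e0 H) (Times M)" using cut_into_isomorphic[OF iso] by blast
qed

text \<open>Once the cut into principal edges is available, a cut of \<open>H\<close> into an arbitrary derivable
  right premise is pushed up its derivation until the cut edge becomes principal.\<close>

lemma cut_right_induction:
  assumes non_prim: "\<forall>p. A \<noteq> Prim p" and PD: "div_principal_cut ar A H" and PT: "times_principal_cut ar A H"
  shows "HL ar G B \<Longrightarrow> cut_into ar A H G B"
proof (induction rule: deriv.induct)
  case (ax p)
  show ?case using non_prim unfolding cut_into_def by (auto elim: tp_eq_PrimE2)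
next
  case (iso G0 B0 G B)
  then show ?case using cut_right_iso by blast
next
  case (div_left K B e N D d0 ds G)
  interpret cut_div_left ar A A1 H K e N D d0 ds B
    using div_left.hyps div_left.IH(2) by unfold_locales (auto simp: div_left_graph_eq div_graph_def)
  show ?case
    using cut_right_div_left[OF div_left.IH(1) _ PD] div_left.IH(2) div_left.hyps(9)
    by (auto simp: div_left_graph_eq div_graph_def)
next
  case (div_right D d0 F N)
  then show ?case using cut_right_div_right by (simp add: div_right_graph_eq)
next
  case (times_left G e F B)
  then show ?case using cut_right_times_left[OF _ _ _ _ _ PT] by blast
next
  case (times_right ms M G)
  then show ?case using cut_right_times_right by blast
qed simp

end

context cut_div_left
begin

text \<open>The principal \<open>(\<div>\<rightarrow>)\<close>/\<open>(\<rightarrow>\<div>)\<close> case: with \<open>H\<close> plugged into the \<open>$\<close>-edge of \<open>D\<close>, the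
  arguments are cut into \<open>D\<close> and the result is cut into \<open>K\<close> at \<open>e\<close>, all at smaller types.\<close>

lemma cut_principal:
  assumes cut_N: "cut_admissible ar N" and cut_D: "\<And>d. d \<in> gE D - {d0} \<Longrightarrow> cut_admissible ar (the (glab D d))"
    and premise: "HL ar (repl Dt d0 H) N" and lenH: "length (gext H) = length (gatt Dt d0)"
  shows "HL ar (repl (repls B0 ds') (eoff K + d0) H) B"
proof -
  have fEt: "finite (gE Dt)" using Dt_facts(1) unfolding wf_graph_def by blast
  have "\<forall>i<length ds. HL ar (snd (ds ! i)) (glab (repl Dt d0 H) (fst (ds ! i)))
      \<and> cut_admissible ar (glab (repl Dt d0 H) (fst (ds ! i)))"
  proof (intro allI impI)
    fix i assume i: "i < length ds"
    have di: "fst (ds ! i) \<in> gE D - {d0}" using ids i by (metis nth_mem length_map nth_map)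
    then have "glab (repl Dt d0 H) (fst (ds ! i)) = the (glab D (fst (ds ! i)))" using Dt_facts(2,6) fEt by simp
    then show "HL ar (snd (ds ! i)) (glab (repl Dt d0 H) (fst (ds ! i)))
        \<and> cut_admissible ar (glab (repl Dt d0 H) (fst (ds ! i)))"
      using deriv_args i cut_D[OF di] by simp
  qed
  then have "HL ar (repls (repl Dt d0 H) ds) N"
    by (intro repls_cut_admissible[OF premise dis]) (use concl_facts(7) ids in auto)
  then have R: "HL ar (repl K e (repls (repl Dt d0 H) ds)) B"
    by (rule cut_admissibleD[OF cut_N _ tp_eq_refl deriv_K e]) (simp add: lab_e tp_eq_refl)
  have "d0 \<notin> set (map fst ds)" using ids by blast
  then have host: "eoff K + d0 \<in> gE B0" "eoff K + d0 \<notin> set (map fst ds')"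
    using d0 Dt_facts(2) by (auto simp: image_iff)
  have "isomorphic (repl (repls B0 ds') (eoff K + d0) H) (repls (repl B0 (eoff K + d0) H) ds')"
    by (rule repl_repls_host[OF concl_facts(3,4,5,6) host wf_graph_H]) (use lenH in simp)
  also have "isomorphic \<dots> (repl K e (repls (repl Dt d0 H) ds))"
    by (rule repl_div_left_principal[OF wf_seqD(1)[OF wf_seq_K] e Dt_facts(1) concl_facts(1) _ dis _ concl_facts(2)
      wf_graph_H lenH])
      (use d0 Dt_facts(2) ids in auto)
  finally show ?thesis using cut_into_isomorphic R by blast
qed

end

lemma cut_admissible_div_parts:
  assumes HD: "\<And>N D. A = Div N D \<Longrightarrow> cut_admissible ar N \<and> (\<forall>d\<in>gE D. \<forall>t. glab D d = Some t \<longrightarrow> cut_admissible ar t)"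
    and tA: "tp_eq A (Div N D)" and wfd: "wf_tp ar (Div N D)" and d0: "d0 \<in> gE D" "glab D d0 = None"
  shows "cut_admissible ar N" "\<And>d. d \<in> gE D - {d0} \<Longrightarrow> cut_admissible ar (the (glab D d))"
proof -
  obtain Na Da where Aeq: "A = Div Na Da" and tNa: "tp_eq Na N" and gDa: "giso_rel (rel_option tp_eq) Da D"
    using tA by (rule tp_eq_DivE2) blast
  have cDa: "\<forall>d\<in>gE Da. \<forall>t. glab Da d = Some t \<longrightarrow> cut_admissible ar t" using HD Aeq by blast
  show "cut_admissible ar N" using HD[OF Aeq] cut_admissible_tp_eq[OF _ tNa] by blast
  obtain fa ga where isoa: "iso_via (rel_option tp_eq) fa ga Da D" using gDa unfolding giso_rel_iff by blast
  fix d assume d: "d \<in> gE D - {d0}"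
  have "glab D d \<noteq> None" using div_dollar(2)[OF wfd d0] d by blast
  then obtain t where t: "glab D d = Some t" by blast
  obtain da where da: "da \<in> gE Da" "d = ga da" using iso_via_edge_inv[OF isoa] d by blast
  have "rel_option tp_eq (glab Da da) (Some t)" using iso_via_lab[OF isoa da(1)] da t by simp
  then obtain ta where ta: "glab Da da = Some ta" "tp_eq ta t" by (cases "glab Da da") auto
  have "cut_admissible ar ta" using cDa da ta by blast
  then show "cut_admissible ar (the (glab D d))" using cut_admissible_tp_eq ta t by simp
qed

lemma deriv_div_premise_iso:
  assumes t2: "tp_eq (Div N1 D1) (Div N D)" and wfD1: "wf_tp ar (Div N1 D1)" and d1: "d1 \<in> gE D1" "glab D1 d1 = None"
    and P1: "HL ar (repl (map_hgraph the D1) d1 F) N1" and wF: "wf_seq ar F (Div N1 D1)"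
    and wfd: "wf_tp ar (Div N D)" and d0: "d0 \<in> gE D" "glab D d0 = None"
  shows "HL ar (repl (div_graph N D d0) d0 F) N"
proof -
  obtain tN1 where tN1: "tp_eq N1 N" and gD1: "giso_rel (rel_option tp_eq) D1 D"
    using t2 by (rule tp_eq_DivE1) blast
  obtain f g where iso1: "iso_via (rel_option tp_eq) f g D1 D" using gD1 unfolding giso_rel_iff by blast
  have gd1: "g d1 = d0"
  proof -
    have "g d1 \<in> gE D" by (rule iso_via_edge[OF iso1 d1(1)])
    moreover have "glab D (g d1) = None" using iso_via_lab[OF iso1 d1(1)] d1(2) by (cases "glab D (g d1)") auto
    ultimately show ?thesis using div_dollar(2)[OF wfd d0] by blast
  qed
  have some: "\<forall>x\<in>gE D1 - {d1}. glab D1 x \<noteq> None" using div_dollar(2)[OF wfD1 d1] by blast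
  define D1r where "D1r = relab (map_hgraph the D1) d1 (Div N D)"
  have iso3: "iso_via tp_eq f g D1r (div_graph N D d0)"
    unfolding D1r_def div_graph_def by (rule iso_via_relab_div[OF iso1 d1(1) gd1 some])
  have wfD1g: "wf_graph D1" using wfD1 by (rule wf_DivE) blast
  have fE1: "finite (gE D1)" using wfD1g unfolding wf_graph_def by blast
  have "iso_via (=) id id (repl (map_hgraph the D1) d1 F) (repl D1r d1 F)"
  proof (rule iso_via_id_eq)
    fix x assume x: "x \<in> gE (repl (map_hgraph the D1) d1 F)"
    show "gatt (repl (map_hgraph the D1) d1 F) x = gatt (repl D1r d1 F) x
        \<and> glab (repl (map_hgraph the D1) d1 F) x = glab (repl D1r d1 F) x"
    proof (cases "x < eoff D1")
      case True
      then have "x \<noteq> d1" using x by auto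
      then show ?thesis using True unfolding D1r_def by (simp add: gatt_repl glab_repl)
    qed (simp add: D1r_def gatt_repl glab_repl)
  qed (simp_all add: D1r_def)
  then have P1': "HL ar (repl D1r d1 F) N1"
    using deriv_giso_rel[OF P1 _ tp_eq_refl] iso_via_mono[of "(=)" id id _ _ tp_eq] tp_eq_refl
    unfolding giso_rel_iff by metis
  have wfFg: "wf_graph F" by (rule wf_seqD(1)[OF wF])
  have isoF: "iso_via tp_eq id id F F" by (rule iso_via_id[OF wfFg]) (rule tp_eq_refl)
  have lenF1: "length (gext F) = length (gatt D1r d1)"
    using wf_seqD(5)[OF wF] div_dollar(1)[OF wfD1 d1] unfolding D1r_def by simp
  have "giso_rel tp_eq (repl D1r d1 F) (repl (div_graph N D d0) (g d1) F)"
    by (rule repl_cong[OF iso3 _ _ isoF wfFg lenF1]) (use wfD1g d1 in \<open>simp_all add: D1r_def\<close>)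
  then show ?thesis using deriv_giso_rel[OF P1' _ tN1] gd1 by simp
qed

lemma div_principal_cut_div_right:
  assumes wfA: "wf_tp ar A"
    and HD: "\<And>N D. A = Div N D \<Longrightarrow> cut_admissible ar N \<and> (\<forall>d\<in>gE D. \<forall>t. glab D d = Some t \<longrightarrow> cut_admissible ar t)"
    and eqA: "tp_eq A (Div N1 D1)" and wfD1: "wf_tp ar (Div N1 D1)" and d1: "d1 \<in> gE D1" "glab D1 d1 = None"
    and P1: "HL ar (repl (map_hgraph the D1) d1 F) N1" and wF: "wf_seq ar F (Div N1 D1)"
  shows "div_principal_cut ar A F"
  unfolding div_principal_cut_def
proof (intro allI impI)
  fix K e N D d0 ds B
  assume "HL ar K B" "e \<in> gE K" "glab K e = N" and wfd: "wf_tp ar (Div N D)"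
    and d0': "d0 \<in> gE D" "glab D d0 = None" and "distinct (map fst ds)" "set (map fst ds) = gE D - {d0}"
    "\<forall>i<length ds. HL ar (snd (ds ! i)) (the (glab D (fst (ds ! i))))"
    "wf_seq ar (repls (repl K e (div_graph N D d0)) (shift_edges (eoff K) ds)) B" and tA: "tp_eq A (Div N D)"
  have HF: "HL ar F (Div N1 D1)" using deriv.div_right[of ar False D1 d1 F N1] P1 wfD1 d1 wF
    by (simp add: div_right_graph_eq)
  interpret cut_div_left ar A "Div N1 D1" F K e N D d0 ds B by unfold_locales fact+
  have t2: "tp_eq (Div N1 D1) (Div N D)" using tp_eq_sym[OF eqA wfA] tA tp_eq_trans by blast
  have "tp_type ar (Div N1 D1) = tp_type ar (Div N D)" using tp_eq_wf[OF t2 wfD1] by simp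
  then have lenF: "length (gext F) = length (gatt (div_graph N D d0) d0)"
    using wf_seqD(5)[OF wF] div_dollar(1)[OF wfd d0'] Dt_facts(3) by simp
  show "HL ar (repl (repls (repl K e (div_graph N D d0)) (shift_edges (eoff K) ds)) (eoff K + d0) F) B"
    by (rule cut_principal[OF cut_admissible_div_parts[OF HD tA wfd d0']
          deriv_div_premise_iso[OF t2 wfD1 d1 P1 wF wfd d0'] lenF])
qed

lemma times_principal_cut_times_right:
  assumes wfA: "wf_tp ar A" and HT: "\<And>M. A = Times M \<Longrightarrow> \<forall>m\<in>gE M. cut_admissible ar (glab M m)"
    and eqA: "tp_eq A (Times M1)" and wfM1: "wf_tp ar (Times M1)"
    and dis: "distinct (map fst ms)" and ids: "set (map fst ms) = gE M1"
    and ders: "\<forall>i<length ms. HL ar (snd (ms ! i)) (glab M1 (fst (ms ! i)))"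
  shows "times_principal_cut ar A (repls M1 ms)"
  unfolding times_principal_cut_def
proof (intro allI impI)
  fix G e0 F B assume dG: "HL ar (repl G e0 F) B" and e0: "e0 \<in> gE G" and lab: "glab G e0 = Times F"
    and wG: "wf_seq ar G B" and tA: "tp_eq A (Times F)"
  obtain Ma where Aeq: "A = Times Ma" and gMa: "giso_rel tp_eq Ma M1" using eqA by (rule tp_eq_TimesE2) blast
  obtain fa ga where isoa: "iso_via tp_eq fa ga Ma M1" using gMa unfolding giso_rel_iff by blast
  have cut_M1: "cut_admissible ar (glab M1 m)" if m: "m \<in> gE M1" for m
  proof -
    obtain ma where ma: "ma \<in> gE Ma" "m = ga ma" using iso_via_edge_inv[OF isoa m] by blast
    have "cut_admissible ar (glab Ma ma)" using HT[OF Aeq] ma by blast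
    then show ?thesis using cut_admissible_tp_eq iso_via_lab[OF isoa ma(1)] ma by simp
  qed
  have t2: "tp_eq (Times F) (Times M1)" using tp_eq_sym[OF tA wfA] eqA tp_eq_trans by blast
  obtain \<phi> \<psi> where isoF: "iso_via tp_eq \<phi> \<psi> F M1"
    using t2 by (rule tp_eq_TimesE1) (auto simp: giso_rel_iff)
  have wfTF: "wf_tp ar (Times F)" using wf_seqD(2)[OF wG e0] lab by simp
  have wfF: "wf_graph F" using wfTF by (rule wf_TimesE) blast
  have lenF: "length (gext F) = length (gatt G e0)" using wf_seqD(3)[OF wG e0] lab by simp
  have wfG: "wf_graph G" by (rule wf_seqD(1)[OF wG])
  have isoG: "iso_via tp_eq id id G G" by (rule iso_via_id[OF wfG]) (rule tp_eq_refl)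
  have "giso_rel tp_eq (repl G e0 F) (repl G (id e0) M1)" by (rule repl_cong[OF isoG wfG e0 isoF wfF lenF])
  then have dM: "HL ar (repl G e0 M1) B" using deriv_giso_rel[OF dG _ tp_eq_refl] by simp
  have "\<forall>i<length ms. HL ar (snd (shift_edges (eoff G) ms ! i)) (glab (repl G e0 M1) (fst (shift_edges (eoff G) ms ! i)))
      \<and> cut_admissible ar (glab (repl G e0 M1) (fst (shift_edges (eoff G) ms ! i)))"
  proof (intro allI impI)
    fix i assume i: "i < length ms"
    then have "fst (ms ! i) \<in> gE M1" using ids by (metis nth_mem length_map nth_map)
    then show "HL ar (snd (shift_edges (eoff G) ms ! i)) (glab (repl G e0 M1) (fst (shift_edges (eoff G) ms ! i)))
        \<and> cut_admissible ar (glab (repl G e0 M1) (fst (shift_edges (eoff G) ms ! i)))"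
      using ders i cut_M1 by simp
  qed
  then have R: "HL ar (repls (repl G e0 M1) (shift_edges (eoff G) ms)) B"
    by (intro repls_cut_admissible[OF dM distinct_shift_edges[OF dis]]) (use ids in auto)
  have wfM1g: "wf_graph M1" using wfM1 by (rule wf_TimesE) blast
  have lenM1: "length (gext M1) = length (gatt G e0)" using tp_eq_wf[OF t2 wfTF] lenF by simp
  have "isomorphic (repls (repl G e0 M1) (shift_edges (eoff G) ms)) (repl G e0 (repls M1 ms))"
    by (rule repl_times_principal[OF wfG e0 wfM1g lenM1 dis _ wf_times_args[OF wfM1 ids ders]])
      (use ids in simp)
  then show "HL ar (repl G e0 (repls M1 ms)) B" using deriv_isomorphic[OF R] by blast
qed

subsection \<open>Induction on the left premise and on the cut type\<close>

definition cut_from :: "('p \<Rightarrow> nat) \<Rightarrow> 'p tp \<Rightarrow> 'p tp hgraph \<Rightarrow> 'p tp \<Rightarrow> bool" where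
"cut_from ar A H A1 \<longleftrightarrow> (tp_eq A A1 \<longrightarrow> (\<forall>G B. HL ar G B \<longrightarrow> cut_into ar A H G B))"

lemma cut_from_axiom:
  assumes "wf_tp ar A"
  shows "cut_from ar A (handle (Prim p) (ar p)) (Prim p)"
  unfolding cut_from_def cut_into_def
proof (intro impI allI ballI)
  fix G B e0 assume t1: "tp_eq A (Prim p)" and dG: "HL ar G B" and e0: "e0 \<in> gE G" and t2: "tp_eq A (glab G e0)"
  have lab: "glab G e0 = Prim p" using t1 t2 by (auto elim: tp_eq_PrimE1 tp_eq_PrimE2)
  have wG: "wf_seq ar G B" by (rule deriv_wf[OF dG])
  have "length (gatt G e0) = ar p" using wf_seqD(3)[OF wG e0] lab by simp
  then show "HL ar (repl G e0 (handle (Prim p) (ar p))) B"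
    using deriv_isomorphic[OF dG repl_handle[OF wf_seqD(1)[OF wG] e0 lab]] by blast
qed

lemma cut_from_iso:
  assumes wfA: "wf_tp ar A" and IH: "cut_from ar A H0 A0" and dH0: "HL ar H0 A0"
    and iso: "giso_rel tp_eq H0 H" and eq: "tp_eq A0 A1"
  shows "cut_from ar A H A1"
  unfolding cut_from_def cut_into_def
proof (intro impI allI ballI)
  fix G B e0 assume t1: "tp_eq A A1" and dG: "HL ar G B" and e0: "e0 \<in> gE G" and t2: "tp_eq A (glab G e0)"
  have w0: "wf_seq ar H0 A0" by (rule deriv_wf[OF dH0])
  have t0: "tp_eq A A0" using t1 tp_eq_sym[OF eq wf_seqD(4)[OF w0]] tp_eq_trans by blast
  have d0: "HL ar (repl G e0 H0) B" using IH t0 dG e0 t2 unfolding cut_from_def cut_into_def by blast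
  have wG: "wf_seq ar G B" by (rule deriv_wf[OF dG])
  have isoG: "iso_via tp_eq id id G G" by (rule iso_via_id[OF wf_seqD(1)[OF wG]]) (rule tp_eq_refl)
  obtain f g where isoH: "iso_via tp_eq f g H0 H" using iso unfolding giso_rel_iff by blast
  have len: "length (gext H0) = length (gatt G e0)"
    using wf_seqD(5)[OF w0] tp_eq_tp_type[OF wfA t0 t2] wf_seqD(3)[OF wG e0] by simp
  have "giso_rel tp_eq (repl G e0 H0) (repl G (id e0) H)"
    by (rule repl_cong[OF isoG wf_seqD(1)[OF wG] e0 isoH wf_seqD(1)[OF w0] len])
  then show "HL ar (repl G e0 H) B" using deriv_giso_rel[OF d0 _ tp_eq_refl] by simp
qed

lemma cut_from_div_left:
  assumes wfA: "wf_tp ar A" and IH: "cut_from ar A K A1" and dK: "HL ar K A1" and e: "e \<in> gE K"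
    and lab: "glab K e = N" and wfd: "wf_tp ar (Div N D)" and d0: "d0 \<in> gE D" "glab D d0 = None"
    and dis: "distinct (map fst ds)" and ids: "set (map fst ds) = gE D - {d0}"
    and ders: "\<forall>i<length ds. HL ar (snd (ds ! i)) (the (glab D (fst (ds ! i))))"
    and wH: "wf_seq ar (repls (repl K e (div_graph N D d0)) (shift_edges (eoff K) ds)) A1"
  shows "cut_from ar A (repls (repl K e (div_graph N D d0)) (shift_edges (eoff K) ds)) A1"
  unfolding cut_from_def cut_into_def
proof (intro impI allI ballI)
  fix G B e0 assume t1: "tp_eq A A1" and dG: "HL ar G B" and e0: "e0 \<in> gE G" and t2: "tp_eq A (glab G e0)"
  define Dt H where "Dt = div_graph N D d0" and "H = repls (repl K e Dt) (shift_edges (eoff K) ds)"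
  have wK: "wf_seq ar K A1" by (rule deriv_wf[OF dK])
  note concl_facts = div_left_facts[OF wK e lab wfd d0 dis ids ders, folded Dt_def]
  note Dt_facts = div_graph_facts[OF wfd d0, folded Dt_def]
  have wG: "wf_seq ar G B" by (rule deriv_wf[OF dG])
  define K' where "K' = repl G e0 K"
  have dK': "HL ar K' B" using IH t1 dG e0 t2 unfolding cut_from_def cut_into_def K'_def by blast
  have lenK: "length (gext K) = length (gatt G e0)"
    using wf_seqD(5)[OF wK] tp_eq_tp_type[OF wfA t1 t2] wf_seqD(3)[OF wG e0] by simp
  have iso: "isomorphic (repl G e0 H) (repls (repl K' (eoff G + e) Dt) (shift_edges (eoff K') ds))"
    unfolding H_def K'_def
    by (rule repl_into_div_left[OF wf_seqD(1)[OF wG] e0 wf_seqD(1)[OF wK] lenK e Dt_facts(1) concl_facts(1) dis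
      concl_facts(7) concl_facts(2)])
  have wR: "wf_seq ar (repl G e0 H) B"
    by (rule wf_seq_repl[OF wG e0 wH[folded Dt_def, folded H_def]])
      (use tp_eq_tp_type[OF wfA t1 t2] wf_seqD(3)[OF wG e0] in simp)
  have eK': "eoff G + e \<in> gE K'" "glab K' (eoff G + e) = N" unfolding K'_def using e lab by auto
  have "HL ar (repls (repl K' (eoff G + e) Dt) (shift_edges (eoff K') ds)) B"
    unfolding Dt_def by (rule deriv_div_left[OF dK' eK' wfd d0 dis ids ders])
      (rule wf_seq_isomorphic[OF iso wR, unfolded Dt_def])
  then show "HL ar (repl G e0 (repls (repl K e (div_graph N D d0)) (shift_edges (eoff K) ds))) B"
    using deriv_isomorphic isomorphic_sym[OF iso] unfolding H_def Dt_def by blast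
qed

lemma cut_from_times_left:
  assumes wfA: "wf_tp ar A" and IH: "cut_from ar A (repl H e F) A1" and e: "e \<in> gE H"
    and lab: "glab H e = Times F" and wH: "wf_seq ar H A1"
  shows "cut_from ar A H A1"
  unfolding cut_from_def cut_into_def
proof (intro impI allI ballI)
  fix G B e0 assume t1: "tp_eq A A1" and dG: "HL ar G B" and e0: "e0 \<in> gE G" and t2: "tp_eq A (glab G e0)"
  have wfF: "wf_graph F" and lenF: "length (gext F) = length (gatt H e)"
    using wf_seqD(2,3)[OF wH e] lab by (auto elim: wf_TimesE)
  have wG: "wf_seq ar G B" by (rule deriv_wf[OF dG])
  have lenH: "length (gext H) = length (gatt G e0)"
    using wf_seqD(5)[OF wH] tp_eq_tp_type[OF wfA t1 t2] wf_seqD(3)[OF wG e0] by simp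
  have "HL ar (repl G e0 (repl H e F)) B" using IH t1 dG e0 t2 unfolding cut_from_def cut_into_def by blast
  moreover have "isomorphic (repl (repl G e0 H) (eoff G + e) F) (repl G e0 (repl H e F))"
    by (rule repl_assoc[OF wf_seqD(1)[OF wG] e0 wf_seqD(1)[OF wH] lenH e wfF lenF])
  ultimately have "HL ar (repl (repl G e0 H) (eoff G + e) F) B" using deriv_isomorphic isomorphic_sym by blast
  moreover have "wf_seq ar (repl G e0 H) B"
    by (rule wf_seq_repl[OF wG e0 wH]) (use tp_eq_tp_type[OF wfA t1 t2] wf_seqD(3)[OF wG e0] in simp)
  ultimately show "HL ar (repl G e0 H) B"
    by (intro deriv.times_left[of ar False "repl G e0 H" "eoff G + e" F B]) (use e lab in auto)
qed

lemma cut_from_principal: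
  assumes wfA: "wf_tp ar A" and dH: "HL ar H A1" and non_prim: "\<forall>p. A1 \<noteq> Prim p"
    and PD: "tp_eq A A1 \<Longrightarrow> div_principal_cut ar A H" and PT: "tp_eq A A1 \<Longrightarrow> times_principal_cut ar A H"
  shows "cut_from ar A H A1"
  unfolding cut_from_def
proof (intro impI allI)
  fix G B assume t1: "tp_eq A A1" and "HL ar G B"
  interpret cut_left_premise ar A A1 H by unfold_locales (rule wfA dH t1)+
  have "\<forall>p. A \<noteq> Prim p" using t1 non_prim by (auto elim: tp_eq_PrimE1)
  then show "cut_into ar A H G B" using cut_right_induction PD[OF t1] PT[OF t1] \<open>HL ar G B\<close> by blast
qed

lemma cut_admissible_intro:
  assumes wfA: "wf_tp ar A"
    and HD: "\<And>N D. A = Div N D \<Longrightarrow> cut_admissible ar N \<and> (\<forall>d\<in>gE D. \<forall>t. glab D d = Some t \<longrightarrow> cut_admissible ar t)"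
    and HT: "\<And>M. A = Times M \<Longrightarrow> \<forall>m\<in>gE M. cut_admissible ar (glab M m)"
  shows "cut_admissible ar A"
proof -
  have "HL ar H A1 \<Longrightarrow> cut_from ar A H A1" for H A1
  proof (induction rule: deriv.induct)
    case (ax p)
    show ?case by (rule cut_from_axiom[OF wfA])
  next
    case (iso H0 A0 H A1)
    then show ?case using cut_from_iso[OF wfA] by blast
  next
    case (div_left K A1 e N D d0 ds H)
    then show ?case using cut_from_div_left[OF wfA] by (auto simp: div_left_graph_eq div_graph_def)
  next
    case (div_right D1 d1 F N1)
    have P1: "HL ar (repl (map_hgraph the D1) d1 F) N1" using div_right.hyps(1) by (simp add: div_right_graph_eq)
    show ?case
      by (rule cut_from_principal[OF wfA deriv.div_right[OF div_right.hyps]])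
        (auto elim: tp_eq_DivE2 tp_eq_TimesE2 simp: times_principal_cut_def
          intro: div_principal_cut_div_right[OF wfA HD _ div_right.hyps(2-4) P1 div_right.hyps(5)])
  next
    case (times_left H e F A1)
    then show ?case using cut_from_times_left[OF wfA] by blast
  next
    case (times_right ms M1 H)
    have ders: "\<forall>i<length ms. HL ar (snd (ms ! i)) (glab M1 (fst (ms ! i)))" using times_right.IH by blast
    show ?case
      by (rule cut_from_principal[OF wfA deriv.times_right[OF times_right.hyps(1,2) ders times_right.hyps(3-5)]])
        (auto elim: tp_eq_DivE2 tp_eq_TimesE2 simp: div_principal_cut_def times_right.hyps(4)
          intro: times_principal_cut_times_right[OF wfA HT _ times_right.hyps(3,1,2) ders])
  qed simp
  then show ?thesis unfolding cut_admissible_def cut_from_def by blast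
qed

lemma cut_admissible_all: "wf_tp ar A \<Longrightarrow> cut_admissible ar A"
proof (induction A)
  case (Prim p)
  show ?case by (rule cut_admissible_intro[OF Prim.prems]) auto
next
  case (Div N D)
  obtain d0 where d0: "d0 \<in> gE D" "glab D d0 = None" and wfN: "wf_tp ar N"
    and oth: "\<forall>d\<in>gE D - {d0}. \<exists>t. glab D d = Some t \<and> wf_tp ar t \<and> tp_type ar t = length (gatt D d)"
    using Div.prems by (rule wf_DivE) blast
  show ?case
  proof (rule cut_admissible_intro[OF Div.prems])
    fix N' D' assume eq: "Div N D = Div N' D'"
    have "cut_admissible ar N" using Div.IH(1) wfN by blast
    moreover have "\<forall>d\<in>gE D. \<forall>t. glab D d = Some t \<longrightarrow> cut_admissible ar t"
    proof (intro ballI allI impI)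
      fix d t assume d: "d \<in> gE D" and t: "glab D d = Some t"
      have "d \<noteq> d0" using d0 t by auto
      then obtain t' where "glab D d = Some t'" "wf_tp ar t'" using oth d by blast
      then have "wf_tp ar t" using t by simp
      moreover have "Some t \<in> set_hgraph D" using t by (cases D) (auto simp: image_iff, metis)
      ultimately show "cut_admissible ar t" using Div.IH(2) by auto
    qed
    ultimately show "cut_admissible ar N' \<and> (\<forall>d\<in>gE D'. \<forall>t. glab D' d = Some t \<longrightarrow> cut_admissible ar t)" using eq by simp
  qed simp
next
  case (Times M)
  have oth: "\<forall>m\<in>gE M. wf_tp ar (glab M m) \<and> tp_type ar (glab M m) = length (gatt M m)"
    using Times.prems by (rule wf_TimesE) blast
  show ?case
  proof (rule cut_admissible_intro[OF Times.prems])
    fix M' assume eq: "Times M = Times M'"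
    have "\<forall>m\<in>gE M. cut_admissible ar (glab M m)"
    proof
      fix m assume m: "m \<in> gE M"
      have "glab M m \<in> set_hgraph M" by (cases M) auto
      then show "cut_admissible ar (glab M m)" using Times.IH oth m by blast
    qed
    then show "\<forall>m\<in>gE M'. cut_admissible ar (glab M' m)" using eq by simp
  qed simp
qed

lemma cut_elimination: "deriv ar c F B \<Longrightarrow> HL ar F B"
proof (induction rule: deriv.induct)
  case (ax p) then show ?case by (rule deriv.ax)
next
  case (iso H A H' A') show ?case by (rule deriv.iso[OF iso.IH iso.hyps(2,3,4)])
next
  case (div_left H A e N D d0 ds G)
  have "\<forall>i<length ds. HL ar (snd (ds ! i)) (the (glab D (fst (ds ! i))))" using div_left.IH(2) by blast
  then show ?case by (rule deriv.div_left[OF div_left.IH(1) div_left.hyps(2-8) _ div_left.hyps(9,10)])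
next
  case (div_right D d0 F N) show ?case by (rule deriv.div_right[OF div_right.IH div_right.hyps(2-5)])
next
  case (times_left G e F A) show ?case by (rule deriv.times_left[OF times_left.IH times_left.hyps(2-4)])
next
  case (times_right ms M G)
  have "\<forall>i<length ms. HL ar (snd (ms ! i)) (glab M (fst (ms ! i)))" using times_right.IH by blast
  then show ?case by (rule deriv.times_right[OF times_right.hyps(1,2) _ times_right.hyps(3-5)])
next
  case (cut_rule H A G B e0)
  have "cut_admissible ar A" by (rule cut_admissible_all[OF wf_seqD(4)[OF deriv_wf[OF cut_rule.IH(1)]]])
  then show ?case using cut_admissibleD[OF _ cut_rule.IH(1) tp_eq_refl cut_rule.IH(2) cut_rule.hyps(4)]
    cut_rule.hyps(5) tp_eq_refl by blast
qed

theorem theorem6: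
  fixes ar :: "'p \<Rightarrow> nat" and F :: "'p tp hgraph" and B :: "'p tp"
  assumes "\<forall>n. infinite {p. ar p = n}"
    and "wf_seq ar F B"
    and "HL_cut ar F B"
  shows "HL ar F B"
  by (rule cut_elimination[OF assms(3)])

end
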